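(* Let $A=\mathbb{C}Q/I$ be a toupie algebra with $a>0$ and $D>1$. Then $$\mathrm{HH}^1(A)=(L\oplus\langle C''_1\rangle)\rtimes\mathfrak{sl}_a(\mathbb{C}),$$ where $L=\langle t_h, z_{us}: 1\le h\le r,\ 1\le u\le a,\ \alpha^{(s)}\in{}_0\mathcal{B}_\omega\setminus Z\rangle$, $\langle C''_1\rangle$ is the span of the $y_i$, and $\mathfrak{sl}_a(\mathbb{C})$ is identified with the span of the $x_j$ and $w_{pq}$.
   Context: A finite quiver $Q$ is a toupie quiver if it has a unique source $0$, a unique sink $\omega$, and every other vertex is the source of exactly one arrow and the target of exactly one arrow. Paths are composed left to right. A branch is a path from $0$ to $\omega$, with arrows $\alpha^i_0,\alpha^i_1,\dots$, $\alpha^i_0$ starting at $0$. A toupie algebra is $A=\mathbb{C}Q/I$ with $Q$ toupie and $I$ an admissible ideal generated by monomial relations (paths inside one branch) and non-monomial relations (linear combinations of branches), the latter in reduced row echelon form $\rho_i=\alpha^{(k_i)}+\sum_{j>k_i}b_{ij}\alpha^{(j)}$. $Z=\{\alpha^{(1)},\dots,\alpha^{(a)}\}$ is the set of arrows from $0$ to $\omega$, $D=\dim e_0Ae_\omega$, $E=\mathbb{C}Q_0$, ${}_0\mathcal{B}_\omega$ the set of classes of branches containing no monomial relation and different from all $\alpha^{(k_i)}$. $Q_\rho$ is the graph whose vertices are branches of length $\ge2$ with no monomial relation, an edge joining two of them if some $\rho_i$ involves both; $Q_\rho^1,\dots,Q_\rho^r$ its components. $\gamma\|h$ is the derivation of $A$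 vanishing on $E$ sending the arrow $\gamma$ to $h$, other arrows to $0$; $\mathrm{HH}^1(A)$ (derivations vanishing on $E$ modulo inner ones) is a Lie algebra under the Gerstenhaber bracket. Classes: $y_i=\alpha^i_0\|\alpha^i_0$ for branches with monomial relations; $w_{pq}=\alpha^{(p)}\|\alpha^{(q)}$ ($p\ne q\le a$); $z_{us}=\alpha^{(u)}\|\alpha^{(s)}$; $x_j=\alpha^{(j)}\|\alpha^{(j)}-\alpha^{(1)}\|\alpha^{(1)}$ ($2\le j\le a$); $t_k=\sum_{\alpha^{(i)}\in Q_\rho^k}\alpha^i_0\|\alpha^i_0$. The span of the $x_j,w_{pq}$ is identified with $\mathfrak{sl}_a(\mathbb{C})$ via $w_{pq}\mapsto E_{qp}$, $x_j\mapsto E_{jj}-E_{11}$. *)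

theory Defs
  imports Complex_Main
begin

text \<open>A toupie quiver is encoded by its branches: branches are indexed by 1..m,
branch i has len i arrows alpha^i_0, ..., alpha^i_(len i - 1).
Positions 0..len i along branch i are vertices: position 0 is the source 0,
position len i is the sink omega, the others are the internal vertices Ein i j.
Pth i j k (j < k) is the path alpha^i_j ... alpha^i_(k-1) (paths composed left to right).\<close>

datatype qpath = E0 | Ew | Ein nat nat | Pth nat nat nat

type_synonym cq = "qpath \<Rightarrow> complex"
type_synonym cqmap = "cq \<Rightarrow> cq"

definition vpos :: "(nat \<Rightarrow> nat) \<Rightarrow> nat \<Rightarrow> nat \<Rightarrow> qpath" where
  "vpos len i j = (if j = 0 then E0 else if j = len i then Ew else Ein i j)"

fun qsrc :: "(nat \<Rightarrow> nat) \<Rightarrow> qpath \<Rightarrow> qpath" where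
  "qsrc len (Pth i j k) = vpos len i j"
| "qsrc len p = p"

fun qtgt :: "(nat \<Rightarrow> nat) \<Rightarrow> qpath \<Rightarrow> qpath" where
  "qtgt len (Pth i j k) = vpos len i k"
| "qtgt len p = p"

fun is_triv :: "qpath \<Rightarrow> bool" where
  "is_triv (Pth i j k) = False"
| "is_triv p = True"

fun qlen :: "qpath \<Rightarrow> nat" where
  "qlen (Pth i j k) = k - j"
| "qlen p = 0"

text \<open>Concatenation of paths (left to right); None means the product is zero.\<close>
definition qmul :: "(nat \<Rightarrow> nat) \<Rightarrow> qpath \<Rightarrow> qpath \<Rightarrow> qpath option" where
  "qmul len p q =
    (if qtgt len p \<noteq> qsrc len q then None
     else if is_triv p then Some q
     else if is_triv q then Some p
     else (case (p, q) of
             (Pth i j k, Pth i' j' k') \<Rightarrow> if i = i' \<and> k = j' then Some (Pth i j k') else None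
           | _ \<Rightarrow> None))"

definition qvertices :: "nat \<Rightarrow> (nat \<Rightarrow> nat) \<Rightarrow> qpath set" where
  "qvertices m len = {E0, Ew} \<union> {Ein i j | i j. i \<in> {1..m} \<and> 0 < j \<and> j < len i}"

definition qpaths :: "nat \<Rightarrow> (nat \<Rightarrow> nat) \<Rightarrow> qpath set" where
  "qpaths m len = qvertices m len \<union> {Pth i j k | i j k. i \<in> {1..m} \<and> j < k \<and> k \<le> len i}"

definition cq_elems :: "nat \<Rightarrow> (nat \<Rightarrow> nat) \<Rightarrow> cq set" where
  "cq_elems m len = {f. \<forall>r. f r \<noteq> 0 \<longrightarrow> r \<in> qpaths m len}"

definition cq_mul :: "nat \<Rightarrow> (nat \<Rightarrow> nat) \<Rightarrow> cq \<Rightarrow> cq \<Rightarrow> cq" where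
  "cq_mul m len f g = (\<lambda>r. \<Sum>p\<in>qpaths m len. \<Sum>q\<in>qpaths m len.
      if qmul len p q = Some r then f p * g q else 0)"

definition pt :: "qpath \<Rightarrow> cq" where
  "pt p = (\<lambda>r. if r = p then 1 else 0)"

definition seg :: "(nat \<Rightarrow> nat) \<Rightarrow> nat \<Rightarrow> nat \<Rightarrow> nat \<Rightarrow> qpath" where
  "seg len i j k = (if j = k then vpos len i j else Pth i j k)"

text \<open>The derivation gamma||h of CQ vanishing on E, where gamma = alpha^i_l
(the arrow Pth i l (l+1)): it sends gamma to h and every other arrow to 0.
On a path beta_1...beta_n it is the sum over the occurrences of gamma of
beta_1...beta_(t-1) h beta_(t+1)...beta_n (in a toupie quiver gamma occurs at most once).\<close>
definition arrder :: "nat \<Rightarrow> (nat \<Rightarrow> nat) \<Rightarrow> nat \<Rightarrow> nat \<Rightarrow> cq \<Rightarrow> cqmap" where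
  "arrder m len i l h f = (\<lambda>r. \<Sum>p\<in>qpaths m len. f p *
     (case p of
        Pth i' j k \<Rightarrow> if i' = i \<and> j \<le> l \<and> l < k
                      then cq_mul m len (cq_mul m len (pt (seg len i j l)) h) (pt (seg len i (l+1) k)) r
                      else 0
      | _ \<Rightarrow> 0))"

inductive_set gen_ideal :: "nat \<Rightarrow> (nat \<Rightarrow> nat) \<Rightarrow> cq set \<Rightarrow> cq set"
  for m len G where
  gen: "g \<in> G \<Longrightarrow> g \<in> gen_ideal m len G"
| zero: "(\<lambda>r. 0) \<in> gen_ideal m len G"
| add: "f \<in> gen_ideal m len G \<Longrightarrow> g \<in> gen_ideal m len G \<Longrightarrow> (\<lambda>r. f r + g r) \<in> gen_ideal m len G"
| smult: "f \<in> gen_ideal m len G \<Longrightarrow> (\<lambda>r. c * f r) \<in> gen_ideal m len G"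
| lmult: "f \<in> gen_ideal m len G \<Longrightarrow> u \<in> cq_elems m len \<Longrightarrow> cq_mul m len u f \<in> gen_ideal m len G"
| rmult: "f \<in> gen_ideal m len G \<Longrightarrow> u \<in> cq_elems m len \<Longrightarrow> cq_mul m len f u \<in> gen_ideal m len G"

text \<open>Powers of the arrow ideal: combinations of paths of length at least n.\<close>
definition arrow_pow :: "nat \<Rightarrow> (nat \<Rightarrow> nat) \<Rightarrow> nat \<Rightarrow> cq set" where
  "arrow_pow m len n = {f \<in> cq_elems m len. \<forall>r. f r \<noteq> 0 \<longrightarrow> n \<le> qlen r}"

definition admissible :: "nat \<Rightarrow> (nat \<Rightarrow> nat) \<Rightarrow> cq set \<Rightarrow> bool" where
  "admissible m len I \<longleftrightarrow> (\<exists>N\<ge>2. arrow_pow m len N \<subseteq> I) \<and> I \<subseteq> arrow_pow m len 2"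

definition branchvec :: "nat \<Rightarrow> (nat \<Rightarrow> nat) \<Rightarrow> (nat \<Rightarrow> complex) \<Rightarrow> cq" where
  "branchvec m len b = (\<lambda>r. \<Sum>i\<in>{1..m}. if r = Pth i 0 (len i) then b i else 0)"

definition has_mon :: "qpath set \<Rightarrow> nat \<Rightarrow> bool" where
  "has_mon Mon i \<longleftrightarrow> (\<exists>j k. Pth i j k \<in> Mon)"

definition piv :: "(nat \<Rightarrow> complex) \<Rightarrow> nat" where
  "piv b = (LEAST j. b j \<noteq> 0)"

definition toupie_ideal :: "nat \<Rightarrow> (nat \<Rightarrow> nat) \<Rightarrow> qpath set \<Rightarrow> (nat \<Rightarrow> complex) list \<Rightarrow> cq set" where
  "toupie_ideal m len Mon rho = gen_ideal m len (pt ` Mon \<union> branchvec m len ` set rho)"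

text \<open>Toupie algebra data: m branches, branch lengths len, the first a branches are
exactly the arrows from 0 to omega (Z = {alpha^(1),...,alpha^(a)}), Mon the monomial
relations (paths inside one branch), rho the non-monomial relations (linear combinations
of branches) in reduced row echelon form, the ideal they generate being admissible.\<close>
definition toupie :: "nat \<Rightarrow> (nat \<Rightarrow> nat) \<Rightarrow> nat \<Rightarrow> qpath set \<Rightarrow> (nat \<Rightarrow> complex) list \<Rightarrow> bool" where
  "toupie m len a Mon rho \<longleftrightarrow>
     1 \<le> m \<and> a \<le> m \<and>
     (\<forall>i\<in>{1..m}. 1 \<le> len i) \<and>
     (\<forall>i\<in>{1..m}. len i = 1 \<longleftrightarrow> i \<le> a) \<and>
     Mon \<subseteq> {Pth i j k | i j k. i \<in> {1..m} \<and> j < k \<and> k \<le> len i} \<and>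
     (\<forall>b\<in>set rho.
        (\<forall>i. b i \<noteq> 0 \<longrightarrow> i \<in> {1..m} \<and> 2 \<le> len i \<and> \<not> has_mon Mon i) \<and>
        2 \<le> card {i. b i \<noteq> 0} \<and>
        b (piv b) = 1) \<and>
     sorted_wrt (<) (map piv rho) \<and>
     (\<forall>t<length rho. \<forall>t'<length rho. t \<noteq> t' \<longrightarrow> (rho ! t') (piv (rho ! t)) = 0) \<and>
     admissible m len (toupie_ideal m len Mon rho)"

definition e0_cq_ew :: "nat \<Rightarrow> (nat \<Rightarrow> nat) \<Rightarrow> cq set" where
  "e0_cq_ew m len = {f \<in> cq_elems m len. \<forall>r. f r \<noteq> 0 \<longrightarrow> (\<exists>i\<in>{1..m}. r = Pth i 0 (len i))}"

definition indep_mod :: "cq set \<Rightarrow> cq list \<Rightarrow> bool" where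
  "indep_mod I vs \<longleftrightarrow>
     (\<forall>c::nat \<Rightarrow> complex. (\<lambda>r. \<Sum>t<length vs. c t * (vs ! t) r) \<in> I \<longrightarrow> (\<forall>t<length vs. c t = 0))"

text \<open>dim (e_0 CQ e_omega + I)/I = dim e_0 A e_omega.\<close>
definition dim_e0Aw :: "nat \<Rightarrow> (nat \<Rightarrow> nat) \<Rightarrow> cq set \<Rightarrow> nat" where
  "dim_e0Aw m len I = Sup {n. \<exists>vs. length vs = n \<and> set vs \<subseteq> e0_cq_ew m len \<and> indep_mod I vs}"

text \<open>A derivation of A vanishing on E is represented by a linear lift d : CQ -> CQ
with d(I) in I; two lifts represent the same derivation iff they agree modulo I.\<close>
definition is_Ederiv :: "nat \<Rightarrow> (nat \<Rightarrow> nat) \<Rightarrow> cq set \<Rightarrow> cqmap \<Rightarrow> bool" where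
  "is_Ederiv m len I d \<longleftrightarrow>
     (\<forall>f\<in>cq_elems m len. d f \<in> cq_elems m len) \<and>
     (\<forall>f\<in>cq_elems m len. \<forall>g\<in>cq_elems m len. d (\<lambda>r. f r + g r) = (\<lambda>r. d f r + d g r)) \<and>
     (\<forall>c. \<forall>f\<in>cq_elems m len. d (\<lambda>r. c * f r) = (\<lambda>r. c * d f r)) \<and>
     (\<forall>f\<in>I. d f \<in> I) \<and>
     (\<forall>f\<in>cq_elems m len. \<forall>g\<in>cq_elems m len.
        (\<lambda>r. d (cq_mul m len f g) r - (cq_mul m len (d f) g r + cq_mul m len f (d g) r)) \<in> I) \<and>
     (\<forall>v\<in>qvertices m len. d (pt v) \<in> I)"

definition hh_zero :: "nat \<Rightarrow> (nat \<Rightarrow> nat) \<Rightarrow> cq set \<Rightarrow> cqmap \<Rightarrow> bool" where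
  "hh_zero m len I d \<longleftrightarrow>
     (\<exists>c\<in>cq_elems m len.
        (\<forall>v\<in>qvertices m len. (\<lambda>r. cq_mul m len c (pt v) r - cq_mul m len (pt v) c r) \<in> I) \<and>
        (\<forall>f\<in>cq_elems m len. (\<lambda>r. d f r - (cq_mul m len c f r - cq_mul m len f c r)) \<in> I))"

definition hh_eq :: "nat \<Rightarrow> (nat \<Rightarrow> nat) \<Rightarrow> cq set \<Rightarrow> cqmap \<Rightarrow> cqmap \<Rightarrow> bool" where
  "hh_eq m len I d d' \<longleftrightarrow> hh_zero m len I (\<lambda>f r. d f r - d' f r)"

definition dadd :: "cqmap \<Rightarrow> cqmap \<Rightarrow> cqmap" where
  "dadd d d' = (\<lambda>f r. d f r + d' f r)"

text \<open>Gerstenhaber bracket of 1-cochains: the commutator.\<close>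
definition dbracket :: "cqmap \<Rightarrow> cqmap \<Rightarrow> cqmap" where
  "dbracket d d' = (\<lambda>f r. d (d' f) r - d' (d f) r)"

definition dspan :: "cqmap set \<Rightarrow> cqmap set" where
  "dspan S = {(\<lambda>f r. \<Sum>s\<in>F. c s * s f r) | F c. finite F \<and> F \<subseteq> S}"

definition first_diag :: "nat \<Rightarrow> (nat \<Rightarrow> nat) \<Rightarrow> nat \<Rightarrow> cqmap" where
  "first_diag m len i = arrder m len i 0 (pt (Pth i 0 1))"

definition ygens :: "nat \<Rightarrow> (nat \<Rightarrow> nat) \<Rightarrow> qpath set \<Rightarrow> cqmap set" where
  "ygens m len Mon = {first_diag m len i | i. i \<in> {1..m} \<and> has_mon Mon i}"

definition wder :: "nat \<Rightarrow> (nat \<Rightarrow> nat) \<Rightarrow> nat \<Rightarrow> nat \<Rightarrow> cqmap" where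
  "wder m len p q = arrder m len p 0 (pt (Pth q 0 1))"

definition xder :: "nat \<Rightarrow> (nat \<Rightarrow> nat) \<Rightarrow> nat \<Rightarrow> cqmap" where
  "xder m len j = (\<lambda>f r. wder m len j j f r - wder m len 1 1 f r)"

definition zder :: "nat \<Rightarrow> (nat \<Rightarrow> nat) \<Rightarrow> nat \<Rightarrow> nat \<Rightarrow> cqmap" where
  "zder m len u s = arrder m len u 0 (pt (Pth s 0 (len s)))"

definition B0w :: "nat \<Rightarrow> (nat \<Rightarrow> nat) \<Rightarrow> qpath set \<Rightarrow> (nat \<Rightarrow> complex) list \<Rightarrow> nat set" where
  "B0w m len Mon rho = {s \<in> {1..m}. \<not> has_mon Mon s \<and> s \<notin> piv ` set rho}"

definition qrho_verts :: "nat \<Rightarrow> (nat \<Rightarrow> nat) \<Rightarrow> qpath set \<Rightarrow> nat set" where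
  "qrho_verts m len Mon = {i \<in> {1..m}. 2 \<le> len i \<and> \<not> has_mon Mon i}"

definition qrho_edge :: "nat \<Rightarrow> (nat \<Rightarrow> nat) \<Rightarrow> qpath set \<Rightarrow> (nat \<Rightarrow> complex) list \<Rightarrow> nat \<Rightarrow> nat \<Rightarrow> bool" where
  "qrho_edge m len Mon rho i i' \<longleftrightarrow>
     i \<in> qrho_verts m len Mon \<and> i' \<in> qrho_verts m len Mon \<and> (\<exists>b\<in>set rho. b i \<noteq> 0 \<and> b i' \<noteq> 0)"

definition qrho_comps :: "nat \<Rightarrow> (nat \<Rightarrow> nat) \<Rightarrow> qpath set \<Rightarrow> (nat \<Rightarrow> complex) list \<Rightarrow> nat set set" where
  "qrho_comps m len Mon rho =
     {{i' \<in> qrho_verts m len Mon. (qrho_edge m len Mon rho)\<^sup>*\<^sup>* i i'} | i. i \<in> qrho_verts m len Mon}"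

definition tder :: "nat \<Rightarrow> (nat \<Rightarrow> nat) \<Rightarrow> nat set \<Rightarrow> cqmap" where
  "tder m len C = (\<lambda>f r. \<Sum>i\<in>C. first_diag m len i f r)"

definition Lgens :: "nat \<Rightarrow> (nat \<Rightarrow> nat) \<Rightarrow> nat \<Rightarrow> qpath set \<Rightarrow> (nat \<Rightarrow> complex) list \<Rightarrow> cqmap set" where
  "Lgens m len a Mon rho =
     tder m len ` qrho_comps m len Mon rho \<union>
     {zder m len u s | u s. u \<in> {1..a} \<and> s \<in> B0w m len Mon rho \<and> 2 \<le> len s}"

definition slgens :: "nat \<Rightarrow> (nat \<Rightarrow> nat) \<Rightarrow> nat \<Rightarrow> cqmap set" where
  "slgens m len a = {xder m len j | j. j \<in> {2..a}} \<union>
                    {wder m len p q | p q. p \<in> {1..a} \<and> q \<in> {1..a} \<and> p \<noteq> q}"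

definition sl :: "nat \<Rightarrow> (nat \<Rightarrow> nat \<Rightarrow> complex) set" where
  "sl a = {M. (\<forall>q p. (q \<notin> {1..a} \<or> p \<notin> {1..a}) \<longrightarrow> M q p = 0) \<and> (\<Sum>j\<in>{1..a}. M j j) = 0}"

definition mat_bracket :: "nat \<Rightarrow> (nat \<Rightarrow> nat \<Rightarrow> complex) \<Rightarrow> (nat \<Rightarrow> nat \<Rightarrow> complex) \<Rightarrow> (nat \<Rightarrow> nat \<Rightarrow> complex)" where
  "mat_bracket a M N = (\<lambda>q p. \<Sum>k\<in>{1..a}. M q k * N k p - N q k * M k p)"

text \<open>The identification w_pq <-> E_qp, x_j <-> E_jj - E_11.\<close>
definition sl_to_hh :: "nat \<Rightarrow> (nat \<Rightarrow> nat) \<Rightarrow> nat \<Rightarrow> (nat \<Rightarrow> nat \<Rightarrow> complex) \<Rightarrow> cqmap" where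
  "sl_to_hh m len a M = (\<lambda>f r.
     (\<Sum>p\<in>{1..a}. \<Sum>q\<in>{1..a}. if p \<noteq> q then M q p * wder m len p q f r else 0) +
     (\<Sum>j\<in>{2..a}. M j j * xder m len j f r))"

end

theory Submission
  imports Defs
begin

text \<open>
  Modulo I and inner derivations, every derivation of A vanishing on E has a normal form:
  it multiplies every arrow by a scalar and sends each arrow alpha^(u) from 0 to omega to a
  combination of branches. Since d must preserve the relations rho_i, the total weight of a
  branch is constant on each component of Q_rho; an inner derivation given by a potential on
  the vertices moves all weight onto the first arrows of the branches, and subtracting the
  mean weight of the arrows alpha^(u) makes the remaining matrix traceless. The normal form
  thus splits into a part in L, a part in the span of the y_i and a traceless a x a matrix.
  Brackets of normal forms are again normal forms, given by matrix commutators on the sl_a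
  part, and an inner derivation in normal form has a scalar matrix part and the same weight on
  every branch, which makes the sum direct. Throughout, I is used through an explicit
  description: away from paths containing a monomial relation, its elements are exactly the
  linear combinations of the relations rho_i.
\<close>

declare One_nat_def[simp del]

section \<open>The path algebra\<close>

lemma vpos_E0[simp]: "vpos len i j = E0 \<longleftrightarrow> j = 0" by (simp add: vpos_def)
lemma vpos_Ew[simp]: "vpos len i j = Ew \<longleftrightarrow> j \<noteq> 0 \<and> j = len i" by (simp add: vpos_def)
lemma vpos_Ein[simp]: "vpos len i j = Ein i' j' \<longleftrightarrow> j \<noteq> 0 \<and> j \<noteq> len i \<and> i' = i \<and> j' = j" by (auto simp add: vpos_def)
lemma vpos_0[simp]: "vpos len i 0 = E0" by (simp add: vpos_def)
lemma vpos_len[simp]: "0 < len i \<Longrightarrow> vpos len i (len i) = Ew" by (simp add: vpos_def)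
lemma vpos_Pth[simp]: "vpos len i j \<noteq> Pth i' j' k'" by (simp add: vpos_def)

lemma qpaths_simps[simp]:
  "E0 \<in> qpaths m len" "Ew \<in> qpaths m len"
  "Ein i j \<in> qpaths m len \<longleftrightarrow> i \<in> {1..m} \<and> 0 < j \<and> j < len i"
  "Pth i j k \<in> qpaths m len \<longleftrightarrow> i \<in> {1..m} \<and> j < k \<and> k \<le> len i"
  by (auto simp: qpaths_def qvertices_def)

lemma qvertices_simps[simp]:
  "E0 \<in> qvertices m len" "Ew \<in> qvertices m len"
  "Ein i j \<in> qvertices m len \<longleftrightarrow> i \<in> {1..m} \<and> 0 < j \<and> j < len i"
  "Pth i j k \<notin> qvertices m len"
  by (auto simp: qvertices_def)

lemma finite_qvertices[simp]: "finite (qvertices m len)"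
proof -
  define B where "B = Max (len ` {1..m})"
  have "{Ein i j | i j. i \<in> {1..m} \<and> 0 < j \<and> j < len i} \<subseteq> (\<lambda>(i,j). Ein i j) ` ({1..m} \<times> {..<B})"
  proof
    fix x assume "x \<in> {Ein i j | i j. i \<in> {1..m} \<and> 0 < j \<and> j < len i}"
    then obtain i j where x: "x = Ein i j" "i \<in> {1..m}" "j < len i" by auto
    have h: "len i \<le> B" using x unfolding B_def by auto
    thus "x \<in> (\<lambda>(i,j). Ein i j) ` ({1..m} \<times> {..<B})" using x h by (intro image_eqI[where x="(i,j)"]) auto
  qed
  hence "finite {Ein i j | i j. i \<in> {1..m} \<and> 0 < j \<and> j < len i}" by (rule finite_subset) auto
  thus ?thesis unfolding qvertices_def by simp
qed

lemma finite_qpaths[simp]: "finite (qpaths m len)"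
proof -
  define B where "B = Max (len ` {1..m})"
  have "{Pth i j k | i j k. i \<in> {1..m} \<and> j < k \<and> k \<le> len i} \<subseteq> (\<lambda>(i,j,k). Pth i j k) ` ({1..m} \<times> {..B} \<times> {..B})"
  proof
    fix x assume "x \<in> {Pth i j k | i j k. i \<in> {1..m} \<and> j < k \<and> k \<le> len i}"
    then obtain i j k where x: "x = Pth i j k" "i \<in> {1..m}" "j < k" "k \<le> len i" by auto
    have h: "len i \<le> B" using x unfolding B_def by auto
    thus "x \<in> (\<lambda>(i,j,k). Pth i j k) ` ({1..m} \<times> {..B} \<times> {..B})" using x h by (intro image_eqI[where x="(i,j,k)"]) auto
  qed
  hence "finite {Pth i j k | i j k. i \<in> {1..m} \<and> j < k \<and> k \<le> len i}" by (rule finite_subset) auto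
  thus ?thesis unfolding qpaths_def by simp
qed

lemma qvertices_sub: "qvertices m len \<subseteq> qpaths m len" by (auto simp: qpaths_def)


lemma qsrc_vert[simp]: "v \<in> qvertices m len \<Longrightarrow> qsrc len v = v"
  and qtgt_vert[simp]: "v \<in> qvertices m len \<Longrightarrow> qtgt len v = v"
  and triv_vert[simp]: "v \<in> qvertices m len \<Longrightarrow> is_triv v"
  by (auto simp: qvertices_def)

lemma triv_iff: "is_triv p \<longleftrightarrow> (\<forall>i j k. p \<noteq> Pth i j k)"
  by (cases p) auto

lemma qsrc_in: "r \<in> qpaths m len \<Longrightarrow> qsrc len r \<in> qvertices m len"
  and qtgt_in: "r \<in> qpaths m len \<Longrightarrow> qtgt len r \<in> qvertices m len"
  by (cases r; auto simp: qpaths_def qvertices_def vpos_def)+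

lemma qmul_triv_l: "is_triv p \<Longrightarrow> qmul len p q = (if qtgt len p = qsrc len q then Some q else None)"
  by (simp add: qmul_def)

lemma qmul_triv_r: "is_triv q \<Longrightarrow> qmul len p q = (if qtgt len p = qsrc len q then Some p else None)"
  by (cases p; cases q; simp add: qmul_def)

lemma qmul_PP: "qmul len (Pth i j k) (Pth i' j' k') =
   (if vpos len i k = vpos len i' j' \<and> i = i' \<and> k = j' then Some (Pth i j k') else None)"
  by (auto simp: qmul_def)

lemma qmul_PP': "Pth i j k \<in> qpaths m len \<Longrightarrow> Pth i' j' k' \<in> qpaths m len \<Longrightarrow>
   qmul len (Pth i j k) (Pth i' j' k') = (if i = i' \<and> k = j' then Some (Pth i j k') else None)"
  by (auto simp: qmul_PP)

lemma qmul_closed: "p \<in> qpaths m len \<Longrightarrow> q \<in> qpaths m len \<Longrightarrow> qmul len p q = Some r \<Longrightarrow> r \<in> qpaths m len"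
  apply (cases "is_triv p")
   apply (auto simp: qmul_triv_l split: if_splits)[1]
  apply (cases "is_triv q")
   apply (auto simp: qmul_triv_r split: if_splits)[1]
  apply (cases p; cases q; auto simp: qmul_PP' split: if_splits)
  done

lemma pt_apply: "pt p r = (if r = p then 1 else 0)" by (simp add: pt_def)

lemma pt_in: "p \<in> qpaths m len \<Longrightarrow> pt p \<in> cq_elems m len"
  by (auto simp: cq_elems_def pt_apply)

lemma sum_eq_single: "finite S \<Longrightarrow> a \<in> S \<Longrightarrow> (\<And>x. x \<in> S \<Longrightarrow> x \<noteq> a \<Longrightarrow> h x = 0) \<Longrightarrow> sum h S = h a"
  by (simp add: sum.remove)

lemma sum_eq_single_if: "finite S \<Longrightarrow> (\<And>x. x \<in> S \<Longrightarrow> x \<noteq> a \<Longrightarrow> h x = 0) \<Longrightarrow> sum h S = (if a \<in> S then h a else 0)"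
  by (auto simp: sum.remove intro: sum.neutral)

lemma cq_mul_pt_l: "p \<in> qpaths m len \<Longrightarrow>
   cq_mul m len (pt p) g r = (\<Sum>q\<in>qpaths m len. if qmul len p q = Some r then g q else 0)"
  unfolding cq_mul_def by (rule trans[OF sum_eq_single[where a=p]]) (auto simp: pt_apply cong: if_cong)

lemma cq_mul_pt_r: "q \<in> qpaths m len \<Longrightarrow>
   cq_mul m len f (pt q) r = (\<Sum>p\<in>qpaths m len. if qmul len p q = Some r then f p else 0)"
  unfolding cq_mul_def by (intro sum.cong refl, subst sum_eq_single[where a=q]) (auto simp: pt_apply cong: if_cong)

lemma cq_mul_vert_l: "v \<in> qvertices m len \<Longrightarrow>
   cq_mul m len (pt v) g r = (if r \<in> qpaths m len \<and> qsrc len r = v then g r else 0)"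
  using qvertices_sub[of m len]
  by (subst cq_mul_pt_l, blast, subst sum_eq_single_if[where a=r]) (auto simp: qmul_triv_l)

lemma cq_mul_vert_r: "v \<in> qvertices m len \<Longrightarrow>
   cq_mul m len f (pt v) r = (if r \<in> qpaths m len \<and> qtgt len r = v then f r else 0)"
  using qvertices_sub[of m len]
  by (subst cq_mul_pt_r, blast, subst sum_eq_single_if[where a=r]) (auto simp: qmul_triv_r)

lemma cq_mul_pt_pt: "p \<in> qpaths m len \<Longrightarrow> q \<in> qpaths m len \<Longrightarrow>
   cq_mul m len (pt p) (pt q) r = (if qmul len p q = Some r then 1 else 0)"
  by (subst cq_mul_pt_l, simp, subst sum_eq_single[where a=q]) (auto simp: pt_apply cong: if_cong)


lemma cq_mul_add_l: "cq_mul m len (\<lambda>r. f r + f' r) g = (\<lambda>r. cq_mul m len f g r + cq_mul m len f' g r)"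
  unfolding cq_mul_def by (auto simp: sum.distrib[symmetric] algebra_simps intro!: sum.cong)
lemma cq_mul_add_r: "cq_mul m len f (\<lambda>r. g r + g' r) = (\<lambda>r. cq_mul m len f g r + cq_mul m len f g' r)"
  unfolding cq_mul_def by (auto simp: sum.distrib[symmetric] algebra_simps intro!: sum.cong)
lemma cq_mul_diff_l: "cq_mul m len (\<lambda>r. f r - f' r) g = (\<lambda>r. cq_mul m len f g r - cq_mul m len f' g r)"
  unfolding cq_mul_def by (auto simp: sum_subtractf[symmetric] algebra_simps intro!: sum.cong)
lemma cq_mul_diff_r: "cq_mul m len f (\<lambda>r. g r - g' r) = (\<lambda>r. cq_mul m len f g r - cq_mul m len f g' r)"
  unfolding cq_mul_def by (auto simp: sum_subtractf[symmetric] algebra_simps intro!: sum.cong)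
lemma cq_mul_smult_l: "cq_mul m len (\<lambda>r. c * f r) g = (\<lambda>r. c * cq_mul m len f g r)"
  unfolding cq_mul_def by (auto simp: sum_distrib_left algebra_simps intro!: sum.cong)
lemma cq_mul_smult_r: "cq_mul m len f (\<lambda>r. c * g r) = (\<lambda>r. c * cq_mul m len f g r)"
  unfolding cq_mul_def by (auto simp: sum_distrib_left algebra_simps intro!: sum.cong)
lemma cq_mul_zero_l: "cq_mul m len (\<lambda>r. 0) g = (\<lambda>r. 0)"
  unfolding cq_mul_def by (auto cong: if_cong)
lemma cq_mul_zero_r: "cq_mul m len f (\<lambda>r. 0) = (\<lambda>r. 0)"
  unfolding cq_mul_def by (auto cong: if_cong)
lemma if_sum_0: "(if c then (\<Sum>x\<in>X. h x) else 0) = (\<Sum>x\<in>X. if c then h x else 0)"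
  by simp
lemma cq_mul_sum_l: "cq_mul m len (\<lambda>r. \<Sum>x\<in>X. F x r) g = (\<lambda>r. \<Sum>x\<in>X. cq_mul m len (F x) g r)"
proof (rule ext)
  fix r
  have "cq_mul m len (\<lambda>r. \<Sum>x\<in>X. F x r) g r = (\<Sum>p\<in>qpaths m len. \<Sum>q\<in>qpaths m len. \<Sum>x\<in>X. if qmul len p q = Some r then F x p * g q else 0)"
    unfolding cq_mul_def by (simp add: sum_distrib_right if_sum_0 cong: if_cong)
  also have "\<dots> = (\<Sum>x\<in>X. cq_mul m len (F x) g r)"
    unfolding cq_mul_def by (subst sum.swap, subst (2) sum.swap, rule refl)
  finally show "cq_mul m len (\<lambda>r. \<Sum>x\<in>X. F x r) g r = (\<Sum>x\<in>X. cq_mul m len (F x) g r)" .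
qed
lemma cq_mul_sum_r: "cq_mul m len f (\<lambda>r. \<Sum>x\<in>X. F x r) = (\<lambda>r. \<Sum>x\<in>X. cq_mul m len f (F x) r)"
proof (rule ext)
  fix r
  have "cq_mul m len f (\<lambda>r. \<Sum>x\<in>X. F x r) r = (\<Sum>p\<in>qpaths m len. \<Sum>q\<in>qpaths m len. \<Sum>x\<in>X. if qmul len p q = Some r then f p * F x q else 0)"
    unfolding cq_mul_def by (simp add: sum_distrib_left if_sum_0 cong: if_cong)
  also have "\<dots> = (\<Sum>x\<in>X. cq_mul m len f (F x) r)"
    unfolding cq_mul_def by (subst sum.swap, subst (2) sum.swap, rule refl)
  finally show "cq_mul m len f (\<lambda>r. \<Sum>x\<in>X. F x r) r = (\<Sum>x\<in>X. cq_mul m len f (F x) r)" .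
qed

lemma ce_add: "f \<in> cq_elems m len \<Longrightarrow> g \<in> cq_elems m len \<Longrightarrow> (\<lambda>r. f r + g r) \<in> cq_elems m len"
  and ce_smult: "f \<in> cq_elems m len \<Longrightarrow> (\<lambda>r. c * f r) \<in> cq_elems m len"
  and ce_zero: "(\<lambda>r. 0) \<in> cq_elems m len"
  unfolding cq_elems_def by auto (metis add.right_neutral)

lemma ce_sum: "(\<And>x. x \<in> X \<Longrightarrow> F x \<in> cq_elems m len) \<Longrightarrow> (\<lambda>r. \<Sum>x\<in>X. F x r) \<in> cq_elems m len"
  unfolding cq_elems_def by (auto elim!: sum.not_neutral_contains_not_neutral)
  
lemma ce_mul: "cq_mul m len f g \<in> cq_elems m len"
proof -
  { fix r assume "cq_mul m len f g r \<noteq> 0"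
    then obtain p q where "p \<in> qpaths m len" "q \<in> qpaths m len" "qmul len p q = Some r"
      unfolding cq_mul_def by (auto elim!: sum.not_neutral_contains_not_neutral split: if_splits)
    hence "r \<in> qpaths m len" by (rule qmul_closed) }
  thus ?thesis by (auto simp: cq_elems_def)
qed

lemma ce_out: "f \<in> cq_elems m len \<Longrightarrow> r \<notin> qpaths m len \<Longrightarrow> f r = 0"
  by (auto simp: cq_elems_def)

lemma ce_expand: "f \<in> cq_elems m len \<Longrightarrow> f = (\<lambda>r. \<Sum>p\<in>qpaths m len. f p * pt p r)"
proof (rule ext)
  fix r assume f: "f \<in> cq_elems m len"
  show "f r = (\<Sum>p\<in>qpaths m len. f p * pt p r)"
    by (subst sum_eq_single_if[where a=r]) (auto simp: pt_apply ce_out[OF f])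
qed


lemma seg_in: "i \<in> {1..m} \<Longrightarrow> j \<le> k \<Longrightarrow> k \<le> len i \<Longrightarrow> seg len i j k \<in> qpaths m len"
  by (auto simp: seg_def vpos_def)

lemma seg_mul: "i \<in> {1..m} \<Longrightarrow> j \<le> l \<Longrightarrow> l \<le> k \<Longrightarrow> k \<le> len i \<Longrightarrow>
   qmul len (seg len i j l) (seg len i l k) = Some (seg len i j k)"
  by (cases "j = l"; cases "l = k") (auto simp: seg_def vpos_def qmul_def)

lemma pt_mul: "p \<in> qpaths m len \<Longrightarrow> q \<in> qpaths m len \<Longrightarrow> qmul len p q = Some r \<Longrightarrow>
   cq_mul m len (pt p) (pt q) = pt r"
  by (rule ext) (auto simp: cq_mul_pt_pt pt_apply)

lemma disjoint_supports_sum_zero: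
  fixes f g :: "'a \<Rightarrow> 'b::monoid_add"
  assumes "\<forall>i\<in>A. f i + g i = 0" "\<forall>i. f i \<noteq> 0 \<longrightarrow> i \<in> F" "\<forall>i. g i \<noteq> 0 \<longrightarrow> i \<in> G"
    and "F \<inter> G = {}" "F \<union> G \<subseteq> A"
  shows "f i = 0 \<and> g i = 0"
proof (cases "i \<in> F")
  case True
  hence "g i = 0" "i \<in> A" using assms(3-5) by auto
  thus ?thesis using assms(1) by (metis add_0_right)
next
  case False
  hence f0: "f i = 0" using assms(2) by blast
  show ?thesis
  proof (cases "i \<in> G")
    case True
    hence "i \<in> A" using assms(5) by auto
    thus ?thesis using assms(1) f0 by (metis add_0_left)
  next
    case False thus ?thesis using f0 assms(3) by blast
  qed
qed


section \<open>The ideal of a toupie algebra\<close>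

locale toupie_alg =
  fixes m :: nat and len :: "nat \<Rightarrow> nat" and a :: nat and Mon :: "qpath set" and rho :: "(nat \<Rightarrow> complex) list"
  assumes toupie: "toupie m len a Mon rho"
begin

abbreviation "P \<equiv> qpaths m len"
abbreviation "CE \<equiv> cq_elems m len"
abbreviation "mul \<equiv> cq_mul m len"
abbreviation "I \<equiv> toupie_ideal m len Mon rho"
abbreviation "br j \<equiv> Pth j 0 (len j)"
abbreviation "arr j \<equiv> Pth j 0 1"

lemma a_le: "a \<le> m"
  and len_ge1: "i \<in> {1..m} \<Longrightarrow> 1 \<le> len i"
  and len1_iff: "i \<in> {1..m} \<Longrightarrow> len i = 1 \<longleftrightarrow> i \<le> a"
  and Mon_sub: "x \<in> Mon \<Longrightarrow> \<exists>i j k. x = Pth i j k \<and> i \<in> {1..m} \<and> j < k \<and> k \<le> len i"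
  and rel_support: "b \<in> set rho \<Longrightarrow> b i \<noteq> 0 \<Longrightarrow> i \<in> {1..m} \<and> 2 \<le> len i \<and> \<not> has_mon Mon i"
  and rho_piv: "b \<in> set rho \<Longrightarrow> b (piv b) = 1"
  and rho_rref: "t < length rho \<Longrightarrow> t' < length rho \<Longrightarrow> t \<noteq> t' \<Longrightarrow> (rho ! t') (piv (rho ! t)) = 0"
  and I_arrow_pow2: "I \<subseteq> arrow_pow m len 2"
  using toupie unfolding toupie_def admissible_def by blast+

lemma rho_nth_piv: "t < length rho \<Longrightarrow> t' < length rho \<Longrightarrow> (rho ! t') (piv (rho ! t)) = (if t = t' then 1 else 0)"
  using rho_rref rho_piv nth_mem by auto

lemma rel_support_nonpiv:
  assumes t: "t < length rho" and j: "(rho ! t) j \<noteq> 0" "j \<noteq> piv (rho ! t)"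
  shows "j \<notin> piv ` set rho"
proof
  assume "j \<in> piv ` set rho"
  then obtain t' where t': "t' < length rho" "j = piv (rho ! t')" by (auto simp: in_set_conv_nth)
  show False
  proof (cases "t' = t")
    case True thus False using t' j(2) by simp
  next
    case False thus False using rho_rref[OF t'(1) t False] j(1) t'(2) by simp
  qed
qed

lemma mon_P: "x \<in> Mon \<Longrightarrow> x \<in> P" using Mon_sub by fastforce

lemma len_pos: "i \<in> {1..m} \<Longrightarrow> 0 < len i" using len_ge1[of i] by linarith
lemma arr_P: "u \<in> {1..a} \<Longrightarrow> arr u \<in> P" using a_le len_pos[of u] by auto
lemma len_arr: "u \<in> {1..a} \<Longrightarrow> len u = 1" using len1_iff a_le by auto
lemma br_P: "j \<in> {1..m} \<Longrightarrow> br j \<in> P" using len_pos[of j] by simp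

definition has_mon_subpath :: "qpath \<Rightarrow> bool" where
  "has_mon_subpath r \<longleftrightarrow> (\<exists>i j k j' k'. r = Pth i j k \<and> j \<le> j' \<and> k' \<le> k \<and> Pth i j' k' \<in> Mon)"

lemma has_mon_subpath_branch: "has_mon_subpath (br j) \<longleftrightarrow> has_mon Mon j"
proof
  assume "has_mon_subpath (br j)" thus "has_mon Mon j" unfolding has_mon_subpath_def has_mon_def by auto
next
  assume "has_mon Mon j"
  then obtain j' k' where jk: "Pth j j' k' \<in> Mon" unfolding has_mon_def by auto
  then have "k' \<le> len j" using Mon_sub by fastforce
  thus "has_mon_subpath (br j)" using jk unfolding has_mon_subpath_def by blast
qed

lemma has_mon_subpath_mul_r: "p \<in> P \<Longrightarrow> q \<in> P \<Longrightarrow> qmul len p q = Some r \<Longrightarrow> has_mon_subpath q \<Longrightarrow> has_mon_subpath r"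
proof -
  assume pq: "p \<in> P" "q \<in> P" "qmul len p q = Some r" and kq: "has_mon_subpath q"
  from kq obtain i j k j' k' where q: "q = Pth i j k" "j \<le> j'" "k' \<le> k" "Pth i j' k' \<in> Mon"
    unfolding has_mon_subpath_def by blast
  show "has_mon_subpath r"
  proof (cases "is_triv p")
    case True
    hence "r = q" using pq(3) by (simp add: qmul_triv_l split: if_splits)
    thus ?thesis using kq by simp
  next
    case False
    then obtain i1 j1 k1 where p: "p = Pth i1 j1 k1" by (auto simp: triv_iff)
    with pq q have "r = Pth i j1 k" "j1 < k1" "k1 = j" by (auto simp: qmul_PP' split: if_splits)
    thus ?thesis using q unfolding has_mon_subpath_def by (intro exI[of _ i] exI[of _ j1] exI[of _ k] exI[of _ j'] exI[of _ k']) auto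
  qed
qed

lemma has_mon_subpath_mul_l: "p \<in> P \<Longrightarrow> q \<in> P \<Longrightarrow> qmul len p q = Some r \<Longrightarrow> has_mon_subpath p \<Longrightarrow> has_mon_subpath r"
proof -
  assume pq: "p \<in> P" "q \<in> P" "qmul len p q = Some r" and kp: "has_mon_subpath p"
  from kp obtain i j k j' k' where p: "p = Pth i j k" "j \<le> j'" "k' \<le> k" "Pth i j' k' \<in> Mon"
    unfolding has_mon_subpath_def by blast
  show "has_mon_subpath r"
  proof (cases "is_triv q")
    case True
    hence "r = p" using pq(3) by (simp add: qmul_triv_r split: if_splits)
    thus ?thesis using kp by simp
  next
    case False
    then obtain i1 j1 k1 where q: "q = Pth i1 j1 k1" by (auto simp: triv_iff)
    with pq p have "r = Pth i j k1" "j1 < k1" "k = j1" by (auto simp: qmul_PP' split: if_splits)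
    thus ?thesis using p unfolding has_mon_subpath_def by (intro exI[of _ i] exI[of _ j] exI[of _ k1] exI[of _ j'] exI[of _ k']) auto
  qed
qed


lemma I_zero: "(\<lambda>r. 0) \<in> I" unfolding toupie_ideal_def by (rule gen_ideal.zero)
lemma I_add: "f \<in> I \<Longrightarrow> g \<in> I \<Longrightarrow> (\<lambda>r. f r + g r) \<in> I" unfolding toupie_ideal_def by (rule gen_ideal.add)
lemma I_smult: "f \<in> I \<Longrightarrow> (\<lambda>r. c * f r) \<in> I" unfolding toupie_ideal_def by (rule gen_ideal.smult)
lemma I_lmult: "f \<in> I \<Longrightarrow> u \<in> CE \<Longrightarrow> mul u f \<in> I" unfolding toupie_ideal_def by (rule gen_ideal.lmult)
lemma I_rmult: "f \<in> I \<Longrightarrow> u \<in> CE \<Longrightarrow> mul f u \<in> I" unfolding toupie_ideal_def by (rule gen_ideal.rmult)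
lemma I_diff: "f \<in> I \<Longrightarrow> g \<in> I \<Longrightarrow> (\<lambda>r. f r - g r) \<in> I"
  using I_add[OF _ I_smult[of g "-1"], of f] by simp
lemma I_sum: "finite X \<Longrightarrow> (\<And>x. x \<in> X \<Longrightarrow> F x \<in> I) \<Longrightarrow> (\<lambda>r. \<Sum>x\<in>X. F x r) \<in> I"
proof (induction X rule: finite_induct)
  case empty thus ?case using I_zero by simp
next
  case (insert x X) thus ?case using I_add[of "F x" "\<lambda>r. \<Sum>x\<in>X. F x r"] by simp
qed
lemma I_ce: "f \<in> I \<Longrightarrow> f \<in> CE"
  unfolding toupie_ideal_def
proof (induction rule: gen_ideal.induct)
  case (gen g)
  then show ?case
  proof
    assume "g \<in> pt ` Mon" thus ?thesis using mon_P pt_in by blast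
  next
    assume "g \<in> branchvec m len ` set rho"
    thus ?thesis unfolding cq_elems_def branchvec_def
      by (auto elim!: sum.not_neutral_contains_not_neutral split: if_splits simp: len_pos)
  qed
qed (auto intro: ce_add ce_smult ce_zero ce_mul)

lemma I_len: "f \<in> I \<Longrightarrow> r \<in> P \<Longrightarrow> qlen r < 2 \<Longrightarrow> f r = 0"
  using I_arrow_pow2 unfolding arrow_pow_def by force

definition branch_supported :: "cq \<Rightarrow> bool" where
  "branch_supported g \<longleftrightarrow> (\<forall>r. g r \<noteq> 0 \<longrightarrow> (\<exists>j\<in>{1..m}. r = br j))"

lemma qmul_into_br: "p \<in> P \<Longrightarrow> j \<in> {1..m} \<Longrightarrow> qmul len p (br j) = Some r \<longleftrightarrow> p = E0 \<and> r = br j"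
proof (cases "is_triv p")
  case True
  assume "p \<in> P"
  then show ?thesis using True by (cases p) (auto simp: qmul_triv_l)
next
  case False
  then obtain i1 j1 k1 where "p = Pth i1 j1 k1" by (auto simp: triv_iff)
  moreover assume "p \<in> P" "j \<in> {1..m}"
  ultimately show ?thesis using len_pos[of j] by (auto simp: qmul_PP' split: if_splits)
qed

lemma qmul_from_br: "q \<in> P \<Longrightarrow> j \<in> {1..m} \<Longrightarrow> qmul len (br j) q = Some r \<longleftrightarrow> q = Ew \<and> r = br j"
proof (cases "is_triv q")
  case True
  assume "q \<in> P" "j \<in> {1..m}"
  then show ?thesis using True len_pos[of j] by (cases q) (auto simp: qmul_triv_r)
next
  case False
  then obtain i1 j1 k1 where "q = Pth i1 j1 k1" by (auto simp: triv_iff)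
  moreover assume "q \<in> P" "j \<in> {1..m}"
  ultimately show ?thesis using len_pos[of j] by (auto simp: qmul_PP' split: if_splits)
qed

lemma branch_supported_out: "branch_supported g \<Longrightarrow> r \<notin> P \<Longrightarrow> g r = 0"
  unfolding branch_supported_def using br_P by blast

lemma mul_branch_supported_l: "branch_supported g \<Longrightarrow> mul u g = (\<lambda>r. u E0 * g r)"
proof (rule ext)
  fix r assume g: "branch_supported g"
  have "mul u g r = (\<Sum>q\<in>P. \<Sum>p\<in>P. if qmul len p q = Some r then u p * g q else 0)"
    unfolding cq_mul_def by (rule sum.swap)
  also have "\<dots> = (\<Sum>q\<in>P. if q = r then u E0 * g q else 0)"
  proof (rule sum.cong[OF refl])
    fix q assume q: "q \<in> P"
    show "(\<Sum>p\<in>P. if qmul len p q = Some r then u p * g q else 0) = (if q = r then u E0 * g q else 0)"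
    proof (cases "g q = 0")
      case True thus ?thesis by (auto cong: if_cong)
    next
      case False
      then obtain j where j: "j \<in> {1..m}" "q = br j" using g unfolding branch_supported_def by blast
      show ?thesis
        by (rule trans[OF sum_eq_single[where a=E0]]) (use j in \<open>auto simp: qmul_into_br\<close>)
    qed
  qed
  also have "\<dots> = u E0 * g r"
    by (subst sum_eq_single_if[where a=r]) (auto simp: branch_supported_out[OF g])
  finally show "mul u g r = u E0 * g r" .
qed

lemma mul_branch_supported_r: "branch_supported g \<Longrightarrow> mul g u = (\<lambda>r. u Ew * g r)"
proof (rule ext)
  fix r assume g: "branch_supported g"
  have "mul g u r = (\<Sum>p\<in>P. if p = r then u Ew * g p else 0)"
    unfolding cq_mul_def
  proof (rule sum.cong[OF refl])
    fix p assume p: "p \<in> P"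
    show "(\<Sum>q\<in>P. if qmul len p q = Some r then g p * u q else 0) = (if p = r then u Ew * g p else 0)"
    proof (cases "g p = 0")
      case True thus ?thesis by (auto cong: if_cong)
    next
      case False
      then obtain j where j: "j \<in> {1..m}" "p = br j" using g unfolding branch_supported_def by blast
      show ?thesis
        by (rule trans[OF sum_eq_single[where a=Ew]]) (use j in \<open>auto simp: qmul_from_br\<close>)
    qed
  qed
  also have "\<dots> = u Ew * g r"
    by (subst sum_eq_single_if[where a=r]) (auto simp: branch_supported_out[OF g])
  finally show "mul g u r = u Ew * g r" .
qed

lemma branch_supported_branchvec: "branch_supported (branchvec m len b)"
  unfolding branch_supported_def branchvec_def by (auto elim!: sum.not_neutral_contains_not_neutral split: if_splits)

lemma branch_supported_pt: "j \<in> {1..m} \<Longrightarrow> branch_supported (pt (br j))"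
  unfolding branch_supported_def by (auto simp: pt_apply)

lemma branch_supported_sum: "(\<And>x. x \<in> X \<Longrightarrow> branch_supported (F x)) \<Longrightarrow> branch_supported (\<lambda>r. \<Sum>x\<in>X. F x r)"
  unfolding branch_supported_def by (auto elim!: sum.not_neutral_contains_not_neutral)
lemma branch_supported_smult: "branch_supported g \<Longrightarrow> branch_supported (\<lambda>r. c * g r)"
  unfolding branch_supported_def by auto

lemma branchvec_br: "j \<in> {1..m} \<Longrightarrow> branchvec m len b (br j) = b j"
  unfolding branchvec_def by (subst sum_eq_single[where a=j]) auto

lemma branchvec_nbr: "(\<And>j. j \<in> {1..m} \<Longrightarrow> r \<noteq> br j) \<Longrightarrow> branchvec m len b r = 0"
  unfolding branchvec_def by auto


definition rel_comb :: "(nat \<Rightarrow> complex) \<Rightarrow> cq" where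
  "rel_comb \<kappa> = (\<lambda>r. \<Sum>t<length rho. \<kappa> t * branchvec m len (rho ! t) r)"

definition I_explicit :: "cq set" where
  "I_explicit = {f \<in> CE. \<exists>\<kappa>. \<forall>r. \<not> has_mon_subpath r \<longrightarrow> f r = rel_comb \<kappa> r}"

lemma rel_comb_branch_supported: "branch_supported (rel_comb \<kappa>)"
  unfolding rel_comb_def by (intro branch_supported_sum branch_supported_smult branch_supported_branchvec)

lemma branch_supported_ce: "branch_supported g \<Longrightarrow> g \<in> CE"
  unfolding cq_elems_def using branch_supported_out by blast

lemma rel_comb_mon_subpath: "has_mon_subpath r \<Longrightarrow> rel_comb \<kappa> r = 0"
proof -
  assume k: "has_mon_subpath r"
  { fix t assume t: "t < length rho"
    have "branchvec m len (rho ! t) r = 0"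
    proof (cases "\<exists>j\<in>{1..m}. r = br j")
      case True
      then obtain j where j: "j \<in> {1..m}" "r = br j" by blast
      hence "has_mon Mon j" using k has_mon_subpath_branch by simp
      hence "(rho ! t) j = 0" using rel_support[OF nth_mem[OF t]] by blast
      thus ?thesis using j branchvec_br by simp
    qed (rule branchvec_nbr, auto) }
  thus ?thesis unfolding rel_comb_def by simp
qed

lemma rel_comb_add: "rel_comb \<kappa> r + rel_comb \<kappa>' r = rel_comb (\<lambda>t. \<kappa> t + \<kappa>' t) r"
  unfolding rel_comb_def by (simp add: sum.distrib[symmetric] algebra_simps)
lemma rel_comb_smult: "c * rel_comb \<kappa> r = rel_comb (\<lambda>t. c * \<kappa> t) r"
  unfolding rel_comb_def by (simp add: sum_distrib_left algebra_simps)

lemma mul_mon_subpath_l: "(\<And>q. h q \<noteq> 0 \<Longrightarrow> has_mon_subpath q) \<Longrightarrow> \<not> has_mon_subpath r \<Longrightarrow> mul u h r = 0"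
  unfolding cq_mul_def using has_mon_subpath_mul_r by (intro sum.neutral ballI) force
lemma mul_mon_subpath_r: "(\<And>q. h q \<noteq> 0 \<Longrightarrow> has_mon_subpath q) \<Longrightarrow> \<not> has_mon_subpath r \<Longrightarrow> mul h u r = 0"
  unfolding cq_mul_def using has_mon_subpath_mul_l by (intro sum.neutral ballI) force

lemma pt_mon_subpath_in_I:
  assumes p: "p \<in> P" "has_mon_subpath p"
  shows "pt p \<in> I"
proof -
  obtain i j k j' k' where pk: "p = Pth i j k" "j \<le> j'" "k' \<le> k" "Pth i j' k' \<in> Mon"
    using p(2) unfolding has_mon_subpath_def by blast
  have mon: "i \<in> {1..m}" "j' < k'" "k' \<le> len i" using Mon_sub[OF pk(4)] by auto
  have jk: "j < k" "k \<le> len i" using p pk by auto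
  have seg1: "seg len i j' k' = Pth i j' k'" using mon by (simp add: seg_def)
  have segp: "seg len i j k = p" using pk jk by (simp add: seg_def)
  have a1: "mul (pt (seg len i j j')) (pt (Pth i j' k')) = pt (seg len i j k')"
    using seg_mul[of i m j j' k' len] mon pk seg_in[of i m] seg1
    by (intro pt_mul[where m=m]) (auto simp: seg_in)
  have a2: "mul (pt (seg len i j k')) (pt (seg len i k' k)) = pt p"
    using seg_mul[of i m j k' k len] mon pk jk segp
    by (intro pt_mul[where m=m]) (auto simp: seg_in)
  have "pt (Pth i j' k') \<in> I" using pk(4) unfolding toupie_ideal_def by (intro gen_ideal.gen) auto
  hence "mul (pt (seg len i j j')) (pt (Pth i j' k')) \<in> I"
    using mon pk by (intro I_lmult pt_in seg_in) auto
  hence "mul (mul (pt (seg len i j j')) (pt (Pth i j' k'))) (pt (seg len i k' k)) \<in> I"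
    by (rule I_rmult) (rule pt_in, rule seg_in, use mon pk jk in auto)
  thus ?thesis using a1 a2 by simp
qed

lemma rel_comb_in_I: "rel_comb \<kappa> \<in> I"
proof -
  have "branchvec m len (rho ! t) \<in> I" if "t < length rho" for t
    using that unfolding toupie_ideal_def by (intro gen_ideal.gen) auto
  thus ?thesis unfolding rel_comb_def by (intro I_sum I_smult) auto
qed

lemma I_explicit_subset: "I_explicit \<subseteq> I"
proof
  fix f assume "f \<in> I_explicit"
  then obtain \<kappa> where f: "f \<in> CE" "\<And>r. \<not> has_mon_subpath r \<Longrightarrow> f r = rel_comb \<kappa> r"
    unfolding I_explicit_def by blast
  let ?K = "{p \<in> P. has_mon_subpath p}"
  have eq: "f = (\<lambda>r. (\<Sum>p\<in>?K. f p * pt p r) + rel_comb \<kappa> r)"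
  proof (rule ext)
    fix r show "f r = (\<Sum>p\<in>?K. f p * pt p r) + rel_comb \<kappa> r"
    proof (cases "has_mon_subpath r")
      case True
      show ?thesis
        by (subst sum_eq_single_if[where a=r])
           (use True ce_out[OF f(1)] rel_comb_mon_subpath in \<open>auto simp: pt_apply\<close>)
    next
      case False
      thus ?thesis using f(2) by (auto simp: pt_apply intro!: sum.neutral)
    qed
  qed
  show "f \<in> I"
    by (subst eq) (intro I_add I_sum I_smult pt_mon_subpath_in_I rel_comb_in_I; auto)
qed

lemma I_explicit_gen: "g \<in> pt ` Mon \<union> branchvec m len ` set rho \<Longrightarrow> g \<in> I_explicit"
proof -
  assume gen: "g \<in> pt ` Mon \<union> branchvec m len ` set rho"
  have gce: "g \<in> CE" using gen I_ce unfolding toupie_ideal_def by (blast intro: gen_ideal.gen)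
  from gen show ?thesis
  proof
    assume "g \<in> pt ` Mon"
    then obtain x where x: "x \<in> Mon" "g = pt x" by blast
    then obtain i j k where "x = Pth i j k" using Mon_sub by blast
    hence "has_mon_subpath x" using x unfolding has_mon_subpath_def by blast
    hence "\<forall>r. \<not> has_mon_subpath r \<longrightarrow> g r = rel_comb (\<lambda>t. 0) r" using x by (auto simp: pt_apply rel_comb_def)
    thus ?thesis using gce unfolding I_explicit_def by blast
  next
    assume "g \<in> branchvec m len ` set rho"
    then obtain t where t: "t < length rho" "g = branchvec m len (rho ! t)" by (auto simp: in_set_conv_nth)
    have "g r = rel_comb (\<lambda>t'. if t' = t then 1 else 0) r" for r
      unfolding rel_comb_def using t by (subst sum_eq_single[where a=t]) auto
    thus ?thesis using gce unfolding I_explicit_def by blast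
  qed
qed

text \<open>A monomial-free path r factors through another path only via the trivial paths at its
  ends, so multiplying an element of I by u only rescales it by u E0 or u Ew off such paths.\<close>
lemma I_explicit_lmult: "f \<in> I_explicit \<Longrightarrow> mul u f \<in> I_explicit"
proof -
  assume "f \<in> I_explicit"
  then obtain \<kappa> where f: "f \<in> CE" "\<forall>r. \<not> has_mon_subpath r \<longrightarrow> f r = rel_comb \<kappa> r"
    unfolding I_explicit_def by blast
  have "mul u f r = rel_comb (\<lambda>t. u E0 * \<kappa> t) r" if r: "\<not> has_mon_subpath r" for r
  proof -
    have "f = (\<lambda>r. (f r - rel_comb \<kappa> r) + rel_comb \<kappa> r)" by simp
    hence "mul u f r = mul u (\<lambda>r. f r - rel_comb \<kappa> r) r + mul u (rel_comb \<kappa>) r"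
      by (metis (no_types) cq_mul_add_r)
    also have "mul u (\<lambda>r. f r - rel_comb \<kappa> r) r = 0"
      by (rule mul_mon_subpath_l) (use f r in auto)
    also have "mul u (rel_comb \<kappa>) r = u E0 * rel_comb \<kappa> r"
      by (simp add: mul_branch_supported_l[OF rel_comb_branch_supported])
    finally show ?thesis by (simp add: rel_comb_smult)
  qed
  thus ?thesis unfolding I_explicit_def using ce_mul by blast
qed

lemma I_explicit_rmult: "f \<in> I_explicit \<Longrightarrow> mul f u \<in> I_explicit"
proof -
  assume "f \<in> I_explicit"
  then obtain \<kappa> where f: "f \<in> CE" "\<forall>r. \<not> has_mon_subpath r \<longrightarrow> f r = rel_comb \<kappa> r"
    unfolding I_explicit_def by blast
  have "mul f u r = rel_comb (\<lambda>t. u Ew * \<kappa> t) r" if r: "\<not> has_mon_subpath r" for r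
  proof -
    have "f = (\<lambda>r. (f r - rel_comb \<kappa> r) + rel_comb \<kappa> r)" by simp
    hence "mul f u r = mul (\<lambda>r. f r - rel_comb \<kappa> r) u r + mul (rel_comb \<kappa>) u r"
      by (metis (no_types) cq_mul_add_l)
    also have "mul (\<lambda>r. f r - rel_comb \<kappa> r) u r = 0"
      by (rule mul_mon_subpath_r) (use f r in auto)
    also have "mul (rel_comb \<kappa>) u r = u Ew * rel_comb \<kappa> r"
      by (simp add: mul_branch_supported_r[OF rel_comb_branch_supported])
    finally show ?thesis by (simp add: rel_comb_smult)
  qed
  thus ?thesis unfolding I_explicit_def using ce_mul by blast
qed

lemma I_subset_explicit: "I \<subseteq> I_explicit"
proof
  fix f assume "f \<in> I"
  then show "f \<in> I_explicit"
    unfolding toupie_ideal_def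
  proof (induction rule: gen_ideal.induct)
    case (add f g)
    then obtain \<kappa> \<kappa>' where "f \<in> CE" "g \<in> CE" "\<forall>r. \<not> has_mon_subpath r \<longrightarrow> f r = rel_comb \<kappa> r"
        "\<forall>r. \<not> has_mon_subpath r \<longrightarrow> g r = rel_comb \<kappa>' r"
      unfolding I_explicit_def by blast
    thus ?case unfolding I_explicit_def using ce_add
      by (auto intro!: exI[of _ "\<lambda>t. \<kappa> t + \<kappa>' t"] simp: rel_comb_add[symmetric])
  next
    case (smult f c)
    then obtain \<kappa> where "f \<in> CE" "\<forall>r. \<not> has_mon_subpath r \<longrightarrow> f r = rel_comb \<kappa> r"
      unfolding I_explicit_def by blast
    thus ?case unfolding I_explicit_def using ce_smult
      by (auto intro!: exI[of _ "\<lambda>t. c * \<kappa> t"] simp: rel_comb_smult[symmetric])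
  next
    case (gen g) then show ?case by (rule I_explicit_gen)
  next
    case zero show ?case
      unfolding I_explicit_def using ce_zero by (auto intro!: exI[of _ "\<lambda>t. 0"] simp: rel_comb_def)
  next
    case (lmult f u) show ?case using lmult.IH by (rule I_explicit_lmult)
  next
    case (rmult f u) show ?case using rmult.IH by (rule I_explicit_rmult)
  qed
qed


lemma rel_comb_branch: "j \<in> {1..m} \<Longrightarrow> rel_comb \<kappa> (br j) = (\<Sum>t<length rho. \<kappa> t * (rho ! t) j)"
  unfolding rel_comb_def by (simp add: branchvec_br)

lemma piv_support: "t < length rho \<Longrightarrow> piv (rho ! t) \<in> {1..m} \<and> 2 \<le> len (piv (rho ! t)) \<and> \<not> has_mon Mon (piv (rho ! t))"
  using rel_support[OF nth_mem, of t "piv (rho ! t)"] rho_piv[OF nth_mem, of t] by simp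

lemma rel_comb_piv: "t < length rho \<Longrightarrow> rel_comb \<kappa> (br (piv (rho ! t))) = \<kappa> t"
  using piv_support[of t] by (simp add: rel_comb_branch rho_nth_piv, subst sum_eq_single[where a=t]) auto

lemma I_nonpiv_zero:
  assumes g: "g \<in> I"
    and supp: "\<And>r. g r \<noteq> 0 \<Longrightarrow> \<exists>j\<in>{1..m}. r = br j \<and> \<not> has_mon Mon j \<and> j \<notin> piv ` set rho"
  shows "g = (\<lambda>r. 0)"
proof -
  obtain \<kappa> where k: "\<And>r. \<not> has_mon_subpath r \<Longrightarrow> g r = rel_comb \<kappa> r" using g I_subset_explicit unfolding I_explicit_def by blast
  have k0: "\<kappa> t = 0" if t: "t < length rho" for t
  proof -
    let ?k = "piv (rho ! t)"
    have nk: "\<not> has_mon_subpath (br ?k)" using piv_support[OF t] has_mon_subpath_branch by simp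
    have "g (br ?k) = 0"
    proof (rule ccontr)
      assume "g (br ?k) \<noteq> 0"
      then obtain j where "j \<in> {1..m}" "br ?k = br j" "j \<notin> piv ` set rho" using supp by blast
      thus False using t by (metis image_eqI nth_mem qpath.inject)
    qed
    thus ?thesis using k[OF nk] rel_comb_piv[OF t] by simp
  qed
  show ?thesis
  proof (rule ext)
    fix r show "g r = 0"
    proof (rule ccontr)
      assume gr: "g r \<noteq> 0"
      then obtain j where j: "j \<in> {1..m}" "r = br j" "\<not> has_mon Mon j" using supp by blast
      hence "\<not> has_mon_subpath r" using has_mon_subpath_branch by simp
      hence "g r = rel_comb \<kappa> r" by (rule k)
      also have "\<dots> = 0" unfolding rel_comb_def using k0 by simp
      finally show False using gr by simp
    qed
  qed
qed


section \<open>Derivations in normal form\<close>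

definition diag_der :: "(qpath \<Rightarrow> complex) \<Rightarrow> cqmap" where
  "diag_der w f = (\<lambda>r. if r \<in> P then w r * f r else 0)"

definition arrow_der :: "nat \<Rightarrow> qpath \<Rightarrow> cqmap" where
  "arrow_der u x f = (\<lambda>r. f (arr u) * pt x r)"

text \<open>diag_der (branch_weight omega) is the sum of the classes omega_i alpha^i_0 || alpha^i_0.\<close>
definition branch_weight :: "(nat \<Rightarrow> complex) \<Rightarrow> qpath \<Rightarrow> complex" where
  "branch_weight \<omega> r = (case r of Pth i j k \<Rightarrow> if j = 0 then \<omega> i else 0 | _ \<Rightarrow> 0)"

lemma branch_weight_simps[simp]: "branch_weight \<omega> E0 = 0" "branch_weight \<omega> Ew = 0" "branch_weight \<omega> (Ein i j) = 0" "branch_weight \<omega> (Pth i j k) = (if j = 0 then \<omega> i else 0)"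
  by (auto simp: branch_weight_def)

lemma branch_weight_vertex: "v \<in> qvertices m len \<Longrightarrow> branch_weight \<omega> v = 0"
  by (cases v) auto

lemma branch_weight_add: "p \<in> P \<Longrightarrow> q \<in> P \<Longrightarrow> qmul len p q = Some r \<Longrightarrow> branch_weight \<omega> r = branch_weight \<omega> p + branch_weight \<omega> q"
proof (cases "is_triv p")
  case True
  assume "p \<in> P" "q \<in> P" "qmul len p q = Some r"
  thus ?thesis using True by (cases p; auto simp: qmul_triv_l split: if_splits)
next
  case False
  assume pq: "p \<in> P" "q \<in> P" "qmul len p q = Some r"
  then obtain i j k where p: "p = Pth i j k" using False by (auto simp: triv_iff)
  show ?thesis
  proof (cases "is_triv q")
    case True thus ?thesis using pq p by (cases q; auto simp: qmul_triv_r split: if_splits)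
  next
    case False
    then obtain i' j' k' where q: "q = Pth i' j' k'" by (auto simp: triv_iff)
    thus ?thesis using pq p by (auto simp: qmul_PP' split: if_splits)
  qed
qed

lemma arrder_0: "arrder m len i 0 h f = (\<lambda>r. \<Sum>p\<in>P. (if \<exists>k. p = Pth i 0 k then
     f p * mul (mul (pt E0) h) (pt (seg len i 1 (qlen p))) r else 0))"
  unfolding arrder_def
  by (rule ext, rule sum.cong[OF refl]) (auto split: qpath.splits simp: seg_def)

lemma first_diag_diag_der: "i \<in> {1..m} \<Longrightarrow> first_diag m len i = diag_der (branch_weight (\<lambda>i'. if i' = i then 1 else 0))"
proof (intro ext)
  fix f r assume i: "i \<in> {1..m}"
  have "first_diag m len i f r = (\<Sum>p\<in>P. if \<exists>k. p = Pth i 0 k then f p * pt p r else 0)"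
    unfolding first_diag_def arrder_0
  proof (rule sum.cong[OF refl])
    fix p assume p: "p \<in> P"
    show "(if \<exists>k. p = Pth i 0 k then f p * mul (mul (pt E0) (pt (Pth i 0 1))) (pt (seg len i 1 (qlen p))) r else 0) =
          (if \<exists>k. p = Pth i 0 k then f p * pt p r else 0)"
    proof (cases "\<exists>k. p = Pth i 0 k")
      case True
      then obtain k where k: "p = Pth i 0 k" by blast
      have k1: "1 \<le> k" "k \<le> len i" using p k by auto
      have s01: "seg len i 0 1 = Pth i 0 1" by (simp add: seg_def)
      have s00: "seg len i 0 0 = E0" by (simp add: seg_def vpos_def)
      have s0k: "seg len i 0 k = p" using k k1 by (simp add: seg_def)
      have m1: "mul (pt E0) (pt (Pth i 0 1)) = pt (Pth i 0 1)"
        using seg_mul[of i m 0 0 1 len] i k1 s00 s01 by (intro pt_mul[where m=m]) (auto simp: seg_in)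
      have m2: "mul (pt (Pth i 0 1)) (pt (seg len i 1 k)) = pt p"
        using seg_mul[of i m 0 1 k len] i k1 s01 s0k by (intro pt_mul[where m=m]) (auto simp: seg_in)
      show ?thesis using k m1 m2 by simp
    qed simp
  qed
  also have "\<dots> = diag_der (branch_weight (\<lambda>i'. if i' = i then 1 else 0)) f r"
    unfolding diag_der_def by (subst sum_eq_single_if[where a=r]) (auto simp: pt_apply branch_weight_def split: qpath.splits)
  finally show "first_diag m len i f r = diag_der (branch_weight (\<lambda>i'. if i' = i then 1 else 0)) f r" .
qed

lemma arrder_arrow_der: "u \<in> {1..a} \<Longrightarrow> x \<in> P \<Longrightarrow> qsrc len x = E0 \<Longrightarrow> qtgt len x = Ew \<Longrightarrow>
   arrder m len u 0 (pt x) = arrow_der u x"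
proof (intro ext)
  fix f r assume u: "u \<in> {1..a}" and x: "x \<in> P" "qsrc len x = E0" "qtgt len x = Ew"
  have lu: "len u = 1" using len_arr[OF u] .
  have m1: "mul (pt E0) (pt x) = pt x" by (rule ext) (use x in \<open>auto simp: cq_mul_vert_l pt_apply\<close>)
  have m2: "mul (pt x) (pt Ew) = pt x" by (rule ext) (use x in \<open>auto simp: cq_mul_vert_r pt_apply\<close>)
  have "arrder m len u 0 (pt x) f r = (\<Sum>p\<in>P. (if \<exists>k. p = Pth u 0 k then
     f p * mul (mul (pt E0) (pt x)) (pt (seg len u 1 (qlen p))) r else 0))" by (simp add: arrder_0)
  also have "\<dots> = f (arr u) * mul (mul (pt E0) (pt x)) (pt (seg len u 1 1)) r"
    by (rule trans[OF sum_eq_single[where a="arr u"]]) (use u lu arr_P in auto)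
  also have "\<dots> = arrow_der u x f r" using lu m1 m2 by (simp add: seg_def vpos_def arrow_der_def)
  finally show "arrder m len u 0 (pt x) f r = arrow_der u x f r" .
qed

lemma arr_eq_br: "u \<in> {1..a} \<Longrightarrow> arr u = br u" using len_arr by simp

lemma wder_arrow_der: "p \<in> {1..a} \<Longrightarrow> q \<in> {1..a} \<Longrightarrow> wder m len p q = arrow_der p (arr q)"
  unfolding wder_def using len_arr[of q] a_le by (intro arrder_arrow_der) (auto simp: vpos_def)

lemma zder_arrow_der: "u \<in> {1..a} \<Longrightarrow> s \<in> {1..m} \<Longrightarrow> zder m len u s = arrow_der u (br s)"
  unfolding zder_def using len_pos[of s] by (intro arrder_arrow_der) (auto simp: vpos_def)

lemma diag_der_ce: "diag_der w f \<in> CE" unfolding diag_der_def cq_elems_def by auto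
lemma arrow_der_ce: "x \<in> P \<Longrightarrow> arrow_der u x f \<in> CE" unfolding arrow_der_def cq_elems_def by (auto simp: pt_apply)

lemma branchvec_nonzero: "branchvec m len b r \<noteq> 0 \<Longrightarrow> \<exists>j\<in>{1..m}. r = br j \<and> b j \<noteq> 0"
  by (metis branchvec_br branchvec_nbr)

lemma diag_der_leibniz: "(\<And>p q r. p \<in> P \<Longrightarrow> q \<in> P \<Longrightarrow> qmul len p q = Some r \<Longrightarrow> w r = w p + w q) \<Longrightarrow>
  diag_der w (mul f g) = (\<lambda>r. mul (diag_der w f) g r + mul f (diag_der w g) r)"
proof (rule ext)
  fix r assume wadd: "\<And>p q r. p \<in> P \<Longrightarrow> q \<in> P \<Longrightarrow> qmul len p q = Some r \<Longrightarrow> w r = w p + w q"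
  have "mul (diag_der w f) g r + mul f (diag_der w g) r =
    (\<Sum>p\<in>P. \<Sum>q\<in>P. if qmul len p q = Some r then (w p + w q) * (f p * g q) else 0)"
    unfolding cq_mul_def diag_der_def
    by (subst sum.distrib[symmetric], rule sum.cong[OF refl], subst sum.distrib[symmetric], rule sum.cong[OF refl], auto simp: algebra_simps)
  also have "\<dots> = (\<Sum>p\<in>P. \<Sum>q\<in>P. if qmul len p q = Some r then w r * (f p * g q) else 0)"
    using wadd by (intro sum.cong refl) auto
  also have "\<dots> = diag_der w (mul f g) r"
  proof (cases "r \<in> P")
    case True thus ?thesis unfolding diag_der_def cq_mul_def by (simp add: sum_distrib_left if_distrib cong: if_cong)
  next
    case False thus ?thesis unfolding diag_der_def by (auto intro!: sum.neutral dest: qmul_closed[where m=m])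
  qed
  finally show "diag_der w (mul f g) r = mul (diag_der w f) g r + mul f (diag_der w g) r" by simp
qed

lemma diag_der_in_I:
  assumes wrho: "\<And>t. t < length rho \<Longrightarrow> \<exists>c. \<forall>j. (rho ! t) j \<noteq> 0 \<longrightarrow> w (br j) = c"
    and f: "f \<in> I"
  shows "diag_der w f \<in> I"
proof -
  obtain cf where cf: "\<And>t j. t < length rho \<Longrightarrow> (rho ! t) j \<noteq> 0 \<Longrightarrow> w (br j) = cf t"
    using wrho by metis
  obtain \<kappa> where k: "\<And>r. \<not> has_mon_subpath r \<Longrightarrow> f r = rel_comb \<kappa> r"
    using f I_subset_explicit unfolding I_explicit_def by blast
  have "diag_der w f r = rel_comb (\<lambda>t. cf t * \<kappa> t) r" if r: "\<not> has_mon_subpath r" for r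
  proof (cases "r \<in> P")
    case True
    have "diag_der w f r = (\<Sum>t<length rho. \<kappa> t * (w r * branchvec m len (rho ! t) r))"
      using True k[OF r] by (simp add: diag_der_def rel_comb_def sum_distrib_left algebra_simps)
    also have "\<dots> = rel_comb (\<lambda>t. cf t * \<kappa> t) r"
      unfolding rel_comb_def
    proof (rule sum.cong[OF refl])
      fix t assume t: "t \<in> {..<length rho}"
      show "\<kappa> t * (w r * branchvec m len (rho ! t) r) = cf t * \<kappa> t * branchvec m len (rho ! t) r"
      proof (cases "branchvec m len (rho ! t) r = 0")
        case False
        then obtain j where "j \<in> {1..m}" "r = br j" "(rho ! t) j \<noteq> 0" using branchvec_nonzero by blast
        thus ?thesis using cf[of t j] t by simp
      qed simp
    qed
    finally show ?thesis .
  next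
    case False
    thus ?thesis using branch_supported_out[OF rel_comb_branch_supported] by (simp add: diag_der_def)
  qed
  thus ?thesis using diag_der_ce I_explicit_subset unfolding I_explicit_def by blast
qed

lemma Ederiv_diag_der:
  assumes wv: "\<And>v. v \<in> qvertices m len \<Longrightarrow> w v = 0"
    and wadd: "\<And>p q r. p \<in> P \<Longrightarrow> q \<in> P \<Longrightarrow> qmul len p q = Some r \<Longrightarrow> w r = w p + w q"
    and wrho: "\<And>t. t < length rho \<Longrightarrow> \<exists>c. \<forall>j. (rho ! t) j \<noteq> 0 \<longrightarrow> w (br j) = c"
  shows "is_Ederiv m len I (diag_der w)"
proof -
  have vert: "diag_der w (pt v) \<in> I" if "v \<in> qvertices m len" for v
  proof -
    have "diag_der w (pt v) = (\<lambda>r. 0)" using wv that by (auto simp: diag_der_def pt_apply)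
    thus ?thesis using I_zero by simp
  qed
  have leib: "(\<lambda>r. diag_der w (mul f g) r - (mul (diag_der w f) g r + mul f (diag_der w g) r)) \<in> I" for f g
    using I_zero by (simp add: diag_der_leibniz[OF wadd])
  show ?thesis unfolding is_Ederiv_def
    using diag_der_in_I[OF wrho] diag_der_ce vert leib by (auto simp: diag_der_def algebra_simps)
qed

lemma qmul_to_arr: "u \<in> {1..a} \<Longrightarrow> p \<in> P \<Longrightarrow> q \<in> P \<Longrightarrow>
   qmul len p q = Some (arr u) \<longleftrightarrow> (p = E0 \<and> q = arr u) \<or> (p = arr u \<and> q = Ew)"
proof -
  assume u: "u \<in> {1..a}" and pq: "p \<in> P" "q \<in> P"
  have lu: "len u = 1" using len_arr[OF u] .
  show ?thesis
  proof (cases "is_triv p")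
    case True
    thus ?thesis using pq lu by (cases p; cases q) (auto simp: qmul_triv_l vpos_def)
  next
    case False
    then obtain i j k where p: "p = Pth i j k" by (auto simp: triv_iff)
    show ?thesis
    proof (cases "is_triv q")
      case True
      thus ?thesis using pq lu p by (cases q) (auto simp: qmul_triv_r vpos_def)
    next
      case False
      then obtain i' j' k' where q: "q = Pth i' j' k'" by (auto simp: triv_iff)
      thus ?thesis using pq p lu by (auto simp: qmul_PP' split: if_splits)
    qed
  qed
qed

lemma mul_at_arr: "u \<in> {1..a} \<Longrightarrow> mul f g (arr u) = f E0 * g (arr u) + f (arr u) * g Ew"
proof -
  assume u: "u \<in> {1..a}"
  have ne: "arr u \<noteq> E0" by simp
  have "mul f g (arr u) = (\<Sum>p\<in>P. (if p = E0 then f E0 * g (arr u) else 0) + (if p = arr u then f (arr u) * g Ew else 0))"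
    unfolding cq_mul_def
  proof (rule sum.cong[OF refl])
    fix p assume p: "p \<in> P"
    show "(\<Sum>q\<in>P. if qmul len p q = Some (arr u) then f p * g q else 0) =
      (if p = E0 then f E0 * g (arr u) else 0) + (if p = arr u then f (arr u) * g Ew else 0)"
    proof (cases "p = E0")
      case True thus ?thesis using u p arr_P by (subst sum_eq_single[where a="arr u"]) (auto simp: qmul_triv_l)
    next
      case False
      show ?thesis
      proof (cases "p = arr u")
        case True
        have h1: "qmul len (arr u) Ew = Some (arr u)" by (simp add: qmul_triv_r len_arr[OF u] vpos_def)
        have h2: "\<And>x. x \<in> P \<Longrightarrow> qmul len (arr u) x = Some (arr u) \<Longrightarrow> x = Ew"
          using qmul_to_arr[OF u arr_P[OF u]] by blast
        show ?thesis using True h1 h2 by (subst sum_eq_single[where a="Ew"]) auto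
      next
        case False2: False
        have "\<forall>q\<in>P. qmul len p q \<noteq> Some (arr u)" using qmul_to_arr[OF u p] False False2 by blast
        thus ?thesis using False False2 by simp
      qed
    qed
  qed
  also have "\<dots> = f E0 * g (arr u) + f (arr u) * g Ew"
    using u arr_P by (simp add: sum.distrib)
  finally show ?thesis .
qed

lemma arrow_der_leibniz: "u \<in> {1..a} \<Longrightarrow> j \<in> {1..m} \<Longrightarrow>
  arrow_der u (br j) (mul f g) = (\<lambda>r. mul (arrow_der u (br j) f) g r + mul f (arrow_der u (br j) g) r)"
proof -
  assume u: "u \<in> {1..a}" and j: "j \<in> {1..m}"
  have "mul (arrow_der u (br j) f) g = (\<lambda>r. f (arr u) * mul (pt (br j)) g r)"
    unfolding arrow_der_def by (simp add: cq_mul_smult_l)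
  also have "\<dots> = (\<lambda>r. f (arr u) * (g Ew * pt (br j) r))" by (simp add: mul_branch_supported_r[OF branch_supported_pt[OF j]])
  finally have e1: "mul (arrow_der u (br j) f) g = (\<lambda>r. f (arr u) * (g Ew * pt (br j) r))" .
  have "mul f (arrow_der u (br j) g) = (\<lambda>r. g (arr u) * mul f (pt (br j)) r)"
    unfolding arrow_der_def by (simp add: cq_mul_smult_r)
  also have "\<dots> = (\<lambda>r. g (arr u) * (f E0 * pt (br j) r))" by (simp add: mul_branch_supported_l[OF branch_supported_pt[OF j]])
  finally have e2: "mul f (arrow_der u (br j) g) = (\<lambda>r. g (arr u) * (f E0 * pt (br j) r))" .
  show ?thesis unfolding e1 e2 by (rule ext) (simp only: arrow_der_def mul_at_arr[OF u], simp add: algebra_simps)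
qed

lemma Ederiv_arrow_der:
  assumes u: "u \<in> {1..a}" and j: "j \<in> {1..m}"
  shows "is_Ederiv m len I (arrow_der u (br j))"
proof -
  have idl: "arrow_der u (br j) f \<in> I" if f: "f \<in> I" for f
  proof -
    have "f (arr u) = 0" by (rule I_len[OF f arr_P[OF u]]) simp
    hence "arrow_der u (br j) f = (\<lambda>r. 0)" by (simp add: arrow_der_def)
    thus ?thesis using I_zero by simp
  qed
  have vert: "arrow_der u (br j) (pt v) \<in> I" if "v \<in> qvertices m len" for v
  proof -
    have "arrow_der u (br j) (pt v) = (\<lambda>r. 0)" using that by (auto simp: arrow_der_def pt_apply)
    thus ?thesis using I_zero by simp
  qed
  have leib: "(\<lambda>r. arrow_der u (br j) (mul f g) r - (mul (arrow_der u (br j) f) g r + mul f (arrow_der u (br j) g) r)) \<in> I" for f g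
    using I_zero by (simp add: arrow_der_leibniz[OF u j])
  have lin1: "arrow_der u (br j) (\<lambda>r. f r + g r) = (\<lambda>r. arrow_der u (br j) f r + arrow_der u (br j) g r)" for f g
    by (auto simp: arrow_der_def algebra_simps)
  have lin2: "arrow_der u (br j) (\<lambda>r. c * f r) = (\<lambda>r. c * arrow_der u (br j) f r)" for c f
    by (auto simp: arrow_der_def algebra_simps)
  show ?thesis unfolding is_Ederiv_def
    using idl vert leib lin1 lin2 arrow_der_ce[OF br_P[OF j]] by blast
qed


text \<open>The normal form: the weight w on paths plus the sum of the classes K u j alpha^(u) || alpha^(j).\<close>
definition nf_der :: "(qpath \<Rightarrow> complex) \<Rightarrow> (nat \<Rightarrow> nat \<Rightarrow> complex) \<Rightarrow> cqmap" where
  "nf_der w K f r = (if r \<in> P then w r * f r else 0) + (\<Sum>u\<in>{1..a}. \<Sum>j\<in>{1..m}. K u j * f (arr u) * pt (br j) r)"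

lemma br_arr_eq: "u \<in> {1..a} \<Longrightarrow> j \<in> {1..m} \<Longrightarrow> br j = arr u \<longleftrightarrow> j = u"
  using len_arr[of u] by auto

lemma pt_br_arr: "u \<in> {1..a} \<Longrightarrow> j \<in> {1..m} \<Longrightarrow> pt (br j) (arr u) = (if j = u then 1 else 0)"
  using br_arr_eq[of u j] by (auto simp: pt_apply)

lemma Z_sub: "u \<in> {1..a} \<Longrightarrow> u \<in> {1..m}" using a_le by auto

lemma nf_der_arr: "u \<in> {1..a} \<Longrightarrow> nf_der w K f (arr u) = w (arr u) * f (arr u) + (\<Sum>u'\<in>{1..a}. K u' u * f (arr u'))"
proof -
  assume u: "u \<in> {1..a}"
  have "(\<Sum>j\<in>{1..m}. K u' j * f (arr u') * pt (br j) (arr u)) = K u' u * f (arr u')" for u'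
    using u Z_sub[OF u] by (subst sum_eq_single[where a=u]) (auto simp: pt_br_arr)
  thus ?thesis using arr_P[OF u] by (simp add: nf_der_def)
qed

lemma nf_der_comp:
  "nf_der w1 K1 (nf_der w2 K2 f) r =
    (if r \<in> P then w1 r * w2 r * f r else 0)
  + (\<Sum>u\<in>{1..a}. \<Sum>j\<in>{1..m}. K2 u j * w1 (br j) * f (arr u) * pt (br j) r)
  + (\<Sum>u\<in>{1..a}. \<Sum>j\<in>{1..m}. K1 u j * w2 (arr u) * f (arr u) * pt (br j) r)
  + (\<Sum>u\<in>{1..a}. \<Sum>j\<in>{1..m}. (\<Sum>u'\<in>{1..a}. K2 u u' * K1 u' j) * f (arr u) * pt (br j) r)"
proof -
  have e1: "(if r \<in> P then w1 r * nf_der w2 K2 f r else 0) = (if r \<in> P then w1 r * w2 r * f r else 0)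
     + (\<Sum>u\<in>{1..a}. \<Sum>j\<in>{1..m}. K2 u j * w1 (br j) * f (arr u) * pt (br j) r)"
  proof -
    have "(if r \<in> P then w1 r * (\<Sum>u\<in>{1..a}. \<Sum>j\<in>{1..m}. K2 u j * f (arr u) * pt (br j) r) else 0)
       = (\<Sum>u\<in>{1..a}. \<Sum>j\<in>{1..m}. if r \<in> P then w1 r * (K2 u j * f (arr u) * pt (br j) r) else 0)"
      by (simp add: sum_distrib_left)
    also have "\<dots> = (\<Sum>u\<in>{1..a}. \<Sum>j\<in>{1..m}. K2 u j * w1 (br j) * f (arr u) * pt (br j) r)"
      by (intro sum.cong refl) (use br_P in \<open>auto simp: pt_apply\<close>)
    finally show ?thesis by (auto simp: nf_der_def algebra_simps)
  qed
  have e2: "(\<Sum>u\<in>{1..a}. \<Sum>j\<in>{1..m}. K1 u j * nf_der w2 K2 f (arr u) * pt (br j) r) =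
     (\<Sum>u\<in>{1..a}. \<Sum>j\<in>{1..m}. K1 u j * w2 (arr u) * f (arr u) * pt (br j) r)
   + (\<Sum>u\<in>{1..a}. \<Sum>j\<in>{1..m}. (\<Sum>u'\<in>{1..a}. K2 u u' * K1 u' j) * f (arr u) * pt (br j) r)"
  proof -
    have "(\<Sum>u\<in>{1..a}. \<Sum>j\<in>{1..m}. K1 u j * nf_der w2 K2 f (arr u) * pt (br j) r) =
      (\<Sum>u\<in>{1..a}. \<Sum>j\<in>{1..m}. K1 u j * w2 (arr u) * f (arr u) * pt (br j) r)
    + (\<Sum>u\<in>{1..a}. \<Sum>j\<in>{1..m}. \<Sum>u'\<in>{1..a}. K1 u j * K2 u' u * f (arr u') * pt (br j) r)"
      by (simp add: nf_der_arr sum.distrib[symmetric] sum_distrib_left sum_distrib_right algebra_simps)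
    also have "(\<Sum>u\<in>{1..a}. \<Sum>j\<in>{1..m}. \<Sum>u'\<in>{1..a}. K1 u j * K2 u' u * f (arr u') * pt (br j) r)
       = (\<Sum>u'\<in>{1..a}. \<Sum>j\<in>{1..m}. \<Sum>u\<in>{1..a}. K1 u j * K2 u' u * f (arr u') * pt (br j) r)"
      by (subst sum.swap, subst (2) sum.swap, subst sum.swap, rule refl)
    also have "\<dots> = (\<Sum>u\<in>{1..a}. \<Sum>j\<in>{1..m}. (\<Sum>u'\<in>{1..a}. K2 u u' * K1 u' j) * f (arr u) * pt (br j) r)"
      by (simp add: sum_distrib_left sum_distrib_right algebra_simps)
    finally show ?thesis .
  qed
  show ?thesis unfolding nf_der_def[of w1 K1 "nf_der w2 K2 f"] using e1 e2 by simp
qed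

lemma nf_der_bracket:
  "dbracket (nf_der w1 K1) (nf_der w2 K2) = nf_der (\<lambda>r. 0) (\<lambda>u j. K2 u j * w1 (br j) - K1 u j * w2 (br j)
      + K1 u j * w2 (arr u) - K2 u j * w1 (arr u)
      + (\<Sum>u'\<in>{1..a}. K2 u u' * K1 u' j - K1 u u' * K2 u' j))"
  by (intro ext, unfold dbracket_def nf_der_comp)
     (simp add: nf_der_def sum_subtractf sum.distrib sum_distrib_left sum_distrib_right algebra_simps)

lemma nf_der_sum: "(\<lambda>f r. \<Sum>g\<in>F. c g * nf_der (W g) (KK g) f r) = nf_der (\<lambda>r. \<Sum>g\<in>F. c g * W g r) (\<lambda>u j. \<Sum>g\<in>F. c g * KK g u j)"
proof (intro ext)
  fix f r
  have "(\<Sum>g\<in>F. c g * (\<Sum>u\<in>{1..a}. \<Sum>j\<in>{1..m}. KK g u j * f (arr u) * pt (br j) r))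
      = (\<Sum>g\<in>F. \<Sum>u\<in>{1..a}. \<Sum>j\<in>{1..m}. c g * KK g u j * f (arr u) * pt (br j) r)"
    by (simp add: sum_distrib_left algebra_simps)
  also have "\<dots> = (\<Sum>u\<in>{1..a}. \<Sum>j\<in>{1..m}. \<Sum>g\<in>F. c g * KK g u j * f (arr u) * pt (br j) r)"
    by (subst sum.swap, rule sum.cong[OF refl], subst sum.swap, rule refl)
  also have "\<dots> = (\<Sum>u\<in>{1..a}. \<Sum>j\<in>{1..m}. (\<Sum>g\<in>F. c g * KK g u j) * f (arr u) * pt (br j) r)"
    by (simp add: sum_distrib_right)
  finally have arrows: "(\<Sum>g\<in>F. c g * (\<Sum>u\<in>{1..a}. \<Sum>j\<in>{1..m}. KK g u j * f (arr u) * pt (br j) r))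
      = (\<Sum>u\<in>{1..a}. \<Sum>j\<in>{1..m}. (\<Sum>g\<in>F. c g * KK g u j) * f (arr u) * pt (br j) r)" .
  have "(if r \<in> P then (\<Sum>g\<in>F. c g * W g r) * f r else 0) = (\<Sum>g\<in>F. c g * (if r \<in> P then W g r * f r else 0))"
    by (auto simp: sum_distrib_left sum_distrib_right algebra_simps)
  thus "(\<Sum>g\<in>F. c g * nf_der (W g) (KK g) f r) = nf_der (\<lambda>r. \<Sum>g\<in>F. c g * W g r) (\<lambda>u j. \<Sum>g\<in>F. c g * KK g u j) f r"
    using arrows unfolding nf_der_def by (simp add: sum.distrib distrib_left)
qed

lemma nf_der_add: "(\<lambda>f r. nf_der w K f r + nf_der w' K' f r) = nf_der (\<lambda>r. w r + w' r) (\<lambda>u j. K u j + K' u j)"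
  by (intro ext) (simp add: nf_der_def sum.distrib algebra_simps)

lemma nf_der_cong: "(\<And>r. r \<in> P \<Longrightarrow> w r = w' r) \<Longrightarrow> (\<And>u j. u \<in> {1..a} \<Longrightarrow> j \<in> {1..m} \<Longrightarrow> K u j = K' u j) \<Longrightarrow> nf_der w K = nf_der w' K'"
  by (intro ext) (simp add: nf_der_def)

lemma nf_der_zero: "nf_der (\<lambda>r. 0) (\<lambda>u j. 0) = (\<lambda>f r. 0)"
  by (intro ext) (simp add: nf_der_def)

lemma nf_der_move_diagonal: "nf_der w K = nf_der (\<lambda>r. w r + branch_weight (\<lambda>i. if i \<in> {1..a} then K i i else 0) r) (\<lambda>u j. if j = u then 0 else K u j)"
proof (intro ext)
  fix f r
  let ?d = "\<lambda>i. if i \<in> {1..a} then K i i else 0"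
  have split: "(\<Sum>j\<in>{1..m}. K u j * f (arr u) * pt (br j) r) =
     (\<Sum>j\<in>{1..m}. (if j = u then 0 else K u j) * f (arr u) * pt (br j) r) + K u u * f (arr u) * pt (arr u) r"
    if u: "u \<in> {1..a}" for u
  proof -
    have "(\<Sum>j\<in>{1..m}. K u j * f (arr u) * pt (br j) r) =
      (\<Sum>j\<in>{1..m}. (if j = u then 0 else K u j) * f (arr u) * pt (br j) r + (if j = u then K u u * f (arr u) * pt (arr u) r else 0))"
      using len_arr[OF u] by (intro sum.cong refl) auto
    also have "\<dots> = (\<Sum>j\<in>{1..m}. (if j = u then 0 else K u j) * f (arr u) * pt (br j) r) + K u u * f (arr u) * pt (arr u) r"
      using Z_sub[OF u] by (simp add: sum.distrib)
    finally show ?thesis .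
  qed
  have diag: "(\<Sum>u\<in>{1..a}. K u u * f (arr u) * pt (arr u) r) = (if r \<in> P then branch_weight ?d r * f r else 0)"
  proof (cases "\<exists>i\<in>{1..a}. r = arr i")
    case True
    then obtain i where i: "i \<in> {1..a}" "r = arr i" by blast
    show ?thesis using i arr_P[OF i(1)] by (subst sum_eq_single[where a=i]) (auto simp: pt_apply)
  next
    case False
    have l: "(\<Sum>u\<in>{1..a}. K u u * f (arr u) * pt (arr u) r) = 0"
      using False by (intro sum.neutral ballI) (auto simp: pt_apply)
    have "branch_weight ?d r = 0" if "r \<in> P"
    proof (cases r)
      case (Pth i j k)
      show ?thesis
      proof (cases "j = 0 \<and> i \<in> {1..a}")
        case True
        hence "k = 1" using Pth that len_arr[of i] by auto
        thus ?thesis using False True Pth by auto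
      qed (use Pth in auto)
    qed auto
    thus ?thesis using l by auto
  qed
  have S: "(\<Sum>u\<in>{1..a}. \<Sum>j\<in>{1..m}. K u j * f (arr u) * pt (br j) r) =
    (\<Sum>u\<in>{1..a}. \<Sum>j\<in>{1..m}. (if j = u then 0 else K u j) * f (arr u) * pt (br j) r) + (\<Sum>u\<in>{1..a}. K u u * f (arr u) * pt (arr u) r)"
    by (subst sum.distrib[symmetric], rule sum.cong[OF refl], rule split) simp
  show "nf_der w K f r = nf_der (\<lambda>r. w r + branch_weight ?d r) (\<lambda>u j. if j = u then 0 else K u j) f r"
    unfolding nf_der_def S diag by (simp add: algebra_simps)
qed

lemma nf_der_split: "nf_der w K f = (\<lambda>r. diag_der w f r + (\<Sum>u\<in>{1..a}. \<Sum>j\<in>{1..m}. K u j * arrow_der u (br j) f r))"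
  by (rule ext) (simp add: nf_der_def diag_der_def arrow_der_def algebra_simps)

lemma nf_der_leibniz: "(\<And>p q r. p \<in> P \<Longrightarrow> q \<in> P \<Longrightarrow> qmul len p q = Some r \<Longrightarrow> w r = w p + w q) \<Longrightarrow>
  nf_der w K (mul f g) = (\<lambda>r. mul (nf_der w K f) g r + mul f (nf_der w K g) r)"
proof -
  assume wadd: "\<And>p q r. p \<in> P \<Longrightarrow> q \<in> P \<Longrightarrow> qmul len p q = Some r \<Longrightarrow> w r = w p + w q"
  have l: "mul (nf_der w K f) g = (\<lambda>r. mul (diag_der w f) g r + (\<Sum>u\<in>{1..a}. \<Sum>j\<in>{1..m}. K u j * mul (arrow_der u (br j) f) g r))"
    unfolding nf_der_split by (simp add: cq_mul_add_l cq_mul_sum_l cq_mul_smult_l)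
  have r: "mul f (nf_der w K g) = (\<lambda>r. mul f (diag_der w g) r + (\<Sum>u\<in>{1..a}. \<Sum>j\<in>{1..m}. K u j * mul f (arrow_der u (br j) g) r))"
    unfolding nf_der_split by (simp add: cq_mul_add_r cq_mul_sum_r cq_mul_smult_r)
  show ?thesis
  proof (rule ext)
    fix r
    have A0: "diag_der w (mul f g) = (\<lambda>r. mul (diag_der w f) g r + mul f (diag_der w g) r)" by (rule diag_der_leibniz) (erule (2) wadd)
    have A: "diag_der w (mul f g) r = mul (diag_der w f) g r + mul f (diag_der w g) r" using A0 by simp
    have B: "(\<Sum>u\<in>{1..a}. \<Sum>j\<in>{1..m}. K u j * arrow_der u (br j) (mul f g) r) =
       (\<Sum>u\<in>{1..a}. \<Sum>j\<in>{1..m}. K u j * mul (arrow_der u (br j) f) g r + K u j * mul f (arrow_der u (br j) g) r)"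
      by (intro sum.cong refl) (simp add: arrow_der_leibniz algebra_simps)
    show "nf_der w K (mul f g) r = mul (nf_der w K f) g r + mul f (nf_der w K g) r"
      unfolding l r nf_der_split[of w K "mul f g"] using A B by (simp add: sum.distrib)
  qed
qed

section \<open>Inner derivations\<close>

lemma hh_zero_if_in_I: "(\<And>f. f \<in> CE \<Longrightarrow> d f \<in> I) \<Longrightarrow> hh_zero m len I d"
  unfolding hh_zero_def
  by (rule bexI[of _ "\<lambda>r. 0"]) (auto simp: cq_mul_zero_l cq_mul_zero_r I_zero ce_zero)

lemma hh_eq_refl: "hh_eq m len I d d"
  unfolding hh_eq_def by (rule hh_zero_if_in_I) (simp add: I_zero)

lemma hh_zero_zero: "hh_zero m len I (\<lambda>f r. 0)"
  by (rule hh_zero_if_in_I) (simp add: I_zero)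

definition vertex_elem :: "(qpath \<Rightarrow> complex) \<Rightarrow> cq" where
  "vertex_elem \<phi> = (\<lambda>r. if r \<in> qvertices m len then \<phi> r else 0)"

lemma vertex_elem_expand: "vertex_elem \<phi> = (\<lambda>r. \<Sum>v\<in>qvertices m len. \<phi> v * pt v r)"
proof (rule ext)
  fix r show "vertex_elem \<phi> r = (\<Sum>v\<in>qvertices m len. \<phi> v * pt v r)"
    unfolding vertex_elem_def by (subst sum_eq_single_if[where a=r]) (auto simp: pt_apply)
qed

lemma vertex_elem_ce: "vertex_elem \<phi> \<in> CE" unfolding vertex_elem_def cq_elems_def using qvertices_sub by auto

lemma mul_vertex_elem_l: "mul (vertex_elem \<phi>) f = (\<lambda>r. if r \<in> P then \<phi> (qsrc len r) * f r else 0)"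
proof (rule ext)
  fix r
  have "mul (vertex_elem \<phi>) f r = (\<Sum>v\<in>qvertices m len. \<phi> v * (if r \<in> P \<and> qsrc len r = v then f r else 0))"
    unfolding vertex_elem_expand by (simp add: cq_mul_sum_l cq_mul_smult_l cq_mul_vert_l)
  also have "\<dots> = (if r \<in> P then \<phi> (qsrc len r) * f r else 0)"
    using qsrc_in[of r m len] by (subst sum_eq_single_if[where a="qsrc len r"]) auto
  finally show "mul (vertex_elem \<phi>) f r = (if r \<in> P then \<phi> (qsrc len r) * f r else 0)" .
qed

lemma mul_vertex_elem_r: "mul f (vertex_elem \<phi>) = (\<lambda>r. if r \<in> P then \<phi> (qtgt len r) * f r else 0)"
proof (rule ext)
  fix r
  have "mul f (vertex_elem \<phi>) r = (\<Sum>v\<in>qvertices m len. \<phi> v * (if r \<in> P \<and> qtgt len r = v then f r else 0))"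
    unfolding vertex_elem_expand by (simp add: cq_mul_sum_r cq_mul_smult_r cq_mul_vert_r)
  also have "\<dots> = (if r \<in> P then \<phi> (qtgt len r) * f r else 0)"
    using qtgt_in[of r m len] by (subst sum_eq_single_if[where a="qtgt len r"]) auto
  finally show "mul f (vertex_elem \<phi>) r = (if r \<in> P then \<phi> (qtgt len r) * f r else 0)" .
qed

lemma hh_zero_if_inner:
  assumes "\<And>f. f \<in> CE \<Longrightarrow> (\<lambda>r. d f r - (if r \<in> P then (\<phi> (qsrc len r) - \<phi> (qtgt len r)) * f r else 0)) \<in> I"
  shows "hh_zero m len I d"
  unfolding hh_zero_def
proof (intro bexI[of _ "vertex_elem \<phi>"] conjI ballI)
  show "vertex_elem \<phi> \<in> CE" by (rule vertex_elem_ce)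
next
  fix v assume v: "v \<in> qvertices m len"
  have "(\<lambda>r. mul (vertex_elem \<phi>) (pt v) r - mul (pt v) (vertex_elem \<phi>) r) = (\<lambda>r. 0)"
    using v by (auto simp: mul_vertex_elem_l mul_vertex_elem_r pt_apply)
  thus "(\<lambda>r. mul (vertex_elem \<phi>) (pt v) r - mul (pt v) (vertex_elem \<phi>) r) \<in> I" using I_zero by simp
next
  fix f assume f: "f \<in> CE"
  have "(\<lambda>r. d f r - (mul (vertex_elem \<phi>) f r - mul f (vertex_elem \<phi>) r)) =
    (\<lambda>r. d f r - (if r \<in> P then (\<phi> (qsrc len r) - \<phi> (qtgt len r)) * f r else 0))"
    by (auto simp: mul_vertex_elem_l mul_vertex_elem_r algebra_simps)
  thus "(\<lambda>r. d f r - (mul (vertex_elem \<phi>) f r - mul f (vertex_elem \<phi>) r)) \<in> I" using assms[OF f] by simp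
qed

lemma dspan_zero: "(\<lambda>f r. 0) \<in> dspan S"
  unfolding dspan_def by (rule CollectI, rule exI[of _ "{}"]) auto

lemma dspan_gen: "s \<in> S \<Longrightarrow> s \<in> dspan S"
  unfolding dspan_def by (rule CollectI, rule exI[of _ "{s}"], rule exI[of _ "\<lambda>_. 1"]) auto

lemma dspan_add: "x \<in> dspan S \<Longrightarrow> y \<in> dspan S \<Longrightarrow> (\<lambda>f r. x f r + y f r) \<in> dspan S"
proof -
  assume "x \<in> dspan S" "y \<in> dspan S"
  then obtain F c G d where x: "x = (\<lambda>f r. \<Sum>s\<in>F. c s * s f r)" "finite F" "F \<subseteq> S"
    and y: "y = (\<lambda>f r. \<Sum>s\<in>G. d s * s f r)" "finite G" "G \<subseteq> S"
    unfolding dspan_def by blast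
  let ?e = "\<lambda>s. (if s \<in> F then c s else 0) + (if s \<in> G then d s else 0)"
  have "(\<lambda>f r. x f r + y f r) = (\<lambda>f r. \<Sum>s\<in>F \<union> G. ?e s * s f r)"
  proof (intro ext)
    fix f r
    have "(\<Sum>s\<in>F \<union> G. ?e s * s f r) = (\<Sum>s\<in>F \<union> G. (if s \<in> F then c s * s f r else 0) + (if s \<in> G then d s * s f r else 0))"
      by (intro sum.cong refl) (simp add: distrib_right)
    also have "\<dots> = (\<Sum>s\<in>F \<union> G. (if s \<in> F then c s * s f r else 0)) + (\<Sum>s\<in>F \<union> G. (if s \<in> G then d s * s f r else 0))"
      by (rule sum.distrib)
    also have "(\<Sum>s\<in>F \<union> G. (if s \<in> F then c s * s f r else 0)) = (\<Sum>s\<in>F. c s * s f r)"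
      using x(2) y(2) by (simp add: sum.If_cases Int_absorb1)
    also have "(\<Sum>s\<in>F \<union> G. (if s \<in> G then d s * s f r else 0)) = (\<Sum>s\<in>G. d s * s f r)"
      using x(2) y(2) by (simp add: sum.If_cases Int_absorb1)
    finally show "x f r + y f r = (\<Sum>s\<in>F \<union> G. ?e s * s f r)" using x y by simp
  qed
  thus ?thesis unfolding dspan_def using x y by (intro CollectI exI[of _ "F \<union> G"] exI[of _ ?e]) auto
qed

lemma dspan_smult: "x \<in> dspan S \<Longrightarrow> (\<lambda>f r. c * x f r) \<in> dspan S"
proof -
  assume "x \<in> dspan S"
  then obtain F e where x: "x = (\<lambda>f r. \<Sum>s\<in>F. e s * s f r)" "finite F" "F \<subseteq> S"
    unfolding dspan_def by blast
  have "(\<lambda>f r. c * x f r) = (\<lambda>f r. \<Sum>s\<in>F. (c * e s) * s f r)"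
    using x by (simp add: sum_distrib_left algebra_simps)
  thus ?thesis unfolding dspan_def using x by (intro CollectI exI[of _ F] exI[of _ "\<lambda>s. c * e s"]) auto
qed

lemma dspan_sum: "finite X \<Longrightarrow> (\<And>x. x \<in> X \<Longrightarrow> G x \<in> dspan S) \<Longrightarrow> (\<lambda>f r. \<Sum>x\<in>X. k x * G x f r) \<in> dspan S"
proof (induction X rule: finite_induct)
  case empty thus ?case using dspan_zero by simp
next
  case (insert x X)
  have "(\<lambda>f r. k x * G x f r) \<in> dspan S" using insert by (intro dspan_smult) auto
  moreover have "(\<lambda>f r. \<Sum>x\<in>X. k x * G x f r) \<in> dspan S" using insert by auto
  ultimately show ?case using dspan_add insert(1,2) by fastforce
qed

lemma dspan_elim: "x \<in> dspan S \<Longrightarrow> \<exists>F c. finite F \<and> F \<subseteq> S \<and> x = (\<lambda>f r. \<Sum>s\<in>F. c s * s f r)"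
  unfolding dspan_def by blast


section \<open>The spans of the distinguished classes\<close>

abbreviation "Bs \<equiv> {s \<in> B0w m len Mon rho. 2 \<le> len s}"
abbreviation "Vq \<equiv> qrho_verts m len Mon"
abbreviation "comps \<equiv> qrho_comps m len Mon rho"
abbreviation "Ms \<equiv> {i \<in> {1..m}. has_mon Mon i}"
abbreviation "edge \<equiv> qrho_edge m len Mon rho"

lemma nf_der_diag: "nf_der w (\<lambda>u j. 0) = diag_der w"
  by (intro ext) (simp add: nf_der_def diag_der_def)

lemma arrow_der_nf: "u \<in> {1..a} \<Longrightarrow> j \<in> {1..m} \<Longrightarrow> arrow_der u (br j) = nf_der (\<lambda>r. 0) (\<lambda>u' j'. if u' = u \<and> j' = j then 1 else 0)"
proof (intro ext)
  fix f r assume u: "u \<in> {1..a}" and j: "j \<in> {1..m}"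
  have "(\<Sum>u'\<in>{1..a}. \<Sum>j'\<in>{1..m}. (if u' = u \<and> j' = j then 1 else 0) * f (arr u') * pt (br j') r) = f (arr u) * pt (br j) r"
    by (subst sum_eq_single[where a=u], simp, use u in simp, force, subst sum_eq_single[where a=j]) (use j in auto)
  thus "arrow_der u (br j) f r = nf_der (\<lambda>r. 0) (\<lambda>u' j'. if u' = u \<and> j' = j then 1 else 0) f r"
    by (simp add: nf_der_def arrow_der_def)
qed

lemma branch_weight_sum: "(\<Sum>g\<in>F. c g * branch_weight (\<Omega> g) r) = branch_weight (\<lambda>i. \<Sum>g\<in>F. c g * \<Omega> g i) r"
  by (cases r) auto

lemma branch_weight_indicator_sum: "finite C \<Longrightarrow> (\<Sum>i\<in>C. branch_weight (\<lambda>i'. if i' = i then 1 else 0) r) = branch_weight (\<lambda>i'. if i' \<in> C then 1 else 0) r"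
  by (cases r) auto

lemma first_diag_nf: "i \<in> {1..m} \<Longrightarrow> first_diag m len i = nf_der (branch_weight (\<lambda>i'. if i' = i then 1 else 0)) (\<lambda>u j. 0)"
  by (simp add: first_diag_diag_der nf_der_diag)

lemma tder_nf: "C \<subseteq> {1..m} \<Longrightarrow> tder m len C = nf_der (branch_weight (\<lambda>i'. if i' \<in> C then 1 else 0)) (\<lambda>u j. 0)"
proof (intro ext)
  fix f r assume C: "C \<subseteq> {1..m}"
  have fC: "finite C" using C finite_subset by blast
  have "tder m len C f r = (\<Sum>i\<in>C. diag_der (branch_weight (\<lambda>i'. if i' = i then 1 else 0)) f r)"
    unfolding tder_def using C by (intro sum.cong refl) (auto simp: first_diag_diag_der)
  also have "\<dots> = diag_der (branch_weight (\<lambda>i'. if i' \<in> C then 1 else 0)) f r"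
    using branch_weight_indicator_sum[OF fC, of r] by (auto simp: diag_der_def sum_distrib_right[symmetric])
  finally show "tder m len C f r = nf_der (branch_weight (\<lambda>i'. if i' \<in> C then 1 else 0)) (\<lambda>u j. 0) f r"
    by (simp add: nf_der_diag)
qed

lemma zder_nf: "u \<in> {1..a} \<Longrightarrow> s \<in> {1..m} \<Longrightarrow> zder m len u s = nf_der (\<lambda>r. 0) (\<lambda>u' j'. if u' = u \<and> j' = s then 1 else 0)"
  by (simp add: zder_arrow_der arrow_der_nf)

lemma wder_nf: "p \<in> {1..a} \<Longrightarrow> q \<in> {1..a} \<Longrightarrow> wder m len p q = nf_der (\<lambda>r. 0) (\<lambda>u' j'. if u' = p \<and> j' = q then 1 else 0)"
proof -
  assume p: "p \<in> {1..a}" and q: "q \<in> {1..a}"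
  have "arr q = br q" by (rule arr_eq_br[OF q])
  thus ?thesis by (simp only: wder_arrow_der[OF p q]) (rule arrow_der_nf[OF p Z_sub[OF q]])
qed

lemma xder_nf: "j \<in> {2..a} \<Longrightarrow> xder m len j = nf_der (\<lambda>r. 0) (\<lambda>u' j'. (if u' = j \<and> j' = j then 1 else 0) - (if u' = 1 \<and> j' = 1 then 1 else 0))"
proof -
  assume j: "j \<in> {2..a}"
  have j1: "j \<in> {1..a}" "1 \<in> {1..a}" using j by auto
  have "xder m len j = (\<lambda>f r. nf_der (\<lambda>r. 0) (\<lambda>u' j'. if u' = j \<and> j' = j then 1 else 0) f r + (-1) * nf_der (\<lambda>r. 0) (\<lambda>u' j'. if u' = 1 \<and> j' = 1 then 1 else 0) f r)"
    unfolding xder_def using j1 by (simp add: wder_nf)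
  also have "\<dots> = nf_der (\<lambda>r. 0) (\<lambda>u' j'. (if u' = j \<and> j' = j then 1 else 0) - (if u' = 1 \<and> j' = 1 then 1 else 0))"
    by (intro ext) (simp add: nf_der_def left_diff_distrib sum_subtractf)
  finally show ?thesis .
qed

lemma dspan_nf_der:
  assumes x: "x \<in> dspan G"
    and gen: "\<And>g. g \<in> G \<Longrightarrow> \<exists>w K. g = nf_der w K \<and> Q w K"
    and clos: "\<And>(F::cqmap set) (c::cqmap \<Rightarrow> complex) (W::cqmap \<Rightarrow> qpath \<Rightarrow> complex) (KK::cqmap \<Rightarrow> nat \<Rightarrow> nat \<Rightarrow> complex). finite F \<Longrightarrow> (\<And>g. g \<in> F \<Longrightarrow> Q (W g) (KK g)) \<Longrightarrow>
       Q (\<lambda>r. \<Sum>g\<in>F. c g * W g r) (\<lambda>u j. \<Sum>g\<in>F. c g * KK g u j)"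
  shows "\<exists>w K. x = nf_der w K \<and> Q w K"
proof -
  obtain F c where F: "finite F" "F \<subseteq> G" "x = (\<lambda>f r. \<Sum>s\<in>F. c s * s f r)" using dspan_elim[OF x] by blast
  obtain W where W: "\<forall>g\<in>G. \<exists>K. g = nf_der (W g) K \<and> Q (W g) K" using bchoice[of G "\<lambda>g w. \<exists>K. g = nf_der w K \<and> Q w K"] gen by blast
  obtain KK where KK: "\<forall>g\<in>G. g = nf_der (W g) (KK g) \<and> Q (W g) (KK g)" using bchoice[OF W] by blast
  have "x = (\<lambda>f r. \<Sum>g\<in>F. c g * nf_der (W g) (KK g) f r)"
    unfolding F(3) using F(2) KK by (intro ext sum.cong refl) (metis subsetD)
  also have "\<dots> = nf_der (\<lambda>r. \<Sum>g\<in>F. c g * W g r) (\<lambda>u j. \<Sum>g\<in>F. c g * KK g u j)" by (rule nf_der_sum)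
  moreover have "Q (\<lambda>r. \<Sum>g\<in>F. c g * W g r) (\<lambda>u j. \<Sum>g\<in>F. c g * KK g u j)"
    by (rule clos[OF F(1)]) (use KK F(2) in blast)
  ultimately show ?thesis by blast
qed

lemma sum_nonzero_ex: "(\<Sum>g\<in>F. h g) \<noteq> (0::complex) \<Longrightarrow> \<exists>g\<in>F. h g \<noteq> 0"
  by (meson sum.not_neutral_contains_not_neutral)

lemma B_sub: "Bs \<subseteq> {1..m}" unfolding B0w_def by auto
lemma V_sub: "Vq \<subseteq> {1..m}" unfolding qrho_verts_def by auto
lemma comps_sub: "C \<in> comps \<Longrightarrow> C \<subseteq> Vq" unfolding qrho_comps_def by auto

lemma Lspan_nf: "l \<in> dspan (Lgens m len a Mon rho) \<Longrightarrow>
  \<exists>\<omega> K. l = nf_der (branch_weight \<omega>) K \<and> (\<forall>i. \<omega> i \<noteq> 0 \<longrightarrow> i \<in> Vq) \<and> (\<forall>u j. K u j \<noteq> 0 \<longrightarrow> j \<in> Bs)"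
proof -
  assume l: "l \<in> dspan (Lgens m len a Mon rho)"
  let ?Q = "\<lambda>w K. (\<exists>\<omega>. w = branch_weight \<omega> \<and> (\<forall>i. \<omega> i \<noteq> 0 \<longrightarrow> i \<in> Vq)) \<and> (\<forall>u j. K u j \<noteq> 0 \<longrightarrow> j \<in> Bs)"
  have "\<exists>w K. l = nf_der w K \<and> ?Q w K"
  proof (rule dspan_nf_der[OF l])
    fix g assume "g \<in> Lgens m len a Mon rho"
    then consider (t) C where "C \<in> comps" "g = tder m len C"
      | (z) u s where "u \<in> {1..a}" "s \<in> Bs" "g = zder m len u s"
      unfolding Lgens_def by blast
    then show "\<exists>w K. g = nf_der w K \<and> ?Q w K"
    proof cases
      case t
      have "C \<subseteq> {1..m}" using comps_sub[OF t(1)] V_sub by blast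
      hence "g = nf_der (branch_weight (\<lambda>i'. if i' \<in> C then 1 else 0)) (\<lambda>u j. 0)" using t tder_nf by simp
      thus ?thesis using comps_sub[OF t(1)] by (intro exI[of _ "branch_weight (\<lambda>i'. if i' \<in> C then 1 else 0)"] exI[of _ "\<lambda>u j. 0"] conjI exI[of _ "\<lambda>i'. if i' \<in> C then 1 else 0"]) auto
    next
      case z
      have "s \<in> {1..m}" using z B_sub by blast
      hence "g = nf_der (\<lambda>r. 0) (\<lambda>u' j'. if u' = u \<and> j' = s then 1 else 0)" using z zder_nf by simp
      moreover have "(\<lambda>r::qpath. 0::complex) = branch_weight (\<lambda>i. 0)" by (intro ext) (simp add: branch_weight_def split: qpath.splits)
      ultimately show ?thesis using z by (intro exI[of _ "\<lambda>r. 0"] exI[of _ "\<lambda>u' j'. if u' = u \<and> j' = s then 1 else 0"]) auto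
    qed
  next
    fix F :: "cqmap set" and c :: "cqmap \<Rightarrow> complex" and W :: "cqmap \<Rightarrow> qpath \<Rightarrow> complex" and KK :: "cqmap \<Rightarrow> nat \<Rightarrow> nat \<Rightarrow> complex"
    assume F: "finite F" and Q: "\<And>g. g \<in> F \<Longrightarrow> ?Q (W g) (KK g)"
    obtain \<Omega> where \<Omega>: "\<And>g. g \<in> F \<Longrightarrow> W g = branch_weight (\<Omega> g) \<and> (\<forall>i. \<Omega> g i \<noteq> 0 \<longrightarrow> i \<in> Vq)"
      using Q by metis
    have "(\<lambda>r. \<Sum>g\<in>F. c g * W g r) = branch_weight (\<lambda>i. \<Sum>g\<in>F. c g * \<Omega> g i)"
      using \<Omega> by (intro ext) (simp add: branch_weight_sum[symmetric] cong: sum.cong)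
    moreover have "\<forall>i. (\<Sum>g\<in>F. c g * \<Omega> g i) \<noteq> 0 \<longrightarrow> i \<in> Vq"
      using \<Omega> by (metis (no_types, lifting) mult_zero_right sum_nonzero_ex)
    moreover have "\<forall>u j. (\<Sum>g\<in>F. c g * KK g u j) \<noteq> 0 \<longrightarrow> j \<in> Bs"
      using Q by (metis (no_types, lifting) mult_zero_right sum_nonzero_ex)
    ultimately show "?Q (\<lambda>r. \<Sum>g\<in>F. c g * W g r) (\<lambda>u j. \<Sum>g\<in>F. c g * KK g u j)" by blast
  qed
  thus ?thesis by blast
qed

lemma Cspan_nf: "c \<in> dspan (ygens m len Mon) \<Longrightarrow>
  \<exists>\<omega>. c = nf_der (branch_weight \<omega>) (\<lambda>u j. 0) \<and> (\<forall>i. \<omega> i \<noteq> 0 \<longrightarrow> i \<in> Ms)"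
proof -
  assume c: "c \<in> dspan (ygens m len Mon)"
  let ?Q = "\<lambda>w K. (\<exists>\<omega>. w = branch_weight \<omega> \<and> (\<forall>i. \<omega> i \<noteq> 0 \<longrightarrow> i \<in> Ms)) \<and> (\<forall>u j. K u j = 0)"
  have "\<exists>w K. c = nf_der w K \<and> ?Q w K"
  proof (rule dspan_nf_der[OF c])
    fix g assume "g \<in> ygens m len Mon"
    then obtain i where i: "i \<in> {1..m}" "has_mon Mon i" "g = first_diag m len i"
      unfolding ygens_def by blast
    hence "g = nf_der (branch_weight (\<lambda>i'. if i' = i then 1 else 0)) (\<lambda>u j. 0)" using first_diag_nf by simp
    thus "\<exists>w K. g = nf_der w K \<and> ?Q w K" using i by (intro exI[of _ "branch_weight (\<lambda>i'. if i' = i then 1 else 0)"] exI[of _ "\<lambda>u j. 0"] conjI exI[of _ "\<lambda>i'. if i' = i then 1 else 0"]) auto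
  next
    fix F :: "cqmap set" and c :: "cqmap \<Rightarrow> complex" and W :: "cqmap \<Rightarrow> qpath \<Rightarrow> complex" and KK :: "cqmap \<Rightarrow> nat \<Rightarrow> nat \<Rightarrow> complex"
    assume F: "finite F" and Q: "\<And>g. g \<in> F \<Longrightarrow> ?Q (W g) (KK g)"
    obtain \<Omega> where \<Omega>: "\<And>g. g \<in> F \<Longrightarrow> W g = branch_weight (\<Omega> g) \<and> (\<forall>i. \<Omega> g i \<noteq> 0 \<longrightarrow> i \<in> Ms)"
      using Q by metis
    have "(\<lambda>r. \<Sum>g\<in>F. c g * W g r) = branch_weight (\<lambda>i. \<Sum>g\<in>F. c g * \<Omega> g i)"
      using \<Omega> by (intro ext) (simp add: branch_weight_sum[symmetric] cong: sum.cong)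
    moreover have "\<forall>i. (\<Sum>g\<in>F. c g * \<Omega> g i) \<noteq> 0 \<longrightarrow> i \<in> Ms"
      using \<Omega> by (metis (no_types, lifting) mult_zero_right sum_nonzero_ex)
    moreover have "\<forall>u j. (\<Sum>g\<in>F. c g * KK g u j) = 0"
      using Q by simp
    ultimately show "?Q (\<lambda>r. \<Sum>g\<in>F. c g * W g r) (\<lambda>u j. \<Sum>g\<in>F. c g * KK g u j)" by blast
  qed
  then obtain w K \<omega> where "c = nf_der w K" "w = branch_weight \<omega>" "\<forall>i. \<omega> i \<noteq> 0 \<longrightarrow> i \<in> Ms" "\<forall>u j. K u j = 0" by blast
  moreover have "K = (\<lambda>u j. 0)" using calculation(4) by auto
  ultimately show ?thesis by blast
qed

lemma Sspan_nf: "s \<in> dspan (slgens m len a) \<Longrightarrow>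
  \<exists>K. s = nf_der (\<lambda>r. 0) K \<and> (\<forall>u j. K u j \<noteq> 0 \<longrightarrow> j \<in> {1..a}) \<and> (\<Sum>u\<in>{1..a}. K u u) = 0"
proof -
  assume s: "s \<in> dspan (slgens m len a)"
  let ?Q = "\<lambda>w K. (\<forall>r. w r = 0) \<and> (\<forall>u j. K u j \<noteq> 0 \<longrightarrow> j \<in> {1..a}) \<and> (\<Sum>u\<in>{1..a}. K u u) = 0"
  have "\<exists>w K. s = nf_der w K \<and> ?Q w K"
  proof (rule dspan_nf_der[OF s])
    fix g assume "g \<in> slgens m len a"
    then consider (x) j where "j \<in> {2..a}" "g = xder m len j"
      | (w) p q where "p \<in> {1..a}" "q \<in> {1..a}" "p \<noteq> q" "g = wder m len p q"
      unfolding slgens_def by blast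
    then show "\<exists>w K. g = nf_der w K \<and> ?Q w K"
    proof cases
      case x
      have tr: "(\<Sum>u\<in>{1..a}. (if u = j \<and> u = j then 1 else 0) - (if u = 1 \<and> u = 1 then 1 else 0)) = (0::complex)"
        using x(1) by (simp add: sum_subtractf)
      have "g = nf_der (\<lambda>r. 0) (\<lambda>u' j'. (if u' = j \<and> j' = j then 1 else 0) - (if u' = 1 \<and> j' = 1 then 1 else 0))"
        using x xder_nf by simp
      thus ?thesis using x tr by (intro exI[of _ "\<lambda>r. 0"] exI[of _ "\<lambda>u' j'. (if u' = j \<and> j' = j then 1 else 0) - (if u' = 1 \<and> j' = 1 then 1 else 0)"]) (auto split: if_splits)
    next
      case w
      have "g = nf_der (\<lambda>r. 0) (\<lambda>u' j'. if u' = p \<and> j' = q then 1 else 0)" using w wder_nf by simp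
      moreover have "(\<Sum>u\<in>{1..a}. if u = p \<and> u = q then 1 else 0) = (0::complex)" using w(3) by (intro sum.neutral ballI) auto
      ultimately show ?thesis using w by (intro exI[of _ "\<lambda>r. 0"] exI[of _ "\<lambda>u' j'. if u' = p \<and> j' = q then 1 else 0"]) (auto split: if_splits)
    qed
  next
    fix F :: "cqmap set" and c :: "cqmap \<Rightarrow> complex" and W :: "cqmap \<Rightarrow> qpath \<Rightarrow> complex" and KK :: "cqmap \<Rightarrow> nat \<Rightarrow> nat \<Rightarrow> complex"
    assume F: "finite F" and Q: "\<And>g. g \<in> F \<Longrightarrow> ?Q (W g) (KK g)"
    have "\<forall>r. (\<Sum>g\<in>F. c g * W g r) = 0" using Q by simp
    moreover have "\<forall>u j. (\<Sum>g\<in>F. c g * KK g u j) \<noteq> 0 \<longrightarrow> j \<in> {1..a}"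
      using Q by (metis (no_types, lifting) mult_zero_right sum_nonzero_ex)
    moreover have "(\<Sum>u\<in>{1..a}. \<Sum>g\<in>F. c g * KK g u u) = 0"
      using Q by (subst sum.swap) (simp add: sum_distrib_left[symmetric])
    ultimately show "?Q (\<lambda>r. \<Sum>g\<in>F. c g * W g r) (\<lambda>u j. \<Sum>g\<in>F. c g * KK g u j)" by blast
  qed
  then obtain w K where "s = nf_der w K" "\<forall>r. w r = 0" "\<forall>u j. K u j \<noteq> 0 \<longrightarrow> j \<in> {1..a}" "(\<Sum>u\<in>{1..a}. K u u) = 0" by blast
  moreover have "w = (\<lambda>r. 0)" using calculation(2) by auto
  ultimately show ?thesis by blast
qed


abbreviation "cls i \<equiv> {i' \<in> Vq. edge\<^sup>*\<^sup>* i i'}"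

lemma edge_V: "edge i j \<Longrightarrow> i \<in> Vq \<and> j \<in> Vq" unfolding qrho_edge_def by auto
lemma edge_sym: "symp edge" unfolding qrho_edge_def symp_def by auto
lemma edge_rsym: "edge\<^sup>*\<^sup>* i j \<Longrightarrow> edge\<^sup>*\<^sup>* j i"
  using symp_rtranclp[OF edge_sym] by (auto simp: symp_def)

lemma comps_mem: "C \<in> comps \<Longrightarrow> \<exists>i\<in>Vq. C = cls i" unfolding qrho_comps_def by auto
lemma cls_comps: "i \<in> Vq \<Longrightarrow> cls i \<in> comps" unfolding qrho_comps_def by auto

lemma comps_disj: "C1 \<in> comps \<Longrightarrow> C2 \<in> comps \<Longrightarrow> x \<in> C1 \<Longrightarrow> x \<in> C2 \<Longrightarrow> C1 = C2"
proof -
  assume "C1 \<in> comps" "C2 \<in> comps" "x \<in> C1" "x \<in> C2"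
  then obtain i1 i2 where c: "C1 = cls i1" "C2 = cls i2" "edge\<^sup>*\<^sup>* i1 x" "edge\<^sup>*\<^sup>* i2 x"
    using comps_mem by blast
  have "edge\<^sup>*\<^sup>* i1 i2" using c(3) edge_rsym[OF c(4)] by (rule rtranclp_trans)
  hence "edge\<^sup>*\<^sup>* i1 y \<longleftrightarrow> edge\<^sup>*\<^sup>* i2 y" for y
    using edge_rsym rtranclp_trans by metis
  thus ?thesis using c by auto
qed

lemma comps_closed: "C \<in> comps \<Longrightarrow> i \<in> C \<Longrightarrow> edge i j \<Longrightarrow> j \<in> C"
proof -
  assume "C \<in> comps" "i \<in> C" "edge i j"
  then obtain i0 where "C = cls i0" "edge\<^sup>*\<^sup>* i0 i" using comps_mem by blast
  thus ?thesis using \<open>edge i j\<close> edge_V by (auto intro: rtranclp.rtrancl_into_rtrancl)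
qed

lemma finite_V: "finite Vq" using V_sub finite_subset by blast
lemma finite_comps: "finite comps"
proof -
  have "comps \<subseteq> Pow Vq" using comps_sub by blast
  thus ?thesis using finite_V by (simp add: finite_subset)
qed

lemma Ms_notZ: "i \<in> Ms \<Longrightarrow> i \<notin> {1..a}"
proof
  assume i: "i \<in> Ms" and iA: "i \<in> {1..a}"
  then obtain j k where jk: "Pth i j k \<in> Mon" unfolding has_mon_def by auto
  have "j < k" "k \<le> len i" using Mon_sub[OF jk] by auto
  hence "j = 0" "k = 1" using len_arr[OF iA] by auto
  hence "pt (arr i) \<in> I" using jk unfolding toupie_ideal_def by (intro gen_ideal.gen) auto
  hence "pt (arr i) (arr i) = 0" by (rule I_len) (use arr_P[OF iA] in auto)
  thus False by (simp add: pt_apply)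
qed

lemma V_notZ: "i \<in> Vq \<Longrightarrow> i \<notin> {1..a}"
  unfolding qrho_verts_def using len_arr by fastforce
lemma B_notZ: "i \<in> Bs \<Longrightarrow> i \<notin> {1..a}"
  using len_arr by fastforce
lemma V_notM: "i \<in> Vq \<Longrightarrow> i \<notin> Ms" unfolding qrho_verts_def by auto
lemma B_notM: "i \<in> Bs \<Longrightarrow> \<not> has_mon Mon i" unfolding B0w_def by auto
lemma rel_support_Vq: "t < length rho \<Longrightarrow> (rho ! t) j \<noteq> 0 \<Longrightarrow> j \<in> Vq"
  using rel_support[OF nth_mem] unfolding qrho_verts_def by auto

lemma rel_support_edge: "t < length rho \<Longrightarrow> (rho ! t) j \<noteq> 0 \<Longrightarrow> (rho ! t) j' \<noteq> 0 \<Longrightarrow> edge j j'"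
  unfolding qrho_edge_def using rel_support_Vq nth_mem by blast

lemma branch_weight_zero: "branch_weight (\<lambda>i. 0) = (\<lambda>r. 0)" by (intro ext) (simp add: branch_weight_def split: qpath.splits)

lemma nf_der_diag_in_Lspan:
  assumes \<omega>V: "\<And>i. \<omega> i \<noteq> 0 \<Longrightarrow> i \<in> Vq"
    and \<omega>C: "\<And>C i i'. C \<in> comps \<Longrightarrow> i \<in> C \<Longrightarrow> i' \<in> C \<Longrightarrow> \<omega> i = \<omega> i'"
  shows "nf_der (branch_weight \<omega>) (\<lambda>u j. 0) \<in> dspan (Lgens m len a Mon rho)"
proof -
  define rep where "rep C = (SOME i. i \<in> C)" for C :: "nat set"
  have rep: "rep C \<in> C" if "C \<in> comps" for C
    using comps_mem[OF that] unfolding rep_def by (metis (mono_tags, lifting) CollectI edge_rsym rtranclp.rtrancl_refl someI_ex)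
  have sum\<omega>: "(\<Sum>C\<in>comps. \<omega> (rep C) * (if i \<in> C then 1 else 0)) = \<omega> i" for i
  proof (cases "i \<in> Vq")
    case True
    have ci: "cls i \<in> comps" "i \<in> cls i" using True cls_comps by auto
    have oth: "i \<notin> C" if "C \<in> comps" "C \<noteq> cls i" for C
      using comps_disj[OF that(1) ci(1)] that(2) ci(2) by blast
    have "(\<Sum>C\<in>comps. \<omega> (rep C) * (if i \<in> C then 1 else 0)) = \<omega> (rep (cls i)) * (if i \<in> cls i then 1 else 0)"
      by (rule sum_eq_single[OF finite_comps ci(1)]) (simp add: oth)
    also have "\<dots> = \<omega> i" using ci \<omega>C[OF ci(1) rep[OF ci(1)] ci(2)] by simp
    finally show ?thesis .
  next
    case False
    have "\<omega> i = 0" using False \<omega>V by blast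
    moreover have "\<forall>C\<in>comps. i \<notin> C" using False comps_sub by blast
    ultimately show ?thesis by simp
  qed
  have e1: "nf_der (branch_weight \<omega>) (\<lambda>u j. 0) = (\<lambda>f r. \<Sum>C\<in>comps. \<omega> (rep C) * tder m len C f r)"
  proof -
    have "(\<lambda>f r. \<Sum>C\<in>comps. \<omega> (rep C) * tder m len C f r) =
       (\<lambda>f r. \<Sum>C\<in>comps. \<omega> (rep C) * nf_der (branch_weight (\<lambda>i'. if i' \<in> C then 1 else 0)) (\<lambda>u j. 0) f r)"
      using comps_sub V_sub by (intro ext sum.cong refl) (metis order_trans tder_nf)
    also have "\<dots> = nf_der (branch_weight \<omega>) (\<lambda>u j. 0)"
      by (subst nf_der_sum, rule nf_der_cong) (simp_all add: branch_weight_sum sum\<omega>)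
    finally show ?thesis by simp
  qed
  show ?thesis
    unfolding e1 by (rule dspan_sum[OF finite_comps], rule dspan_gen) (auto simp: Lgens_def)
qed

lemma nf_der_arrows_in_Lspan:
  assumes KB: "\<And>u j. K u j \<noteq> 0 \<Longrightarrow> j \<in> Bs"
  shows "nf_der (\<lambda>r. 0) K \<in> dspan (Lgens m len a Mon rho)"
proof -
  have e2: "nf_der (\<lambda>r. 0) K = (\<lambda>f r. \<Sum>u\<in>{1..a}. 1 * (\<lambda>f r. \<Sum>s\<in>Bs. K u s * zder m len u s f r) f r)"
  proof (intro ext)
    fix f r
    have "(\<Sum>j\<in>{1..m}. K u j * f (arr u) * pt (br j) r) = (\<Sum>s\<in>Bs. K u s * zder m len u s f r)" if u: "u \<in> {1..a}" for u
    proof -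
      have "(\<Sum>j\<in>{1..m}. K u j * f (arr u) * pt (br j) r) = (\<Sum>j\<in>Bs. K u j * f (arr u) * pt (br j) r)"
        using B_sub KB by (intro sum.mono_neutral_right) auto
      also have "\<dots> = (\<Sum>s\<in>Bs. K u s * zder m len u s f r)"
        using u B_sub by (intro sum.cong refl) (auto simp: zder_arrow_der arrow_der_def)
      finally show ?thesis .
    qed
    thus "nf_der (\<lambda>r. 0) K f r = (\<Sum>u\<in>{1..a}. 1 * (\<lambda>f r. \<Sum>s\<in>Bs. K u s * zder m len u s f r) f r)"
      by (simp add: nf_der_def)
  qed
  show ?thesis
    unfolding e2
  proof (rule dspan_sum, simp)
    fix u assume u: "u \<in> {1..a}"
    have "finite Bs" using B_sub finite_subset by blast
    thus "(\<lambda>f r. \<Sum>s\<in>Bs. K u s * zder m len u s f r) \<in> dspan (Lgens m len a Mon rho)"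
    proof (rule dspan_sum)
      fix s assume "s \<in> Bs"
      thus "zder m len u s \<in> dspan (Lgens m len a Mon rho)"
        by (intro dspan_gen) (use u in \<open>auto simp: Lgens_def\<close>)
    qed
  qed
qed

lemma nf_der_in_Lspan:
  assumes \<omega>V: "\<And>i. \<omega> i \<noteq> 0 \<Longrightarrow> i \<in> Vq"
    and \<omega>C: "\<And>C i i'. C \<in> comps \<Longrightarrow> i \<in> C \<Longrightarrow> i' \<in> C \<Longrightarrow> \<omega> i = \<omega> i'"
    and KB: "\<And>u j. K u j \<noteq> 0 \<Longrightarrow> j \<in> Bs"
  shows "nf_der (branch_weight \<omega>) K \<in> dspan (Lgens m len a Mon rho)"
proof -
  have "nf_der (branch_weight \<omega>) K = (\<lambda>f r. nf_der (branch_weight \<omega>) (\<lambda>u j. 0) f r + nf_der (\<lambda>r. 0) K f r)"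
    by (simp add: nf_der_add)
  thus ?thesis
    using dspan_add[OF nf_der_diag_in_Lspan[OF \<omega>V \<omega>C] nf_der_arrows_in_Lspan[OF KB]] by simp
qed

lemma nf_der_in_Cspan:
  assumes \<omega>M: "\<And>i. \<omega> i \<noteq> 0 \<Longrightarrow> i \<in> Ms"
  shows "nf_der (branch_weight \<omega>) (\<lambda>u j. 0) \<in> dspan (ygens m len Mon)"
proof -
  have "(\<lambda>f r. \<Sum>i\<in>Ms. \<omega> i * first_diag m len i f r) = (\<lambda>f r. \<Sum>i\<in>Ms. \<omega> i * nf_der (branch_weight (\<lambda>i'. if i' = i then 1 else 0)) (\<lambda>u j. 0) f r)"
    by (intro ext sum.cong refl) (simp add: first_diag_nf)
  also have "\<dots> = nf_der (branch_weight \<omega>) (\<lambda>u j. 0)"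
  proof (subst nf_der_sum, rule nf_der_cong)
    fix r
    have "(\<Sum>i\<in>Ms. \<omega> i * (if i' = i then 1 else 0)) = \<omega> i'" for i'
    proof (cases "i' \<in> Ms")
      case True
      have "finite Ms" by simp
      thus ?thesis using True by (subst sum_eq_single[where a=i']) auto
    next
      case False
      have "\<omega> i' = 0" using False \<omega>M by blast
      moreover have "(\<Sum>i\<in>Ms. \<omega> i * (if i' = i then 1 else 0)) = 0" by (intro sum.neutral ballI) (use False in auto)
      ultimately show ?thesis by simp
    qed
    thus "(\<Sum>g\<in>Ms. \<omega> g * branch_weight (\<lambda>i'. if i' = g then 1 else 0) r) = branch_weight \<omega> r"
      by (simp add: branch_weight_sum)
  qed simp
  finally have e: "nf_der (branch_weight \<omega>) (\<lambda>u j. 0) = (\<lambda>f r. \<Sum>i\<in>Ms. \<omega> i * first_diag m len i f r)" by simp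
  show ?thesis unfolding e by (rule dspan_sum, simp, rule dspan_gen) (auto simp: ygens_def)
qed

lemma sl_to_hh_in_Sspan: "sl_to_hh m len a M \<in> dspan (slgens m len a)"
proof -
  have e: "sl_to_hh m len a M = (\<lambda>f r. (\<lambda>f r. \<Sum>p\<in>{1..a}. 1 * (\<lambda>f r. \<Sum>q\<in>{1..a} - {p}. M q p * wder m len p q f r) f r) f r
     + (\<lambda>f r. \<Sum>j\<in>{2..a}. M j j * xder m len j f r) f r)"
  proof (intro ext)
    fix f r
    have "(\<Sum>q\<in>{1..a}. if p \<noteq> q then M q p * wder m len p q f r else 0) = (\<Sum>q\<in>{1..a} - {p}. M q p * wder m len p q f r)" for p
      by (rule sum.mono_neutral_cong_right) auto
    thus "sl_to_hh m len a M f r = (\<lambda>f r. \<Sum>p\<in>{1..a}. 1 * (\<lambda>f r. \<Sum>q\<in>{1..a} - {p}. M q p * wder m len p q f r) f r) f r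
     + (\<lambda>f r. \<Sum>j\<in>{2..a}. M j j * xder m len j f r) f r"
      by (simp add: sl_to_hh_def)
  qed
  have m1: "(\<lambda>f r. \<Sum>p\<in>{1..a}. 1 * (\<lambda>f r. \<Sum>q\<in>{1..a} - {p}. M q p * wder m len p q f r) f r) \<in> dspan (slgens m len a)"
    by (rule dspan_sum, simp, rule dspan_sum, simp, rule dspan_gen) (auto simp: slgens_def)
  have m2: "(\<lambda>f r. \<Sum>j\<in>{2..a}. M j j * xder m len j f r) \<in> dspan (slgens m len a)"
    by (rule dspan_sum, simp, rule dspan_gen) (auto simp: slgens_def)
  show ?thesis unfolding e by (rule dspan_add[OF m1 m2])
qed


lemma Ederiv_branch_weight: "(\<And>t. t < length rho \<Longrightarrow> \<exists>c. \<forall>j. (rho ! t) j \<noteq> 0 \<longrightarrow> \<omega> j = c) \<Longrightarrow>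
  is_Ederiv m len I (nf_der (branch_weight \<omega>) (\<lambda>u j. 0))"
proof -
  assume h: "\<And>t. t < length rho \<Longrightarrow> \<exists>c. \<forall>j. (rho ! t) j \<noteq> 0 \<longrightarrow> \<omega> j = c"
  have "is_Ederiv m len I (diag_der (branch_weight \<omega>))"
  proof (rule Ederiv_diag_der)
    fix v assume "v \<in> qvertices m len" thus "branch_weight \<omega> v = 0" by (rule branch_weight_vertex)
  next
    fix p q r assume "p \<in> P" "q \<in> P" "qmul len p q = Some r"
    thus "branch_weight \<omega> r = branch_weight \<omega> p + branch_weight \<omega> q" by (rule branch_weight_add)
  next
    fix t assume "t < length rho"
    thus "\<exists>c. \<forall>j. (rho ! t) j \<noteq> 0 \<longrightarrow> branch_weight \<omega> (br j) = c" using h by simp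
  qed
  thus ?thesis by (simp add: nf_der_diag)
qed

lemma nf_der_diagonal: "(\<And>u j. u \<in> {1..a} \<Longrightarrow> j \<in> {1..m} \<Longrightarrow> j \<noteq> u \<Longrightarrow> K u j = 0) \<Longrightarrow>
  nf_der (\<lambda>r. 0) K = nf_der (branch_weight (\<lambda>i. if i \<in> {1..a} then K i i else 0)) (\<lambda>u j. 0)"
  by (subst nf_der_move_diagonal) (rule nf_der_cong, auto)

lemma Ederiv_tder:
  assumes comp: "C \<in> comps"
  shows "is_Ederiv m len I (tder m len C)"
proof -
  have C: "C \<subseteq> {1..m}" using comps_sub[OF comp] V_sub by blast
  have "is_Ederiv m len I (nf_der (branch_weight (\<lambda>i'. if i' \<in> C then 1 else 0)) (\<lambda>u j. 0))"
  proof (rule Ederiv_branch_weight)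
    fix t' assume t': "t' < length rho"
    let ?p = "piv (rho ! t')"
    have pnz: "(rho ! t') ?p \<noteq> 0" using rho_piv[OF nth_mem[OF t']] by simp
    have "\<forall>j. (rho ! t') j \<noteq> 0 \<longrightarrow> (if j \<in> C then 1 else (0::complex)) = (if ?p \<in> C then 1 else 0)"
    proof (intro allI impI)
      fix j assume j: "(rho ! t') j \<noteq> 0"
      have "edge ?p j" "edge j ?p" using rel_support_edge[OF t'] pnz j by blast+
      thus "(if j \<in> C then 1 else (0::complex)) = (if ?p \<in> C then 1 else 0)"
        using comps_closed[OF comp] by auto
    qed
    thus "\<exists>c. \<forall>j. (rho ! t') j \<noteq> 0 \<longrightarrow> (if j \<in> C then 1 else (0::complex)) = c" by (rule exI)
  qed
  thus ?thesis using C by (simp add: tder_nf)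
qed

lemma Ederiv_first_diag:
  assumes i: "i \<in> {1..m}" "has_mon Mon i"
  shows "is_Ederiv m len I (first_diag m len i)"
proof -
  have "is_Ederiv m len I (nf_der (branch_weight (\<lambda>i'. if i' = i then 1 else 0)) (\<lambda>u j. 0))"
  proof (rule Ederiv_branch_weight)
    fix t' assume t': "t' < length rho"
    have "\<forall>j. (rho ! t') j \<noteq> 0 \<longrightarrow> (if j = i then 1 else 0) = (0::complex)"
      using rel_support_Vq[OF t'] V_notM i by auto
    thus "\<exists>c. \<forall>j. (rho ! t') j \<noteq> 0 \<longrightarrow> (if j = i then 1 else (0::complex)) = c" by (rule exI)
  qed
  thus ?thesis using i by (simp add: first_diag_nf)
qed

lemma Ederiv_xder:
  assumes "j \<in> {2..a}"
  shows "is_Ederiv m len I (xder m len j)"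
proof -
  let ?K = "\<lambda>u' j'. (if u' = j \<and> j' = j then 1 else 0) - (if u' = 1 \<and> j' = 1 then 1 else (0::complex))"
  have e: "xder m len j = nf_der (branch_weight (\<lambda>i. if i \<in> {1..a} then ?K i i else 0)) (\<lambda>u j. 0)"
  proof -
    have "xder m len j = nf_der (\<lambda>r. 0) ?K" using assms xder_nf by simp
    also have "\<dots> = nf_der (branch_weight (\<lambda>i. if i \<in> {1..a} then ?K i i else 0)) (\<lambda>u j. 0)"
      by (rule nf_der_diagonal) auto
    finally show ?thesis .
  qed
  have "is_Ederiv m len I (nf_der (branch_weight (\<lambda>i. if i \<in> {1..a} then ?K i i else 0)) (\<lambda>u j. 0))"
  proof (rule Ederiv_branch_weight)
    fix t' assume t': "t' < length rho"
    have "\<forall>j'. (rho ! t') j' \<noteq> 0 \<longrightarrow> (if j' \<in> {1..a} then ?K j' j' else 0) = 0"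
      using rel_support_Vq[OF t'] V_notZ by auto
    thus "\<exists>c. \<forall>j'. (rho ! t') j' \<noteq> 0 \<longrightarrow> (if j' \<in> {1..a} then ?K j' j' else 0) = c" by (rule exI)
  qed
  thus ?thesis using e by simp
qed

lemma Ederiv_zder: "u \<in> {1..a} \<Longrightarrow> s \<in> {1..m} \<Longrightarrow> is_Ederiv m len I (zder m len u s)"
  by (simp add: zder_arrow_der Ederiv_arrow_der)

lemma Ederiv_wder: "p \<in> {1..a} \<Longrightarrow> q \<in> {1..a} \<Longrightarrow> is_Ederiv m len I (wder m len p q)"
  using Ederiv_arrow_der[of p q] Z_sub[of q] arr_eq_br[of q] by (simp add: wder_arrow_der)

lemma generators_Ederiv: "Lgens m len a Mon rho \<union> ygens m len Mon \<union> slgens m len a \<subseteq> {d. is_Ederiv m len I d}"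
  unfolding Lgens_def ygens_def slgens_def
  using Ederiv_tder Ederiv_zder Ederiv_first_diag Ederiv_xder Ederiv_wder B_sub by blast

section \<open>Brackets\<close>

lemma Lspan_bracket: "l1 \<in> dspan (Lgens m len a Mon rho) \<Longrightarrow> l2 \<in> dspan (Lgens m len a Mon rho) \<Longrightarrow>
  dbracket l1 l2 \<in> dspan (Lgens m len a Mon rho)"
proof -
  assume h1: "l1 \<in> dspan (Lgens m len a Mon rho)" and h2: "l2 \<in> dspan (Lgens m len a Mon rho)"
  obtain \<omega>1 K1 where l1: "l1 = nf_der (branch_weight \<omega>1) K1" "\<forall>u j. K1 u j \<noteq> 0 \<longrightarrow> j \<in> Bs" using Lspan_nf[OF h1] by blast
  obtain \<omega>2 K2 where l2: "l2 = nf_der (branch_weight \<omega>2) K2" "\<forall>u j. K2 u j \<noteq> 0 \<longrightarrow> j \<in> Bs" using Lspan_nf[OF h2] by blast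
  note l = l1 l2
  let ?K = "\<lambda>u j. K2 u j * branch_weight \<omega>1 (br j) - K1 u j * branch_weight \<omega>2 (br j)
      + K1 u j * branch_weight \<omega>2 (arr u) - K2 u j * branch_weight \<omega>1 (arr u)
      + (\<Sum>u'\<in>{1..a}. K2 u u' * K1 u' j - K1 u u' * K2 u' j)"
  have KB: "?K u j \<noteq> 0 \<Longrightarrow> j \<in> Bs" for u j
  proof (rule ccontr)
    assume j: "j \<notin> Bs" and nz: "?K u j \<noteq> 0"
    have k0: "\<forall>u'. K1 u' j = 0 \<and> K2 u' j = 0" using j l by blast
    hence "K1 u j = 0" "K2 u j = 0" by auto
    moreover have "(\<Sum>u'\<in>{1..a}. K2 u u' * K1 u' j - K1 u u' * K2 u' j) = 0"
      by (intro sum.neutral ballI) (simp add: k0)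
    ultimately show False using nz by simp
  qed
  have "dbracket l1 l2 = nf_der (branch_weight (\<lambda>i. 0)) ?K" unfolding l nf_der_bracket branch_weight_zero ..
  also have "\<dots> \<in> dspan (Lgens m len a Mon rho)" by (rule nf_der_in_Lspan) (use KB in auto)
  finally show ?thesis .
qed

lemma Cspan_bracket: "c1 \<in> dspan (ygens m len Mon) \<Longrightarrow> c2 \<in> dspan (ygens m len Mon) \<Longrightarrow>
  dbracket c1 c2 = (\<lambda>f r. 0)"
proof -
  assume h1: "c1 \<in> dspan (ygens m len Mon)" and h2: "c2 \<in> dspan (ygens m len Mon)"
  obtain \<omega>1 where c1: "c1 = nf_der (branch_weight \<omega>1) (\<lambda>u j. 0)" using Cspan_nf[OF h1] by blast
  obtain \<omega>2 where c2: "c2 = nf_der (branch_weight \<omega>2) (\<lambda>u j. 0)" using Cspan_nf[OF h2] by blast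
  note c = c1 c2
  show ?thesis unfolding c nf_der_bracket by (simp add: nf_der_zero)
qed

lemma Lspan_Cspan_bracket: "l \<in> dspan (Lgens m len a Mon rho) \<Longrightarrow> c \<in> dspan (ygens m len Mon) \<Longrightarrow>
  dbracket l c = (\<lambda>f r. 0)"
proof -
  assume h1: "l \<in> dspan (Lgens m len a Mon rho)" and h2: "c \<in> dspan (ygens m len Mon)"
  obtain \<omega>1 K1 where l: "l = nf_der (branch_weight \<omega>1) K1" "\<forall>u j. K1 u j \<noteq> 0 \<longrightarrow> j \<in> Bs" using Lspan_nf[OF h1] by blast
  obtain \<omega>2 where c: "c = nf_der (branch_weight \<omega>2) (\<lambda>u j. 0)" "\<forall>i. \<omega>2 i \<noteq> 0 \<longrightarrow> i \<in> Ms" using Cspan_nf[OF h2] by blast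
  have z1: "K1 u j * \<omega>2 j = 0" for u j
  proof (cases "K1 u j = 0")
    case False
    hence "j \<in> Bs" using l(2) by blast
    hence "j \<notin> Ms" using B_notM by blast
    thus ?thesis using c(2) by auto
  qed simp
  have z2: "\<omega>2 u = 0" if "u \<in> {1..a}" for u
    using c(2) Ms_notZ[of u] that by auto
  note z = z1 z2
  show ?thesis unfolding l c nf_der_bracket
    by (subst nf_der_zero[symmetric], rule nf_der_cong) (simp_all add: z)
qed

lemma dadd_nf_der: "dadd (nf_der w K) (nf_der w' K') = nf_der (\<lambda>r. w r + w' r) (\<lambda>u j. K u j + K' u j)"
  unfolding dadd_def by (rule nf_der_add)

lemma branch_weight_plus: "(\<lambda>r. branch_weight \<omega> r + branch_weight \<omega>' r) = branch_weight (\<lambda>i. \<omega> i + \<omega>' i)"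
  by (intro ext) (simp add: branch_weight_def split: qpath.splits)

lemma Sspan_bracket_LC: "s \<in> dspan (slgens m len a) \<Longrightarrow> l \<in> dspan (Lgens m len a Mon rho) \<Longrightarrow> c \<in> dspan (ygens m len Mon) \<Longrightarrow>
  dbracket s (dadd l c) \<in> dspan (Lgens m len a Mon rho)"
proof -
  assume h0: "s \<in> dspan (slgens m len a)" and h1: "l \<in> dspan (Lgens m len a Mon rho)" and h2: "c \<in> dspan (ygens m len Mon)"
  obtain Ks where s: "s = nf_der (\<lambda>r. 0) Ks" "\<forall>u j. Ks u j \<noteq> 0 \<longrightarrow> j \<in> {1..a}" using Sspan_nf[OF h0] by blast
  obtain \<omega>1 K1 where l: "l = nf_der (branch_weight \<omega>1) K1" "\<forall>i. \<omega>1 i \<noteq> 0 \<longrightarrow> i \<in> Vq" "\<forall>u j. K1 u j \<noteq> 0 \<longrightarrow> j \<in> Bs" using Lspan_nf[OF h1] by blast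
  obtain \<omega>2 where c: "c = nf_der (branch_weight \<omega>2) (\<lambda>u j. 0)" "\<forall>i. \<omega>2 i \<noteq> 0 \<longrightarrow> i \<in> Ms" using Cspan_nf[OF h2] by blast
  let ?\<omega> = "\<lambda>i. \<omega>1 i + \<omega>2 i"
  have lc: "dadd l c = nf_der (branch_weight ?\<omega>) K1" unfolding l c dadd_nf_der branch_weight_plus by simp
  have \<omega>A: "?\<omega> i = 0" if "i \<in> {1..a}" for i
    using that l(2) c(2) V_notZ Ms_notZ by (metis add.right_neutral)
  let ?K = "\<lambda>u j. K1 u j * 0 - Ks u j * branch_weight ?\<omega> (br j)
      + Ks u j * branch_weight ?\<omega> (arr u) - K1 u j * 0
      + (\<Sum>u'\<in>{1..a}. K1 u u' * Ks u' j - Ks u u' * K1 u' j)"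
  have KB: "j \<in> Bs" if u: "u \<in> {1..a}" and nz: "?K u j \<noteq> 0" for u j
  proof (rule ccontr)
    assume j: "j \<notin> Bs"
    have "K1 u j = 0" using j l by auto
    moreover have "Ks u j * ?\<omega> j = 0" using s(2) \<omega>A by (metis mult_eq_0_iff)
    moreover have "?\<omega> u = 0" using \<omega>A u by blast
    moreover have "(\<Sum>u'\<in>{1..a}. K1 u u' * Ks u' j - Ks u u' * K1 u' j) = 0"
      using j l(3) B_notZ by (intro sum.neutral ballI) (metis diff_self mult_eq_0_iff)
    ultimately show False using nz by simp
  qed
  have "dbracket s (dadd l c) = nf_der (branch_weight (\<lambda>i. 0)) ?K" unfolding s lc nf_der_bracket branch_weight_zero ..
  also have "\<dots> = nf_der (branch_weight (\<lambda>i. 0)) (\<lambda>u j. if u \<in> {1..a} then ?K u j else 0)" by (rule nf_der_cong) auto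
  also have "\<dots> \<in> dspan (Lgens m len a Mon rho)" by (rule nf_der_in_Lspan) (use KB in \<open>auto split: if_splits\<close>)
  finally show ?thesis .
qed


lemma Cspan_bracket_hh:
  "c \<in> dspan (ygens m len Mon) \<Longrightarrow> c' \<in> dspan (ygens m len Mon) \<Longrightarrow>
   \<exists>c''\<in>dspan (ygens m len Mon). hh_eq m len I (dbracket c c') c''"
  using Cspan_bracket dspan_zero hh_eq_refl by metis

lemma Sspan_bracket_LC_hh:
  assumes "s \<in> dspan (slgens m len a)" "l \<in> dspan (Lgens m len a Mon rho)" "c \<in> dspan (ygens m len Mon)"
  shows "\<exists>l'\<in>dspan (Lgens m len a Mon rho). \<exists>c'\<in>dspan (ygens m len Mon).
           hh_eq m len I (dbracket s (dadd l c)) (dadd l' c')"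
proof -
  have "dadd (dbracket s (dadd l c)) (\<lambda>f r. 0) = dbracket s (dadd l c)" by (simp add: dadd_def)
  thus ?thesis using Sspan_bracket_LC[OF assms] dspan_zero hh_eq_refl by metis
qed


section \<open>Inner derivations in normal form\<close>

lemma qmul_self_l: "p \<in> P \<Longrightarrow> x \<in> P \<Longrightarrow> qmul len p x = Some x \<longleftrightarrow> p = qsrc len x"
proof
  assume p: "p \<in> P" and x: "x \<in> P" and e: "qmul len p x = Some x"
  show "p = qsrc len x"
  proof (cases "is_triv p")
    case True thus ?thesis using e by (cases p) (auto simp: qmul_triv_l split: if_splits)
  next
    case False
    then obtain i j k where pp: "p = Pth i j k" by (auto simp: triv_iff)
    show ?thesis
    proof (cases "is_triv x")
      case True thus ?thesis using e pp by (auto simp: qmul_triv_r split: if_splits)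
    next
      case False
      then obtain i' j' k' where "x = Pth i' j' k'" by (auto simp: triv_iff)
      thus ?thesis using e pp p x by (auto simp: qmul_PP' split: if_splits)
    qed
  qed
next
  assume p: "p \<in> P" and x: "x \<in> P" and e: "p = qsrc len x"
  have "qsrc len x \<in> qvertices m len" using qsrc_in[OF x] .
  thus "qmul len p x = Some x" using e by (simp add: qmul_triv_l)
qed

lemma qmul_self_r: "q \<in> P \<Longrightarrow> x \<in> P \<Longrightarrow> qmul len x q = Some x \<longleftrightarrow> q = qtgt len x"
proof
  assume q: "q \<in> P" and x: "x \<in> P" and e: "qmul len x q = Some x"
  show "q = qtgt len x"
  proof (cases "is_triv q")
    case True thus ?thesis using e by (cases q; cases x) (auto simp: qmul_triv_r vpos_def split: if_splits)
  next
    case False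
    then obtain i j k where qq: "q = Pth i j k" by (auto simp: triv_iff)
    show ?thesis
    proof (cases "is_triv x")
      case True thus ?thesis using e qq by (auto simp: qmul_triv_l split: if_splits)
    next
      case False
      then obtain i' j' k' where "x = Pth i' j' k'" by (auto simp: triv_iff)
      thus ?thesis using e qq q x by (auto simp: qmul_PP' split: if_splits)
    qed
  qed
next
  assume q: "q \<in> P" and x: "x \<in> P" and e: "q = qtgt len x"
  have "qtgt len x \<in> qvertices m len" using qtgt_in[OF x] .
  thus "qmul len x q = Some x" using e by (cases x) (auto simp: qmul_triv_r)
qed

lemma mul_pt_self_l: "x \<in> P \<Longrightarrow> mul g (pt x) x = g (qsrc len x)"
proof -
  assume x: "x \<in> P"
  have s: "qsrc len x \<in> P" using qsrc_in[OF x] qvertices_sub by blast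
  show ?thesis using x s qmul_self_l[OF s x] qmul_self_l[OF _ x]
    by (subst cq_mul_pt_r, simp, subst sum_eq_single[where a="qsrc len x"]) auto
qed

lemma mul_pt_self_r: "x \<in> P \<Longrightarrow> mul (pt x) g x = g (qtgt len x)"
proof -
  assume x: "x \<in> P"
  have s: "qtgt len x \<in> P" using qtgt_in[OF x] qvertices_sub by blast
  show ?thesis using x s qmul_self_r[OF s x] qmul_self_r[OF _ x]
    by (subst cq_mul_pt_l, simp, subst sum_eq_single[where a="qtgt len x"]) auto
qed

definition inner_via :: "cq \<Rightarrow> cqmap \<Rightarrow> bool" where
  "inner_via c T \<longleftrightarrow> (\<forall>f\<in>CE. (\<lambda>r. T f r - (mul c f r - mul f c r)) \<in> I)"

lemma hh_zero_inner_via: "hh_zero m len I T \<Longrightarrow> \<exists>c\<in>CE. inner_via c T"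
  unfolding hh_zero_def inner_via_def by blast

lemma inner_via_arrow:
  assumes T: "inner_via c T" and i: "i \<in> {1..m}" and l: "l < len i"
  shows "T (pt (Pth i l (Suc l))) (Pth i l (Suc l)) = c (vpos len i l) - c (vpos len i (Suc l))"
proof -
  let ?x = "Pth i l (Suc l)"
  have xP: "?x \<in> P" using i l by auto
  have "(\<lambda>r. T (pt ?x) r - (mul c (pt ?x) r - mul (pt ?x) c r)) \<in> I"
    using T pt_in[OF xP] unfolding inner_via_def by blast
  hence "T (pt ?x) ?x - (mul c (pt ?x) ?x - mul (pt ?x) c ?x) = 0"
    by (rule I_len[where r="?x", OF _ xP, simplified])
  thus ?thesis using xP by (simp add: mul_pt_self_l mul_pt_self_r)
qed

lemma nf_der_arrow:
  assumes i: "i \<in> {1..m}" and l: "l < len i"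
  shows "nf_der (branch_weight \<omega>) K (pt (Pth i l (Suc l))) (Pth i l (Suc l)) =
    (if l = 0 then \<omega> i + (if i \<in> {1..a} then K i i else 0) else 0)"
proof -
  let ?x = "Pth i l (Suc l)"
  have xP: "?x \<in> P" using i l by auto
  have S: "(\<Sum>u\<in>{1..a}. \<Sum>j\<in>{1..m}. K u j * pt ?x (arr u) * pt (br j) ?x) = (if l = 0 \<and> i \<in> {1..a} then K i i else 0)"
  proof (cases "l = 0 \<and> i \<in> {1..a}")
    case True
    have li: "len i = 1" using True len_arr by blast
    show ?thesis using True li Z_sub[of i]
      by (subst sum_eq_single[where a=i], simp, simp, simp add: pt_apply One_nat_def, subst sum_eq_single[where a=i])
         (auto simp: pt_apply One_nat_def)
  next
    case False
    have "pt ?x (arr u) * pt (br j) ?x = 0" if "u \<in> {1..a}" "j \<in> {1..m}" for u j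
      using False that len_arr[of u] len_pos[of j] by (auto simp: pt_apply One_nat_def)
    hence "(\<Sum>u\<in>{1..a}. \<Sum>j\<in>{1..m}. K u j * pt ?x (arr u) * pt (br j) ?x) = 0"
      by (intro sum.neutral ballI) (metis mult.assoc mult_zero_right)
    thus ?thesis using False by auto
  qed
  show ?thesis using xP S by (simp add: nf_der_def pt_apply)
qed

text \<open>The values of c along a branch telescope, and only the first arrow of a branch
  contributes, so every branch carries the same total weight c E0 - c Ew.\<close>
lemma inner_via_nf_der_diag:
  assumes T: "inner_via c (nf_der (branch_weight \<omega>) K)" and i: "i \<in> {1..m}"
  shows "\<omega> i + (if i \<in> {1..a} then K i i else 0) = c E0 - c Ew"
proof -
  have tele: "c (vpos len i l) = c Ew" if l: "1 \<le> l" "l \<le> len i" for l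
    using l
  proof (induction "len i - l" arbitrary: l)
    case 0
    hence "l = len i" by simp
    thus ?case using l by (simp add: vpos_def)
  next
    case (Suc n)
    have "c (vpos len i l) - c (vpos len i (Suc l)) = 0"
      using inner_via_arrow[OF T i, of l] nf_der_arrow[OF i, of l] Suc by simp
    moreover have "c (vpos len i (Suc l)) = c Ew" using Suc by simp
    ultimately show ?case by simp
  qed
  have "c (vpos len i 1) = c Ew" using tele len_ge1[OF i] by simp
  thus ?thesis using inner_via_arrow[OF T i, of 0] nf_der_arrow[OF i, of 0] len_pos[OF i]
    by (simp add: One_nat_def)
qed

lemma inner_via_nf_der_first_arrow:
  assumes T: "inner_via c (nf_der (branch_weight \<omega>) K)" and u: "u \<in> {1..a}"
  shows "(\<lambda>r. (\<omega> u - (c E0 - c Ew)) * pt (arr u) r + (\<Sum>j\<in>{1..m}. K u j * pt (br j) r)) \<in> I"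
proof -
  let ?T = "nf_der (branch_weight \<omega>) K"
  have uM: "u \<in> {1..m}" using Z_sub[OF u] .
  have au: "arr u = br u" using arr_eq_br[OF u] .
  have Tf: "?T (pt (arr u)) r = \<omega> u * pt (arr u) r + (\<Sum>j\<in>{1..m}. K u j * pt (br j) r)" for r
  proof -
    have "(\<Sum>u'\<in>{1..a}. \<Sum>j\<in>{1..m}. K u' j * pt (arr u) (arr u') * pt (br j) r) = (\<Sum>j\<in>{1..m}. K u j * pt (br j) r)"
      using u by (subst sum_eq_single[where a=u]) (auto simp: pt_apply)
    moreover have "(if r \<in> P then branch_weight \<omega> r * pt (arr u) r else 0) = \<omega> u * pt (arr u) r"
      using arr_P[OF u] by (auto simp: pt_apply)
    ultimately show ?thesis by (simp add: nf_der_def)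
  qed
  have ml: "mul c (pt (arr u)) r = c E0 * pt (arr u) r" for r
    unfolding au by (simp add: mul_branch_supported_l[OF branch_supported_pt[OF uM]])
  have mr: "mul (pt (arr u)) c r = c Ew * pt (arr u) r" for r
    unfolding au by (simp add: mul_branch_supported_r[OF branch_supported_pt[OF uM]])
  have "(\<lambda>r. ?T (pt (arr u)) r - (mul c (pt (arr u)) r - mul (pt (arr u)) c r)) \<in> I"
    using T pt_in[OF arr_P[OF u]] unfolding inner_via_def by blast
  thus ?thesis unfolding Tf ml mr by (simp add: algebra_simps)
qed

lemma inner_via_nf_der_off_diag:
  assumes T: "inner_via c (nf_der (branch_weight \<omega>) K)"
    and KS: "\<And>u j. u \<in> {1..a} \<Longrightarrow> K u j \<noteq> 0 \<Longrightarrow> j \<in> Bs \<or> j \<in> {1..a}"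
    and u: "u \<in> {1..a}" and j: "j \<in> {1..m}" "j \<noteq> u"
  shows "K u j = 0"
proof -
  have uM: "u \<in> {1..m}" using Z_sub[OF u] .
  have au: "arr u = br u" using arr_eq_br[OF u] .
  let ?g = "\<lambda>r. (\<omega> u - (c E0 - c Ew)) * pt (arr u) r + (\<Sum>j\<in>{1..m}. K u j * pt (br j) r)"
  have gI: "?g \<in> I" by (rule inner_via_nf_der_first_arrow[OF T u])
  have sbr: "(\<Sum>j\<in>{1..m}. K u j * pt (br j) (br j')) = K u j'" if "j' \<in> {1..m}" for j'
    using that by (subst sum_eq_single[where a=j']) (auto simp: pt_apply)
  have offZ: "K u q = 0" if q: "q \<in> {1..a}" "q \<noteq> u" for q
  proof -
    have "?g (arr q) = 0" by (rule I_len[OF gI arr_P[OF q(1)]]) simp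
    moreover have "?g (arr q) = K u q"
      using sbr[of q] Z_sub[OF q(1)] arr_eq_br[OF q(1)] q(2) by (simp add: pt_apply)
    ultimately show ?thesis by simp
  qed
  have g0: "?g = (\<lambda>r. 0)"
  proof (rule I_nonpiv_zero[OF gI])
    fix r assume nz: "?g r \<noteq> 0"
    show "\<exists>j\<in>{1..m}. r = br j \<and> \<not> has_mon Mon j \<and> j \<notin> piv ` set rho"
    proof (cases "r = arr u")
      case True
      have "?g r = \<omega> u + K u u - (c E0 - c Ew)"
        using True sbr[OF uM] au by (simp add: pt_apply algebra_simps)
      also have "\<dots> = 0" using inner_via_nf_der_diag[OF T uM] u by simp
      finally show ?thesis using nz by simp
    next
      case False
      hence "(\<Sum>j\<in>{1..m}. K u j * pt (br j) r) \<noteq> 0" using nz by (simp add: pt_apply)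
      then obtain j' where j': "j' \<in> {1..m}" "K u j' * pt (br j') r \<noteq> 0" using sum_nonzero_ex by blast
      hence r: "r = br j'" "K u j' \<noteq> 0" by (auto simp: pt_apply split: if_splits)
      have "j' \<notin> {1..a}" using False r au offZ by auto
      hence "j' \<in> Bs" using KS[OF u r(2)] by blast
      thus ?thesis using r(1) j'(1) unfolding B0w_def by blast
    qed
  qed
  have "?g (br j) = K u j" using sbr[OF j(1)] j au by (simp add: pt_apply)
  thus ?thesis using g0 by metis
qed

lemma hh_zero_nf_der:
  assumes hz: "hh_zero m len I (nf_der (branch_weight \<omega>) K)"
    and KS: "\<And>u j. u \<in> {1..a} \<Longrightarrow> K u j \<noteq> 0 \<Longrightarrow> j \<in> Bs \<or> j \<in> {1..a}"
  shows "(\<forall>u\<in>{1..a}. \<forall>j\<in>{1..m}. j \<noteq> u \<longrightarrow> K u j = 0) \<and>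
         (\<exists>\<delta>. \<forall>i\<in>{1..m}. \<omega> i + (if i \<in> {1..a} then K i i else 0) = \<delta>)"
proof -
  obtain c where T: "inner_via c (nf_der (branch_weight \<omega>) K)" using hh_zero_inner_via[OF hz] by blast
  have "K u j = 0" if "u \<in> {1..a}" "j \<in> {1..m}" "j \<noteq> u" for u j
    using inner_via_nf_der_off_diag[OF T _ that] KS by blast
  thus ?thesis using inner_via_nf_der_diag[OF T] by blast
qed



lemma hh_zero_nf_der_traceless:
  assumes a0: "0 < a"
    and hz: "hh_zero m len I (nf_der (branch_weight \<omega>) K)"
    and KS: "\<And>u j. u \<in> {1..a} \<Longrightarrow> K u j \<noteq> 0 \<Longrightarrow> j \<in> Bs \<or> j \<in> {1..a}"
    and \<omega>Z: "\<And>i. i \<in> {1..a} \<Longrightarrow> \<omega> i = 0"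
    and tr: "(\<Sum>u\<in>{1..a}. K u u) = 0"
  shows "(\<forall>i\<in>{1..m}. \<omega> i = 0) \<and> (\<forall>u\<in>{1..a}. \<forall>j\<in>{1..m}. K u j = 0)"
proof -
  obtain \<delta> where off: "\<forall>u\<in>{1..a}. \<forall>j\<in>{1..m}. j \<noteq> u \<longrightarrow> K u j = 0"
    and diag: "\<forall>i\<in>{1..m}. \<omega> i + (if i \<in> {1..a} then K i i else 0) = \<delta>"
    using hh_zero_nf_der[OF hz] KS by blast
  have Kd: "K i i = \<delta>" if "i \<in> {1..a}" for i
  proof -
    have "\<omega> i + (if i \<in> {1..a} then K i i else 0) = \<delta>" using diag Z_sub[OF that] by blast
    thus ?thesis using \<omega>Z[OF that] that by simp
  qed
  have "of_nat a * \<delta> = 0" using tr Kd by simp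
  hence d0: "\<delta> = 0" using a0 by simp
  have "\<omega> i = 0" if i: "i \<in> {1..m}" for i
  proof (cases "i \<in> {1..a}")
    case True thus ?thesis by (rule \<omega>Z)
  next
    case False
    have "\<omega> i + (if i \<in> {1..a} then K i i else 0) = \<delta>" using diag i by blast
    thus ?thesis using False d0 i by simp
  qed
  moreover have "K u j = 0" if "u \<in> {1..a}" "j \<in> {1..m}" for u j
    using off that Kd d0 by (cases "j = u") auto
  ultimately show ?thesis by blast
qed

section \<open>The copy of sl_a\<close>

lemma sl_supp: "M \<in> sl a \<Longrightarrow> q \<notin> {1..a} \<or> p \<notin> {1..a} \<Longrightarrow> M q p = 0"
  unfolding sl_def by blast
lemma sl_tr: "M \<in> sl a \<Longrightarrow> (\<Sum>j\<in>{1..a}. M j j) = 0"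
  unfolding sl_def by blast

lemma sl_to_hh_nf:
  assumes M: "M \<in> sl a" and a0: "0 < a"
  shows "sl_to_hh m len a M = nf_der (\<lambda>r. 0) (\<lambda>u j. if j \<in> {1..a} then M j u else 0)"
proof (intro ext)
  fix f r
  let ?A = "{1..a}"
  define D where "D p q = f (arr p) * pt (arr q) r" for p q
  have wD: "wder m len p q f r = D p q" if "p \<in> ?A" "q \<in> ?A" for p q
    using that by (simp add: wder_arrow_der arrow_der_def D_def)
  have xD: "xder m len j f r = D j j - D 1 1" if "j \<in> {2..a}" for j
    using that a0 by (simp add: xder_def wder_arrow_der arrow_der_def D_def)
  have L: "sl_to_hh m len a M f r = (\<Sum>p\<in>?A. \<Sum>q\<in>?A. if p \<noteq> q then M q p * D p q else 0) + (\<Sum>j\<in>{2..a}. M j j * (D j j - D 1 1))"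
  proof -
    have "(\<Sum>p\<in>?A. \<Sum>q\<in>?A. if p \<noteq> q then M q p * wder m len p q f r else 0) = (\<Sum>p\<in>?A. \<Sum>q\<in>?A. if p \<noteq> q then M q p * D p q else 0)"
      by (intro sum.cong refl) (simp add: wD)
    moreover have "(\<Sum>j\<in>{2..a}. M j j * xder m len j f r) = (\<Sum>j\<in>{2..a}. M j j * (D j j - D 1 1))"
      by (intro sum.cong refl) (simp add: xD)
    ultimately show ?thesis unfolding sl_to_hh_def by simp
  qed
  have R: "nf_der (\<lambda>r. 0) (\<lambda>u j. if j \<in> ?A then M j u else 0) f r = (\<Sum>u\<in>?A. \<Sum>q\<in>?A. M q u * D u q)"
  proof -
    have "(\<Sum>j\<in>{1..m}. (if j \<in> ?A then M j u else 0) * f (arr u) * pt (br j) r) = (\<Sum>q\<in>?A. M q u * D u q)" if u: "u \<in> ?A" for u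
    proof -
      have "(\<Sum>j\<in>{1..m}. (if j \<in> ?A then M j u else 0) * f (arr u) * pt (br j) r) = (\<Sum>j\<in>?A. (if j \<in> ?A then M j u else 0) * f (arr u) * pt (br j) r)"
        using a_le by (intro sum.mono_neutral_right) auto
      also have "\<dots> = (\<Sum>q\<in>?A. M q u * D u q)"
        by (intro sum.cong refl) (simp add: D_def arr_eq_br)
      finally show ?thesis .
    qed
    thus ?thesis by (simp add: nf_der_def)
  qed
  have split: "(\<Sum>q\<in>?A. M q u * D u q) = (\<Sum>q\<in>?A. if u \<noteq> q then M q u * D u q else 0) + M u u * D u u" if "u \<in> ?A" for u
  proof -
    have "(\<Sum>q\<in>?A. M q u * D u q) = (\<Sum>q\<in>?A. (if u \<noteq> q then M q u * D u q else 0) + (if q = u then M u u * D u u else 0))"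
      by (intro sum.cong refl) auto
    thus ?thesis using that by (simp add: sum.distrib)
  qed
  have Aeq: "?A = insert 1 {2..a}" using a0 by auto
  have tr: "M 1 1 = - (\<Sum>j\<in>{2..a}. M j j)" using sl_tr[OF M] Aeq by (simp add: add_eq_0_iff)
  have d: "(\<Sum>j\<in>{2..a}. M j j * (D j j - D 1 1)) = (\<Sum>u\<in>?A. M u u * D u u)"
    unfolding Aeq using tr by (simp add: right_diff_distrib sum_subtractf sum_distrib_right[symmetric])
  show "sl_to_hh m len a M f r = nf_der (\<lambda>r. 0) (\<lambda>u j. if j \<in> {1..a} then M j u else 0) f r"
    unfolding L R d by (subst sum.distrib[symmetric], rule sum.cong[OF refl], simp add: split)
qed

lemma mat_bracket_sl: "M \<in> sl a \<Longrightarrow> N \<in> sl a \<Longrightarrow> mat_bracket a M N \<in> sl a"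
proof -
  assume M: "M \<in> sl a" and N: "N \<in> sl a"
  have supp: "mat_bracket a M N q p = 0" if "q \<notin> {1..a} \<or> p \<notin> {1..a}" for q p
    using that sl_supp[OF M] sl_supp[OF N] unfolding mat_bracket_def by (intro sum.neutral ballI) auto
  have "(\<Sum>j\<in>{1..a}. \<Sum>k\<in>{1..a}. N j k * M k j) = (\<Sum>j\<in>{1..a}. \<Sum>k\<in>{1..a}. M j k * N k j)"
    by (subst sum.swap) (simp add: mult.commute)
  hence "(\<Sum>j\<in>{1..a}. mat_bracket a M N j j) = 0"
    unfolding mat_bracket_def by (simp add: sum_subtractf)
  thus ?thesis using supp unfolding sl_def by blast
qed

lemma sl_to_hh_bracket: "M \<in> sl a \<Longrightarrow> N \<in> sl a \<Longrightarrow> 0 < a \<Longrightarrow>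
  hh_eq m len I (sl_to_hh m len a (mat_bracket a M N)) (dbracket (sl_to_hh m len a M) (sl_to_hh m len a N))"
proof -
  assume M: "M \<in> sl a" and N: "N \<in> sl a" and a0: "0 < a"
  have "sl_to_hh m len a (mat_bracket a M N) = dbracket (sl_to_hh m len a M) (sl_to_hh m len a N)"
    unfolding sl_to_hh_nf[OF M a0] sl_to_hh_nf[OF N a0] sl_to_hh_nf[OF mat_bracket_sl[OF M N] a0] nf_der_bracket
    by (rule nf_der_cong) (auto simp: mat_bracket_def sum_subtractf mult.commute intro!: sum.cong)
  thus ?thesis using hh_eq_refl by simp
qed

lemma Sspan_sl: "s \<in> dspan (slgens m len a) \<Longrightarrow> 0 < a \<Longrightarrow> \<exists>M\<in>sl a. hh_eq m len I s (sl_to_hh m len a M)"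
proof -
  assume s: "s \<in> dspan (slgens m len a)" and a0: "0 < a"
  obtain K where K: "s = nf_der (\<lambda>r. 0) K" "\<forall>u j. K u j \<noteq> 0 \<longrightarrow> j \<in> {1..a}" "(\<Sum>u\<in>{1..a}. K u u) = 0"
    using Sspan_nf[OF s] by blast
  define M where "M q p = (if p \<in> {1..a} \<and> q \<in> {1..a} then K p q else 0)" for q p
  have M_sl: "M \<in> sl a" unfolding sl_def M_def using K(3) by auto
  have "sl_to_hh m len a M = s"
    unfolding sl_to_hh_nf[OF M_sl a0] K(1) using K(2) by (intro nf_der_cong) (auto simp: M_def)
  thus ?thesis using M_sl hh_eq_refl by metis
qed

lemma sl_to_hh_inj: "M \<in> sl a \<Longrightarrow> 0 < a \<Longrightarrow> hh_zero m len I (sl_to_hh m len a M) \<Longrightarrow> M = (\<lambda>q p. 0)"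
proof -
  assume M: "M \<in> sl a" and a0: "0 < a" and hz: "hh_zero m len I (sl_to_hh m len a M)"
  let ?K = "\<lambda>u j. if j \<in> {1..a} then M j u else 0"
  have hz': "hh_zero m len I (nf_der (branch_weight (\<lambda>i. 0)) ?K)"
    using hz unfolding sl_to_hh_nf[OF M a0] branch_weight_zero .
  have tr: "(\<Sum>u\<in>{1..a}. ?K u u) = 0" using sl_tr[OF M] by simp
  have "(\<forall>i\<in>{1..m}. (0::complex) = 0) \<and> (\<forall>u\<in>{1..a}. \<forall>j\<in>{1..m}. ?K u j = 0)"
    by (rule hh_zero_nf_der_traceless[OF a0 hz' _ _ tr]) (auto split: if_splits)
  hence K0: "\<forall>u\<in>{1..a}. \<forall>j\<in>{1..m}. ?K u j = 0" by blast
  have "M q p = 0" if "q \<in> {1..a}" "p \<in> {1..a}" for q p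
  proof -
    have "?K p q = 0" using K0 that Z_sub[OF that(1)] by blast
    thus ?thesis using that(1) by simp
  qed
  thus ?thesis using sl_supp[OF M] by blast
qed

section \<open>Directness\<close>

lemma hh_zero_nf_der_LCS:
  assumes a0: "0 < a"
    and L: "\<forall>i. \<omega>l i \<noteq> 0 \<longrightarrow> i \<in> Vq" "\<forall>u j. Kl u j \<noteq> 0 \<longrightarrow> j \<in> Bs"
    and C: "\<forall>i. \<omega>c i \<noteq> 0 \<longrightarrow> i \<in> Ms"
    and S: "\<forall>u j. Ks u j \<noteq> 0 \<longrightarrow> j \<in> {1..a}" "(\<Sum>u\<in>{1..a}. Ks u u) = 0"
    and hz: "hh_zero m len I (nf_der (branch_weight (\<lambda>i. \<omega>l i + \<omega>c i)) (\<lambda>u j. Kl u j + Ks u j))"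
  shows "(\<forall>i. \<omega>l i = 0 \<and> \<omega>c i = 0) \<and> (\<forall>u\<in>{1..a}. \<forall>j\<in>{1..m}. Kl u j = 0 \<and> Ks u j = 0)"
proof -
  have KS: "j \<in> Bs \<or> j \<in> {1..a}" if "u \<in> {1..a}" "Kl u j + Ks u j \<noteq> 0" for u j
  proof (cases "Kl u j = 0")
    case True
    thus ?thesis using that(2) S(1) by simp
  next
    case False
    thus ?thesis using L(2) by blast
  qed
  have lZ: "\<omega>l i = 0" "\<omega>c i = 0" "Kl u i = 0" if "i \<in> {1..a}" for i u
    using that L C V_notZ Ms_notZ B_notZ by blast+
  have tr: "(\<Sum>u\<in>{1..a}. Kl u u + Ks u u) = 0"
  proof -
    have "(\<Sum>u\<in>{1..a}. Kl u u + Ks u u) = (\<Sum>u\<in>{1..a}. Ks u u)" using lZ(3) by (intro sum.cong) auto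
    thus ?thesis using S(2) by simp
  qed
  have \<omega>Z: "\<omega>l i + \<omega>c i = 0" if "i \<in> {1..a}" for i using lZ(1,2)[OF that] by simp
  have "(\<forall>i\<in>{1..m}. \<omega>l i + \<omega>c i = 0) \<and> (\<forall>u\<in>{1..a}. \<forall>j\<in>{1..m}. Kl u j + Ks u j = 0)"
    using hh_zero_nf_der_traceless[OF a0 hz _ \<omega>Z tr] KS by blast
  then have \<omega>0: "\<forall>i\<in>{1..m}. \<omega>l i + \<omega>c i = 0" and K0: "\<forall>u\<in>{1..a}. \<forall>j\<in>{1..m}. Kl u j + Ks u j = 0"
    by blast+
  have d: "Vq \<inter> Ms = {}" "Vq \<union> Ms \<subseteq> {1..m}" "Bs \<inter> {1..a} = {}" "Bs \<union> {1..a} \<subseteq> {1..m}"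
    using V_notM V_sub B_notZ B_sub Z_sub by auto
  have "\<omega>l i = 0 \<and> \<omega>c i = 0" for i
    by (rule disjoint_supports_sum_zero[OF \<omega>0 L(1) C d(1,2)])
  moreover have "Kl u j = 0 \<and> Ks u j = 0" if u: "u \<in> {1..a}" for u j
  proof -
    have "\<forall>j\<in>{1..m}. Kl u j + Ks u j = 0" using K0 u by blast
    moreover have "\<forall>j. Kl u j \<noteq> 0 \<longrightarrow> j \<in> Bs" "\<forall>j. Ks u j \<noteq> 0 \<longrightarrow> j \<in> {1..a}"
      using L(2) S(1) by blast+
    ultimately show ?thesis by (rule disjoint_supports_sum_zero[OF _ _ _ d(3,4)])
  qed
  ultimately show ?thesis by blast
qed

lemma hh_zero_sum_components:
  assumes a0: "0 < a"
    and l: "l \<in> dspan (Lgens m len a Mon rho)" and c: "c \<in> dspan (ygens m len Mon)" and s: "s \<in> dspan (slgens m len a)"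
    and hz: "hh_zero m len I (dadd l (dadd c s))"
  shows "hh_zero m len I l \<and> hh_zero m len I c \<and> hh_zero m len I s"
proof -
  obtain \<omega>l Kl where L: "l = nf_der (branch_weight \<omega>l) Kl" "\<forall>i. \<omega>l i \<noteq> 0 \<longrightarrow> i \<in> Vq" "\<forall>u j. Kl u j \<noteq> 0 \<longrightarrow> j \<in> Bs"
    using Lspan_nf[OF l] by blast
  obtain \<omega>c where C: "c = nf_der (branch_weight \<omega>c) (\<lambda>u j. 0)" "\<forall>i. \<omega>c i \<noteq> 0 \<longrightarrow> i \<in> Ms"
    using Cspan_nf[OF c] by blast
  obtain Ks where S: "s = nf_der (\<lambda>r. 0) Ks" "\<forall>u j. Ks u j \<noteq> 0 \<longrightarrow> j \<in> {1..a}" "(\<Sum>u\<in>{1..a}. Ks u u) = 0"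
    using Sspan_nf[OF s] by blast
  have "dadd l (dadd c s) = nf_der (branch_weight (\<lambda>i. \<omega>l i + \<omega>c i)) (\<lambda>u j. Kl u j + Ks u j)"
    unfolding L C S dadd_nf_der by (rule nf_der_cong) (auto simp: branch_weight_def split: qpath.splits)
  hence "hh_zero m len I (nf_der (branch_weight (\<lambda>i. \<omega>l i + \<omega>c i)) (\<lambda>u j. Kl u j + Ks u j))"
    using hz by simp
  then have \<omega>0: "\<forall>i. \<omega>l i = 0 \<and> \<omega>c i = 0" and K0: "\<forall>u\<in>{1..a}. \<forall>j\<in>{1..m}. Kl u j = 0 \<and> Ks u j = 0"
    using hh_zero_nf_der_LCS[OF a0 L(2,3) C(2) S(2,3)] by blast+
  have "l = (\<lambda>f r. 0)" unfolding L(1) nf_der_zero[symmetric] using \<omega>0 K0 by (intro nf_der_cong) (auto simp: branch_weight_def split: qpath.splits)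
  moreover have "c = (\<lambda>f r. 0)" unfolding C(1) nf_der_zero[symmetric] using \<omega>0 by (intro nf_der_cong) (auto simp: branch_weight_def split: qpath.splits)
  moreover have "s = (\<lambda>f r. 0)" unfolding S(1) nf_der_zero[symmetric] using K0 by (intro nf_der_cong) auto
  ultimately show ?thesis using hh_zero_zero by simp
qed

section \<open>Every derivation has a normal form\<close>

lemma linear_sum:
  assumes add: "\<forall>f\<in>CE. \<forall>g\<in>CE. D (\<lambda>r. f r + g r) = (\<lambda>r. D f r + D g r)"
    and sm: "\<forall>c. \<forall>f\<in>CE. D (\<lambda>r. c * f r) = (\<lambda>r. c * D f r)"
    and fin: "finite X" and F: "\<And>x. x \<in> X \<Longrightarrow> F x \<in> CE"
  shows "D (\<lambda>r. \<Sum>x\<in>X. F x r) = (\<lambda>r. \<Sum>x\<in>X. D (F x) r)"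
  using fin F
proof (induction X rule: finite_induct)
  case empty
  have "D (\<lambda>r. 0 * (\<lambda>r. 0::complex) r) = (\<lambda>r. 0 * D (\<lambda>r. 0) r)" by (rule sm[rule_format]) (rule ce_zero)
  thus ?case by simp
next
  case (insert x X)
  have "D (\<lambda>r. \<Sum>x\<in>insert x X. F x r) = D (\<lambda>r. F x r + (\<Sum>x\<in>X. F x r))" using insert by simp
  also have "\<dots> = (\<lambda>r. D (F x) r + D (\<lambda>r. \<Sum>x\<in>X. F x r) r)"
    using add insert by (intro add[rule_format]) (auto intro: ce_sum)
  also have "\<dots> = (\<lambda>r. \<Sum>x\<in>insert x X. D (F x) r)" using insert by simp
  finally show ?case .
qed

lemma der_mul_in_I:
  assumes leib: "(\<lambda>r. D (mul f g) r - (mul (D f) g r + mul f (D g) r)) \<in> I"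
    and "f \<in> CE" "g \<in> CE" "D f \<in> I" "D g \<in> I"
  shows "D (mul f g) \<in> I"
proof -
  have "(\<lambda>r. mul (D f) g r + mul f (D g) r) \<in> I" using assms by (intro I_add I_rmult I_lmult)
  with leib have "(\<lambda>r. (D (mul f g) r - (mul (D f) g r + mul f (D g) r)) + (mul (D f) g r + mul f (D g) r)) \<in> I"
    by (rule I_add)
  thus ?thesis by simp
qed

lemma der_path_in_I:
  assumes leib: "\<And>f g. f \<in> CE \<Longrightarrow> g \<in> CE \<Longrightarrow> (\<lambda>r. D (mul f g) r - (mul (D f) g r + mul f (D g) r)) \<in> I"
    and arrw: "\<And>i l. i \<in> {1..m} \<Longrightarrow> l < len i \<Longrightarrow> D (pt (Pth i l (Suc l))) \<in> I"
    and i: "i \<in> {1..m}"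
  shows "j < k \<Longrightarrow> k \<le> len i \<Longrightarrow> D (pt (Pth i j k)) \<in> I"
proof (induction "k - j" arbitrary: k)
  case 0 thus ?case by simp
next
  case (Suc n)
  show ?case
  proof (cases n)
    case 0
    hence "k = Suc j" using Suc by simp
    thus ?thesis using arrw i Suc by simp
  next
    case (Suc n')
    obtain k' where k': "k = Suc k'" using Suc.prems by (cases k) auto
    have jk': "j < k'" using Suc.hyps(2) Suc k' by simp
    have "pt (Pth i j k) = mul (pt (Pth i j k')) (pt (Pth i k' k))"
      using i Suc.prems jk' k' by (intro pt_mul[symmetric, where m=m]) (auto simp: qmul_PP')
    moreover have "D (pt (Pth i j k')) \<in> I" using Suc.hyps(1)[of k'] Suc.prems jk' k' Suc.hyps(2) by simp
    moreover have "D (pt (Pth i k' k)) \<in> I" using arrw i Suc.prems k' by simp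
    ultimately show ?thesis using i Suc.prems jk' k' by (auto intro!: der_mul_in_I leib pt_in)
  qed
qed

lemma der_in_I_from_arrows:
  assumes add: "\<forall>f\<in>CE. \<forall>g\<in>CE. D (\<lambda>r. f r + g r) = (\<lambda>r. D f r + D g r)"
    and sm: "\<forall>c. \<forall>f\<in>CE. D (\<lambda>r. c * f r) = (\<lambda>r. c * D f r)"
    and leib: "\<And>f g. f \<in> CE \<Longrightarrow> g \<in> CE \<Longrightarrow> (\<lambda>r. D (mul f g) r - (mul (D f) g r + mul f (D g) r)) \<in> I"
    and vert: "\<And>v. v \<in> qvertices m len \<Longrightarrow> D (pt v) \<in> I"
    and arrw: "\<And>i l. i \<in> {1..m} \<Longrightarrow> l < len i \<Longrightarrow> D (pt (Pth i l (Suc l))) \<in> I"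
    and f: "f \<in> CE"
  shows "D f \<in> I"
proof -
  have ptI: "D (pt p) \<in> I" if "p \<in> P" for p
  proof (cases p)
    case (Pth i j k) thus ?thesis using that der_path_in_I[OF leib arrw] by auto
  qed (use that vert in \<open>auto simp: qpaths_def\<close>)
  have "D f = (\<lambda>r. \<Sum>p\<in>P. D (\<lambda>r. f p * pt p r) r)"
    by (subst ce_expand[OF f], rule linear_sum[OF add sm]) (auto intro: ce_smult pt_in)
  also have "\<dots> = (\<lambda>r. \<Sum>p\<in>P. f p * D (pt p) r)"
    using sm pt_in by (intro ext sum.cong refl) (metis)
  finally show ?thesis using ptI by (auto intro!: I_sum I_smult)
qed

end

locale toupie_derivation = toupie_alg +
  fixes d :: cqmap
  assumes d_Ederiv: "is_Ederiv m len (toupie_ideal m len Mon rho) d"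
begin

lemma d_add: "\<forall>f\<in>CE. \<forall>g\<in>CE. d (\<lambda>r. f r + g r) = (\<lambda>r. d f r + d g r)"
  and d_sm: "\<forall>c. \<forall>f\<in>CE. d (\<lambda>r. c * f r) = (\<lambda>r. c * d f r)"
  and d_I: "\<forall>f\<in>I. d f \<in> I"
  and d_leib: "\<forall>f\<in>CE. \<forall>g\<in>CE. (\<lambda>r. d (mul f g) r - (mul (d f) g r + mul f (d g) r)) \<in> I"
  and d_vert: "\<forall>v\<in>qvertices m len. d (pt v) \<in> I"
  and d_ce: "\<forall>f\<in>CE. d f \<in> CE"
  using d_Ederiv unfolding is_Ederiv_def by blast+

text \<open>The normal form read off from d: every arrow is scaled by its coefficient in its own
  image, and alpha^(u) is sent to the branches with the coefficients of d alpha^(u).\<close>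
definition arrow_coeff :: "nat \<Rightarrow> nat \<Rightarrow> complex" where
  "arrow_coeff i l = d (pt (Pth i l (Suc l))) (Pth i l (Suc l))"

definition path_coeff :: "qpath \<Rightarrow> complex" where
  "path_coeff r = (case r of Pth i j k \<Rightarrow> \<Sum>l\<in>{j..<k}. arrow_coeff i l | _ \<Rightarrow> 0)"

definition first_arrow_image :: "nat \<Rightarrow> nat \<Rightarrow> complex" where
  "first_arrow_image u j = d (pt (arr u)) (br j)"

definition K_off :: "nat \<Rightarrow> nat \<Rightarrow> complex" where
  "K_off u j = (if j = u then 0 else first_arrow_image u j)"

abbreviation "d_nf \<equiv> nf_der path_coeff K_off"

lemma path_coeff_simps[simp]: "path_coeff E0 = 0" "path_coeff Ew = 0" "path_coeff (Ein i j) = 0" "path_coeff (Pth i j k) = (\<Sum>l\<in>{j..<k}. arrow_coeff i l)"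
  by (auto simp: path_coeff_def)

lemma path_coeff_add: "p \<in> P \<Longrightarrow> q \<in> P \<Longrightarrow> qmul len p q = Some r \<Longrightarrow> path_coeff r = path_coeff p + path_coeff q"
proof (cases "is_triv p")
  case True
  assume "p \<in> P" "q \<in> P" "qmul len p q = Some r"
  thus ?thesis using True by (cases p; auto simp: qmul_triv_l split: if_splits)
next
  case False
  assume pq: "p \<in> P" "q \<in> P" "qmul len p q = Some r"
  then obtain i j k where p: "p = Pth i j k" using False by (auto simp: triv_iff)
  show ?thesis
  proof (cases "is_triv q")
    case True thus ?thesis using pq p by (cases q; auto simp: qmul_triv_r split: if_splits)
  next
    case False
    then obtain i' j' k' where q: "q = Pth i' j' k'" by (auto simp: triv_iff)
    hence r: "r = Pth i j k'" "i' = i" "j' = k" "j < k" "k < k'" using pq p by (auto simp: qmul_PP' split: if_splits)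
    show ?thesis using r p q by (simp add: sum.atLeastLessThan_concat)
  qed
qed

lemma d_nf_vertex: "v \<in> qvertices m len \<Longrightarrow> d_nf (pt v) = (\<lambda>r. 0)"
  by (intro ext) (cases v; auto simp: nf_der_def pt_apply)

lemma d_nf_leibniz: "d_nf (mul f g) = (\<lambda>r. mul (d_nf f) g r + mul f (d_nf g) r)"
  by (rule nf_der_leibniz) (rule path_coeff_add)

lemma path_along_arrow: "r \<in> P \<Longrightarrow> i \<in> {1..m} \<Longrightarrow> l < len i \<Longrightarrow> 2 \<le> len i \<Longrightarrow>
  qsrc len r = vpos len i l \<Longrightarrow> qtgt len r = vpos len i (Suc l) \<Longrightarrow> r = Pth i l (Suc l)"
  by (cases r) (auto simp: vpos_def split: if_splits)

lemma path_E0_Ew_branch: "r \<in> P \<Longrightarrow> qsrc len r = E0 \<Longrightarrow> qtgt len r = Ew \<Longrightarrow> \<exists>j\<in>{1..m}. r = br j"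
  by (cases r) (auto simp: vpos_def split: if_splits)

lemma d_arrow_local:
  assumes i: "i \<in> {1..m}" and l: "l < len i"
  shows "(\<lambda>r. d (pt (Pth i l (Suc l))) r - (if r \<in> P \<and> qsrc len r = vpos len i l \<and> qtgt len r = vpos len i (Suc l)
     then d (pt (Pth i l (Suc l))) r else 0)) \<in> I"
proof -
  let ?a = "Pth i l (Suc l)" and ?u = "vpos len i l" and ?w = "vpos len i (Suc l)"
  have aP: "?a \<in> P" using i l by auto
  have uV: "?u \<in> qvertices m len" and wV: "?w \<in> qvertices m len"
    using qsrc_in[OF aP] qtgt_in[OF aP] by auto
  let ?g = "d (pt ?a)"
  have gce: "?g \<in> CE" using d_ce pt_in[OF aP] by blast
  have m1: "mul (pt ?u) (pt ?a) = pt ?a" by (rule ext) (use aP uV in \<open>auto simp: cq_mul_vert_l pt_apply\<close>)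
  have m2: "mul (pt ?a) (pt ?w) = pt ?a" by (rule ext) (use aP wV in \<open>auto simp: cq_mul_vert_r pt_apply\<close>)
  have uP: "?u \<in> P" and wP: "?w \<in> P" using uV wV qvertices_sub by auto
  have "(\<lambda>r. d (mul (pt ?u) (pt ?a)) r - (mul (d (pt ?u)) (pt ?a) r + mul (pt ?u) ?g r)) \<in> I"
    using d_leib pt_in[OF uP] pt_in[OF aP] by blast
  moreover have "mul (d (pt ?u)) (pt ?a) \<in> I" using d_vert uV pt_in[OF aP] by (blast intro: I_rmult)
  ultimately have "(\<lambda>r. (?g r - (mul (d (pt ?u)) (pt ?a) r + mul (pt ?u) ?g r)) + mul (d (pt ?u)) (pt ?a) r) \<in> I"
    unfolding m1 by (rule I_add)
  hence L: "(\<lambda>r. ?g r - mul (pt ?u) ?g r) \<in> I" by simp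
  have "(\<lambda>r. d (mul (pt ?a) (pt ?w)) r - (mul (d (pt ?a)) (pt ?w) r + mul (pt ?a) (d (pt ?w)) r)) \<in> I"
    using d_leib pt_in[OF wP] pt_in[OF aP] by blast
  moreover have "mul (pt ?a) (d (pt ?w)) \<in> I" using d_vert wV pt_in[OF aP] by (blast intro: I_lmult)
  ultimately have "(\<lambda>r. (?g r - (mul ?g (pt ?w) r + mul (pt ?a) (d (pt ?w)) r)) + mul (pt ?a) (d (pt ?w)) r) \<in> I"
    unfolding m2 by (rule I_add)
  hence R: "(\<lambda>r. ?g r - mul ?g (pt ?w) r) \<in> I" by simp
  have LR: "mul (pt ?u) (\<lambda>r. ?g r - mul ?g (pt ?w) r) \<in> I" using R pt_in[OF uP] by (rule I_lmult)
  have "(\<lambda>r. (?g r - mul (pt ?u) ?g r) + mul (pt ?u) (\<lambda>r. ?g r - mul ?g (pt ?w) r) r) \<in> I"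
    using L LR by (rule I_add)
  moreover have "(\<lambda>r. (?g r - mul (pt ?u) ?g r) + mul (pt ?u) (\<lambda>r. ?g r - mul ?g (pt ?w) r) r) =
     (\<lambda>r. ?g r - (if r \<in> P \<and> qsrc len r = ?u \<and> qtgt len r = ?w then ?g r else 0))"
    using uV wV by (intro ext) (auto simp: cq_mul_vert_l cq_mul_vert_r)
  ultimately show ?thesis by simp
qed


lemma d_nf_long_arrow:
  assumes i: "i \<in> {1..m}" and l: "l < len i" and long: "2 \<le> len i"
  shows "(\<lambda>r. if r \<in> P \<and> qsrc len r = vpos len i l \<and> qtgt len r = vpos len i (Suc l)
             then d (pt (Pth i l (Suc l))) r else 0) = d_nf (pt (Pth i l (Suc l)))"
proof (rule ext)
  fix r
  let ?a = "Pth i l (Suc l)"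
  have aP: "?a \<in> P" using i l by auto
  have niA: "i \<notin> {1..a}" using long len_arr by fastforce
  have S: "(\<Sum>u\<in>{1..a}. \<Sum>j\<in>{1..m}. K_off u j * pt ?a (arr u) * pt (br j) r) = 0"
  proof -
    have z: "pt ?a (arr u) = 0" if "u \<in> {1..a}" for u using niA that by (auto simp: pt_apply)
    show ?thesis by (intro sum.neutral ballI) (simp add: z)
  qed
  have E: "d_nf (pt ?a) r = arrow_coeff i l * pt ?a r"
    by (simp only: nf_der_def S) (use aP in \<open>auto simp: pt_apply\<close>)
  show "(if r \<in> P \<and> qsrc len r = vpos len i l \<and> qtgt len r = vpos len i (Suc l) then d (pt ?a) r else 0) = d_nf (pt ?a) r"
  proof (cases "r = ?a")
    case True thus ?thesis using aP E by (simp add: arrow_coeff_def pt_apply)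
  next
    case False
    hence "\<not> (r \<in> P \<and> qsrc len r = vpos len i l \<and> qtgt len r = vpos len i (Suc l))"
      using path_along_arrow[OF _ i l long] by blast
    thus ?thesis using False E by (auto simp: pt_apply)
  qed
qed

lemma d_nf_arr:
  assumes u: "u \<in> {1..a}"
  shows "(\<lambda>r. if r \<in> P \<and> qsrc len r = E0 \<and> qtgt len r = Ew then d (pt (arr u)) r else 0) = d_nf (pt (arr u))"
proof (rule ext)
  fix r
  have ab: "arr u = br u" using arr_eq_br[OF u] .
  have sumj: "(\<Sum>j\<in>{1..m}. first_arrow_image u j * pt (br j) r) = (if \<exists>j\<in>{1..m}. r = br j then d (pt (arr u)) r else 0)"
  proof (cases "\<exists>j\<in>{1..m}. r = br j")
    case True
    then obtain j where j: "j \<in> {1..m}" "r = br j" by blast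
    show ?thesis using j by (subst sum_eq_single[where a=j]) (auto simp: pt_apply first_arrow_image_def)
  next
    case False thus ?thesis by (auto simp: pt_apply intro!: sum.neutral)
  qed
  have R: "(if r \<in> P \<and> qsrc len r = E0 \<and> qtgt len r = Ew then d (pt (arr u)) r else 0) =
      (\<Sum>j\<in>{1..m}. first_arrow_image u j * pt (br j) r)"
  proof (cases "\<exists>j\<in>{1..m}. r = br j")
    case True
    then obtain j where j: "j \<in> {1..m}" "r = br j" by blast
    have "r \<in> P" "qsrc len r = E0" "qtgt len r = Ew" using j br_P len_pos[OF j(1)] by auto
    thus ?thesis unfolding sumj using True by simp
  next
    case False
    hence "\<not> (r \<in> P \<and> qsrc len r = E0 \<and> qtgt len r = Ew)" using path_E0_Ew_branch by blast
    thus ?thesis unfolding sumj using False by auto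
  qed
  have s1: "(\<Sum>u'\<in>{1..a}. \<Sum>j\<in>{1..m}. K_off u' j * pt (arr u) (arr u') * pt (br j) r) = (\<Sum>j\<in>{1..m}. K_off u j * pt (br j) r)"
    using u by (subst sum_eq_single[where a=u]) (auto simp: pt_apply)
  have s2: "(\<Sum>j\<in>{1..m}. first_arrow_image u j * pt (br j) r) = (\<Sum>j\<in>{1..m}. K_off u j * pt (br j) r) + first_arrow_image u u * pt (br u) r"
  proof -
    have "(\<Sum>j\<in>{1..m}. first_arrow_image u j * pt (br j) r) = (\<Sum>j\<in>{1..m}. K_off u j * pt (br j) r + (if j = u then first_arrow_image u u * pt (br u) r else 0))"
      by (intro sum.cong refl) (auto simp: K_off_def)
    thus ?thesis using Z_sub[OF u] by (simp add: sum.distrib)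
  qed
  have "path_coeff (arr u) = arrow_coeff u 0" by (simp add: One_nat_def)
  also have "\<dots> = first_arrow_image u u" unfolding arrow_coeff_def first_arrow_image_def using ab by (simp add: One_nat_def)
  finally have "(if r \<in> P then path_coeff r * pt (arr u) r else 0) = first_arrow_image u u * pt (br u) r"
    using ab arr_P[OF u] by (auto simp: pt_apply)
  thus "(if r \<in> P \<and> qsrc len r = E0 \<and> qtgt len r = Ew then d (pt (arr u)) r else 0) = d_nf (pt (arr u)) r"
    unfolding R nf_der_def s1 s2 by simp
qed

lemma d_nf_arrow:
  assumes i: "i \<in> {1..m}" and l: "l < len i"
  shows "(\<lambda>r. d (pt (Pth i l (Suc l))) r - d_nf (pt (Pth i l (Suc l))) r) \<in> I"
proof -
  have "(\<lambda>r. if r \<in> P \<and> qsrc len r = vpos len i l \<and> qtgt len r = vpos len i (Suc l)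
             then d (pt (Pth i l (Suc l))) r else 0) = d_nf (pt (Pth i l (Suc l)))"
  proof (cases "2 \<le> len i")
    case True thus ?thesis by (rule d_nf_long_arrow[OF i l])
  next
    case False
    hence li: "len i = 1" using len_ge1[OF i] by simp
    hence iA: "i \<in> {1..a}" "l = 0" using len1_iff[OF i] i l by auto
    have "Pth i l (Suc l) = arr i" "vpos len i l = E0" "vpos len i (Suc l) = Ew"
      using iA li by (auto simp: vpos_def One_nat_def)
    thus ?thesis using d_nf_arr[OF iA(1)] by (simp only: cong: if_cong)
  qed
  from this[symmetric] show ?thesis using d_arrow_local[OF i l] by simp
qed

lemma d_nf_mod_I: "f \<in> CE \<Longrightarrow> (\<lambda>r. d f r - d_nf f r) \<in> I"
proof (rule der_in_I_from_arrows[where D="\<lambda>f r. d f r - d_nf f r"])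
  show "\<forall>f\<in>CE. \<forall>g\<in>CE. (\<lambda>r. d (\<lambda>r. f r + g r) r - d_nf (\<lambda>r. f r + g r) r) = (\<lambda>r. (d f r - d_nf f r) + (d g r - d_nf g r))"
    using d_add by (auto simp: nf_der_def algebra_simps sum.distrib)
  show "\<forall>c. \<forall>f\<in>CE. (\<lambda>r. d (\<lambda>r. c * f r) r - d_nf (\<lambda>r. c * f r) r) = (\<lambda>r. c * (d f r - d_nf f r))"
    using d_sm by (auto simp: nf_der_def algebra_simps sum_distrib_left)
next
  fix f g assume f: "f \<in> CE" and g: "g \<in> CE"
  have "(\<lambda>r. (d (mul f g) r - d_nf (mul f g) r) - (mul (\<lambda>r. d f r - d_nf f r) g r + mul f (\<lambda>r. d g r - d_nf g r) r))
      = (\<lambda>r. d (mul f g) r - (mul (d f) g r + mul f (d g) r))"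
    by (simp add: cq_mul_diff_l cq_mul_diff_r d_nf_leibniz, simp add: algebra_simps)
  thus "(\<lambda>r. (d (mul f g) r - d_nf (mul f g) r) - (mul (\<lambda>r. d f r - d_nf f r) g r + mul f (\<lambda>r. d g r - d_nf g r) r)) \<in> I"
    using d_leib f g by simp
next
  fix v assume "v \<in> qvertices m len"
  thus "(\<lambda>r. d (pt v) r - d_nf (pt v) r) \<in> I" using d_vert by (simp add: d_nf_vertex)
next
  fix i l assume "i \<in> {1..m}" "l < len i"
  thus "(\<lambda>r. d (pt (Pth i l (Suc l))) r - d_nf (pt (Pth i l (Suc l))) r) \<in> I" by (rule d_nf_arrow)
qed


definition branch_coeff :: "nat \<Rightarrow> complex" where "branch_coeff i = path_coeff (br i)"

lemma rel_support_notZ: "t < length rho \<Longrightarrow> u \<in> {1..a} \<Longrightarrow> (rho ! t) u = 0"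
  using rel_support[OF nth_mem, of t u] len_arr[of u] by fastforce

text \<open>d_nf maps the relation rho_t into I and scales each of its branches by the branch
  weight; subtracting the pivot weight times rho_t leaves an element of I supported on
  monomial-free non-pivot branches, which must vanish.\<close>
lemma branch_coeff_rel:
  assumes t: "t < length rho" and j: "(rho ! t) j \<noteq> 0"
  shows "branch_coeff j = branch_coeff (piv (rho ! t))"
proof -
  let ?k = "piv (rho ! t)"
  let ?\<rho> = "branchvec m len (rho ! t)"
  have \<rho>I: "?\<rho> \<in> I" unfolding toupie_ideal_def using t by (intro gen_ideal.gen) auto
  have \<rho>ce: "?\<rho> \<in> CE" using I_ce[OF \<rho>I] .
  have "d ?\<rho> \<in> I" using d_I \<rho>I by blast
  moreover have "(\<lambda>r. d ?\<rho> r - d_nf ?\<rho> r) \<in> I" using d_nf_mod_I[OF \<rho>ce] .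
  ultimately have "(\<lambda>r. d ?\<rho> r - (d ?\<rho> r - d_nf ?\<rho> r)) \<in> I" by (rule I_diff)
  hence eI: "d_nf ?\<rho> \<in> I" by simp
  have ez: "?\<rho> (arr u) = 0" if "u \<in> {1..a}" for u
    using that arr_eq_br[OF that] branchvec_br[OF Z_sub[OF that]] rel_support_notZ[OF t that] by simp
  have d_nf\<rho>: "d_nf ?\<rho> r = (if r \<in> P then path_coeff r * ?\<rho> r else 0)" for r
    by (simp add: nf_der_def ez)
  let ?g = "\<lambda>r. d_nf ?\<rho> r - branch_coeff ?k * ?\<rho> r"
  have gI: "?g \<in> I" using eI I_smult[OF \<rho>I, of "branch_coeff ?k"] by (rule I_diff)
  have g: "?g r = (if r \<in> P then (path_coeff r - branch_coeff ?k) * ?\<rho> r else 0)" for r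
    using branch_supported_out[OF branch_supported_branchvec] by (auto simp: d_nf\<rho> algebra_simps)
  have g0: "?g = (\<lambda>r. 0)"
  proof (rule I_nonpiv_zero[OF gI])
    fix r assume nz: "?g r \<noteq> 0"
    hence rP: "r \<in> P" and nz2: "(path_coeff r - branch_coeff ?k) * ?\<rho> r \<noteq> 0" using g[of r] by (auto split: if_splits)
    then obtain j' where j': "j' \<in> {1..m}" "r = br j'" "(rho ! t) j' \<noteq> 0" using branchvec_nonzero by (metis mult_zero_right)
    have "j' \<noteq> ?k" using nz2 j' by (auto simp: branch_coeff_def)
    moreover have "\<not> has_mon Mon j'" using rel_support[OF nth_mem[OF t] j'(3)] by blast
    moreover have "j' \<notin> piv ` set rho" using rel_support_nonpiv[OF t j'(3) calculation(1)] .
    ultimately show "\<exists>j\<in>{1..m}. r = br j \<and> \<not> has_mon Mon j \<and> j \<notin> piv ` set rho" using j' by blast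
  qed
  have jm: "j \<in> {1..m}" using rel_support[OF nth_mem[OF t] j] by blast
  have "?g (br j) = (branch_coeff j - branch_coeff ?k) * (rho ! t) j"
    using g[of "br j"] br_P[OF jm] branchvec_br[OF jm] by (simp add: branch_coeff_def)
  hence "(branch_coeff j - branch_coeff ?k) * (rho ! t) j = 0" using g0 by metis
  thus ?thesis using j by simp
qed

lemma branch_coeff_edge: "edge i i' \<Longrightarrow> branch_coeff i = branch_coeff i'"
proof -
  assume "edge i i'"
  then obtain b where b: "b \<in> set rho" "b i \<noteq> 0" "b i' \<noteq> 0" unfolding qrho_edge_def by blast
  then obtain t where t: "t < length rho" "b = rho ! t" by (auto simp: in_set_conv_nth)
  show ?thesis using branch_coeff_rel[OF t(1)] b t by metis
qed

lemma branch_coeff_path: "edge\<^sup>*\<^sup>* i i' \<Longrightarrow> branch_coeff i = branch_coeff i'"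
  by (induction rule: rtranclp_induct) (auto dest: branch_coeff_edge)

lemma branch_coeff_comp: "C \<in> comps \<Longrightarrow> i \<in> C \<Longrightarrow> i' \<in> C \<Longrightarrow> branch_coeff i = branch_coeff i'"
proof -
  assume "C \<in> comps" "i \<in> C" "i' \<in> C"
  then obtain i0 where "edge\<^sup>*\<^sup>* i0 i" "edge\<^sup>*\<^sup>* i0 i'" using comps_mem by blast
  thus ?thesis using branch_coeff_path by metis
qed


text \<open>Adding the inner derivation of the potential to d_nf leaves on branch i only the weight
  branch_coeff i - mean_coeff, carried by its first arrow. The branches in Vq, Ms and Z then give
  the parts in L, in the span of the y_i and in sl_a; the components of alpha^(u) along pivot
  branches are traded, modulo the relations, for components along the branches in Bs.\<close>
definition mean_coeff :: complex where "mean_coeff = (\<Sum>i\<in>{1..a}. branch_coeff i) / of_nat a"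

definition potential :: "qpath \<Rightarrow> complex" where
  "potential v = (case v of E0 \<Rightarrow> mean_coeff | Ein i j \<Rightarrow> path_coeff (Pth i j (len i)) | _ \<Rightarrow> 0)"

definition weight_L :: "nat \<Rightarrow> complex" where "weight_L i = (if i \<in> Vq then branch_coeff i - mean_coeff else 0)"
definition weight_C :: "nat \<Rightarrow> complex" where "weight_C i = (if i \<in> Ms then branch_coeff i - mean_coeff else 0)"
definition M_sl :: "nat \<Rightarrow> nat \<Rightarrow> complex" where
  "M_sl q p = (if p \<in> {1..a} \<and> q \<in> {1..a} then (if p = q then branch_coeff p - mean_coeff else first_arrow_image p q) else 0)"
definition arrows_L_coeff :: "nat \<Rightarrow> nat \<Rightarrow> complex" where
  "arrows_L_coeff u s = first_arrow_image u s - (\<Sum>t<length rho. first_arrow_image u (piv (rho ! t)) * (rho ! t) s)"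
definition arrows_L :: "nat \<Rightarrow> nat \<Rightarrow> complex" where "arrows_L u s = (if s \<in> Bs then arrows_L_coeff u s else 0)"

lemma witness_in_Lspan: "nf_der (branch_weight weight_L) arrows_L \<in> dspan (Lgens m len a Mon rho)"
  by (rule nf_der_in_Lspan) (auto simp: weight_L_def arrows_L_def split: if_splits dest: branch_coeff_comp comps_sub)

lemma witness_in_Cspan: "nf_der (branch_weight weight_C) (\<lambda>u j. 0) \<in> dspan (ygens m len Mon)"
  by (rule nf_der_in_Cspan) (auto simp: weight_C_def split: if_splits)

lemma M_sl_in_sl: "0 < a \<Longrightarrow> M_sl \<in> sl a"
proof -
  assume a0: "0 < a"
  have "(\<Sum>j\<in>{1..a}. M_sl j j) = (\<Sum>j\<in>{1..a}. branch_coeff j) - of_nat a * mean_coeff"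
    by (simp add: M_sl_def sum_subtractf)
  also have "\<dots> = 0" using a0 by (simp add: mean_coeff_def)
  finally show ?thesis unfolding sl_def by (auto simp: M_sl_def)
qed

lemma potential_simps[simp]: "potential E0 = mean_coeff" "potential Ew = 0" by (auto simp: potential_def)

lemma potential_vpos: "i \<in> {1..m} \<Longrightarrow> x \<le> len i \<Longrightarrow>
  potential (vpos len i x) = (if x = 0 then mean_coeff else (\<Sum>l\<in>{x..<len i}. arrow_coeff i l))"
  by (auto simp: potential_def vpos_def)

lemma path_coeff_potential:
  assumes r: "r \<in> P" and weight_total: "\<And>i. i \<in> {1..m} \<Longrightarrow> weight_total i = branch_coeff i - mean_coeff"
  shows "path_coeff r - branch_weight weight_total r = potential (qsrc len r) - potential (qtgt len r)"
proof (cases r)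
  case (Pth i j k)
  have ijk: "i \<in> {1..m}" "j < k" "k \<le> len i" using r Pth by auto
  have branch_sum: "branch_coeff i = (\<Sum>l\<in>{0..<len i}. arrow_coeff i l)" by (simp add: branch_coeff_def)
  show ?thesis
  proof (cases "j = 0")
    case True
    have "(\<Sum>l\<in>{0..<len i}. arrow_coeff i l) = (\<Sum>l\<in>{0..<k}. arrow_coeff i l) + (\<Sum>l\<in>{k..<len i}. arrow_coeff i l)"
      using ijk by (simp add: sum.atLeastLessThan_concat)
    thus ?thesis using Pth True ijk weight_total[OF ijk(1)] branch_sum by (simp add: potential_vpos)
  next
    case False
    have "(\<Sum>l\<in>{j..<len i}. arrow_coeff i l) = (\<Sum>l\<in>{j..<k}. arrow_coeff i l) + (\<Sum>l\<in>{k..<len i}. arrow_coeff i l)"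
      using ijk by (simp add: sum.atLeastLessThan_concat)
    thus ?thesis using Pth False ijk by (simp add: potential_vpos)
  qed
qed (use r in \<open>auto simp: qpaths_def qvertices_def\<close>)


definition arrows_total :: "nat \<Rightarrow> nat \<Rightarrow> complex" where
  "arrows_total u j = (if j = u then 0 else arrows_L u j + (if j \<in> {1..a} then M_sl j u else 0))"

definition weight_total :: "nat \<Rightarrow> complex" where
  "weight_total i = weight_L i + weight_C i + (if i \<in> {1..a} then branch_coeff i - mean_coeff else 0)"

lemma weight_total_eq: "i \<in> {1..m} \<Longrightarrow> weight_total i = branch_coeff i - mean_coeff"
proof -
  assume i: "i \<in> {1..m}"
  show ?thesis
  proof (cases "i \<in> {1..a}")
    case True
    thus ?thesis using V_notZ Ms_notZ by (auto simp: weight_total_def weight_L_def weight_C_def)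
  next
    case False
    hence "len i \<noteq> 1" using len1_iff[OF i] i by auto
    hence l2: "2 \<le> len i" using len_ge1[OF i] by linarith
    show ?thesis
    proof (cases "has_mon Mon i")
      case True
      hence "i \<in> Ms" "i \<notin> Vq" using i V_notM by auto
      hence "weight_L i = 0" "weight_C i = branch_coeff i - mean_coeff" by (auto simp: weight_L_def weight_C_def)
      thus ?thesis using False by (auto simp: weight_total_def)
    next
      case F2: False
      hence "i \<notin> Ms" "i \<in> Vq" using i l2 unfolding qrho_verts_def by auto
      hence "weight_L i = branch_coeff i - mean_coeff" "weight_C i = 0" by (auto simp: weight_L_def weight_C_def)
      thus ?thesis using False by (auto simp: weight_total_def)
    qed
  qed
qed

lemma witness_sum: "0 < a \<Longrightarrow> dadd (nf_der (branch_weight weight_L) arrows_L) (dadd (nf_der (branch_weight weight_C) (\<lambda>u j. 0)) (sl_to_hh m len a M_sl)) = nf_der (branch_weight weight_total) arrows_total"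
proof -
  assume a0: "0 < a"
  have "dadd (nf_der (branch_weight weight_L) arrows_L) (dadd (nf_der (branch_weight weight_C) (\<lambda>u j. 0)) (sl_to_hh m len a M_sl)) =
     nf_der (\<lambda>r. branch_weight weight_L r + (branch_weight weight_C r + 0)) (\<lambda>u j. arrows_L u j + (0 + (if j \<in> {1..a} then M_sl j u else 0)))"
    by (simp only: sl_to_hh_nf[OF M_sl_in_sl[OF a0] a0] dadd_nf_der)
  also have "\<dots> = nf_der (branch_weight weight_total) arrows_total"
  proof (subst nf_der_move_diagonal, rule nf_der_cong)
    fix r assume "r \<in> P"
    have KLd: "arrows_L i i = 0" if "i \<in> {1..a}" for i using that B_notZ by (auto simp: arrows_L_def)
    show "branch_weight weight_L r + (branch_weight weight_C r + 0) + branch_weight (\<lambda>i. if i \<in> {1..a} then arrows_L i i + (0 + (if i \<in> {1..a} then M_sl i i else 0)) else 0) r = branch_weight weight_total r"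
      by (cases r) (auto simp: weight_total_def KLd M_sl_def)
  qed (simp add: arrows_total_def)
  finally show ?thesis .
qed

lemma witness_off_diag_coeff:
  assumes u: "u \<in> {1..a}" and j: "j \<in> {1..m}" "\<not> has_mon Mon j"
  shows "K_off u j - arrows_total u j = (\<Sum>t<length rho. first_arrow_image u (piv (rho ! t)) * (rho ! t) j)"
proof (cases "j \<in> {1..a}")
  case True
  have "K_off u j - arrows_total u j = 0"
    using True B_notZ u by (auto simp: K_off_def arrows_total_def arrows_L_def M_sl_def)
  moreover have "(\<Sum>t<length rho. first_arrow_image u (piv (rho ! t)) * (rho ! t) j) = 0"
    using rel_support_notZ True by (intro sum.neutral ballI) auto
  ultimately show ?thesis by simp
next
  case False
  have ju: "j \<noteq> u" using False u by blast
  show ?thesis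
  proof (cases "j \<in> Bs")
    case True
    thus ?thesis using ju False by (auto simp: K_off_def arrows_total_def arrows_L_def arrows_L_coeff_def)
  next
    case notB: False
    have "len j \<noteq> 1" using len1_iff[OF j(1)] j(1) False by auto
    hence "2 \<le> len j" using len_ge1[OF j(1)] by linarith
    hence "j \<in> piv ` set rho" using notB j unfolding B0w_def by blast
    then obtain t0 where t0: "t0 < length rho" "j = piv (rho ! t0)" by (auto simp: in_set_conv_nth)
    have "arrows_L u j = 0" using notB by (auto simp: arrows_L_def)
    hence "K_off u j - arrows_total u j = first_arrow_image u j"
      using ju False by (auto simp: K_off_def arrows_total_def)
    moreover have "rel_comb (\<lambda>t. first_arrow_image u (piv (rho ! t))) (br j) = first_arrow_image u j"
      using rel_comb_piv[OF t0(1)] t0 by simp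
    ultimately show ?thesis using rel_comb_branch[OF j(1)] by simp
  qed
qed

lemma witness_off_diag_I:
  assumes u: "u \<in> {1..a}"
  shows "(\<lambda>r. \<Sum>j\<in>{1..m}. (K_off u j - arrows_total u j) * pt (br j) r) \<in> I"
proof -
  let ?V = "\<lambda>r. \<Sum>j\<in>{1..m}. (K_off u j - arrows_total u j) * pt (br j) r"
  let ?\<kappa> = "\<lambda>t. first_arrow_image u (piv (rho ! t))"
  have bs: "branch_supported ?V" by (intro branch_supported_sum branch_supported_smult branch_supported_pt) auto
  have "?V r = rel_comb ?\<kappa> r" if nk: "\<not> has_mon_subpath r" for r
  proof (cases "\<exists>j\<in>{1..m}. r = br j")
    case True
    then obtain j0 where j0: "j0 \<in> {1..m}" "r = br j0" by blast
    have "\<not> has_mon Mon j0" using nk j0 has_mon_subpath_branch by simp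
    moreover have "?V r = K_off u j0 - arrows_total u j0"
      using j0 by (subst sum_eq_single[where a=j0]) (auto simp: pt_apply)
    ultimately show ?thesis using witness_off_diag_coeff[OF u j0(1)] j0 rel_comb_branch by simp
  next
    case False
    have "?V r = 0" using False by (intro sum.neutral ballI) (auto simp: pt_apply)
    moreover have "rel_comb ?\<kappa> r = 0" using rel_comb_branch_supported False unfolding branch_supported_def by blast
    ultimately show ?thesis by simp
  qed
  hence "?V \<in> I_explicit" unfolding I_explicit_def using branch_supported_ce[OF bs] by blast
  thus ?thesis using I_explicit_subset by blast
qed

lemma d_hh_eq_witness: "hh_eq m len I d (nf_der (branch_weight weight_total) arrows_total)"
  unfolding hh_eq_def
proof (rule hh_zero_if_inner[where \<phi>=potential])
  fix f assume f: "f \<in> CE"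
  have w: "(if r \<in> P then (path_coeff r - branch_weight weight_total r) * f r else 0) = (if r \<in> P then (potential (qsrc len r) - potential (qtgt len r)) * f r else 0)" for r
    using path_coeff_potential[OF _ weight_total_eq] by auto
  have eT: "d_nf f r - nf_der (branch_weight weight_total) arrows_total f r = (if r \<in> P then (path_coeff r - branch_weight weight_total r) * f r else 0) + (\<Sum>u\<in>{1..a}. f (arr u) * (\<Sum>j\<in>{1..m}. (K_off u j - arrows_total u j) * pt (br j) r))" for r
    by (simp add: nf_der_def sum_subtractf sum_distrib_left algebra_simps)
  have "(\<lambda>r. (d f r - d_nf f r) + (\<Sum>u\<in>{1..a}. f (arr u) * (\<Sum>j\<in>{1..m}. (K_off u j - arrows_total u j) * pt (br j) r))) \<in> I"
    using d_nf_mod_I[OF f] by (rule I_add) (intro I_sum I_smult witness_off_diag_I, auto)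
  moreover have "(\<lambda>r. (d f r - d_nf f r) + (\<Sum>u\<in>{1..a}. f (arr u) * (\<Sum>j\<in>{1..m}. (K_off u j - arrows_total u j) * pt (br j) r))) =
    (\<lambda>r. (d f r - nf_der (branch_weight weight_total) arrows_total f r) - (if r \<in> P then (potential (qsrc len r) - potential (qtgt len r)) * f r else 0))"
  proof (rule ext)
    fix r show "(d f r - d_nf f r) + (\<Sum>u\<in>{1..a}. f (arr u) * (\<Sum>j\<in>{1..m}. (K_off u j - arrows_total u j) * pt (br j) r)) =
      (d f r - nf_der (branch_weight weight_total) arrows_total f r) - (if r \<in> P then (potential (qsrc len r) - potential (qtgt len r)) * f r else 0)"
      using eT[of r] w[of r] by (simp add: algebra_simps)
  qed
  ultimately show "(\<lambda>r. (d f r - nf_der (branch_weight weight_total) arrows_total f r) - (if r \<in> P then (potential (qsrc len r) - potential (qtgt len r)) * f r else 0)) \<in> I"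
    by simp
qed

lemma d_hh_decomposition: "0 < a \<Longrightarrow> \<exists>l\<in>dspan (Lgens m len a Mon rho). \<exists>c\<in>dspan (ygens m len Mon). \<exists>s\<in>dspan (slgens m len a).
   hh_eq m len I d (dadd l (dadd c s))"
  using d_hh_eq_witness witness_sum witness_in_Lspan witness_in_Cspan sl_to_hh_in_Sspan by metis

end


context toupie_alg
begin

lemma Ederiv_hh_decomposition:
  assumes a0: "0 < a" and d: "is_Ederiv m len I d"
  shows "\<exists>l\<in>dspan (Lgens m len a Mon rho). \<exists>c\<in>dspan (ygens m len Mon). \<exists>s\<in>dspan (slgens m len a).
           hh_eq m len I d (dadd l (dadd c s))"
proof -
  interpret toupie_derivation m len a Mon rho d
    by (simp add: toupie_derivation_def toupie_derivation_axioms_def toupie_alg_def toupie d)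
  show ?thesis by (rule d_hh_decomposition[OF a0])
qed

end


theorem corollary6p7:
  fixes m a :: nat and len :: "nat \<Rightarrow> nat" and Mon :: "qpath set"
    and rho :: "(nat \<Rightarrow> complex) list"
  defines "I \<equiv> toupie_ideal m len Mon rho"
  defines "Der \<equiv> {d. is_Ederiv m len I d}"
  defines "L \<equiv> dspan (Lgens m len a Mon rho)"
  defines "C \<equiv> dspan (ygens m len Mon)"
  defines "S \<equiv> dspan (slgens m len a)"
  assumes toupie: "toupie m len a Mon rho"
    and a_pos: "a > 0"
    and D_gt: "dim_e0Aw m len I > 1"
  shows
    \<comment> \<open>the distinguished classes are derivations of A vanishing on E\<close>
    "Lgens m len a Mon rho \<union> ygens m len Mon \<union> slgens m len a \<subseteq> Der
     \<comment> \<open>HH^1 = L + <C''_1> + sl_a (as vector spaces)\<close>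
     \<and> (\<forall>d\<in>Der. \<exists>l\<in>L. \<exists>c\<in>C. \<exists>s\<in>S. hh_eq m len I d (dadd l (dadd c s)))
     \<comment> \<open>the sum is direct\<close>
     \<and> (\<forall>l\<in>L. \<forall>c\<in>C. \<forall>s\<in>S. hh_zero m len I (dadd l (dadd c s)) \<longrightarrow>
           hh_zero m len I l \<and> hh_zero m len I c \<and> hh_zero m len I s)
     \<comment> \<open>L and <C''_1> are Lie subalgebras which commute (direct sum of Lie algebras)\<close>
     \<and> (\<forall>l\<in>L. \<forall>l'\<in>L. \<exists>l''\<in>L. hh_eq m len I (dbracket l l') l'')
     \<and> (\<forall>c\<in>C. \<forall>c'\<in>C. \<exists>c''\<in>C. hh_eq m len I (dbracket c c') c'')
     \<and> (\<forall>l\<in>L. \<forall>c\<in>C. hh_zero m len I (dbracket l c))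
     \<comment> \<open>L + <C''_1> is an ideal (semidirect product)\<close>
     \<and> (\<forall>s\<in>S. \<forall>l\<in>L. \<forall>c\<in>C. \<exists>l'\<in>L. \<exists>c'\<in>C.
           hh_eq m len I (dbracket s (dadd l c)) (dadd l' c'))
     \<comment> \<open>the span of the x_j, w_pq is identified with sl_a(C)\<close>
     \<and> (\<forall>s\<in>S. \<exists>M\<in>sl a. hh_eq m len I s (sl_to_hh m len a M))
     \<and> (\<forall>M\<in>sl a. \<forall>N\<in>sl a. hh_eq m len I (sl_to_hh m len a (mat_bracket a M N))
                            (dbracket (sl_to_hh m len a M) (sl_to_hh m len a N)))
     \<and> (\<forall>M\<in>sl a. hh_zero m len I (sl_to_hh m len a M) \<longrightarrow> M = (\<lambda>q p. 0))"
proof -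
  interpret toupie_alg m len a Mon rho using toupie by unfold_locales
  show ?thesis
    unfolding Der_def L_def C_def S_def I_def
    apply (intro conjI)
    subgoal by (rule generators_Ederiv)
    subgoal using Ederiv_hh_decomposition[OF a_pos] by blast
    subgoal using hh_zero_sum_components[OF a_pos] by blast
    subgoal using Lspan_bracket hh_eq_refl by blast
    subgoal using Cspan_bracket_hh by blast
    subgoal using Lspan_Cspan_bracket hh_zero_zero by simp
    subgoal using Sspan_bracket_LC_hh by blast
    subgoal using Sspan_sl[OF _ a_pos] by blast
    subgoal using sl_to_hh_bracket[OF _ _ a_pos] by blast
    subgoal using sl_to_hh_inj[OF _ a_pos] by blast
    done
qed

end
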